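(* Let $A',A''$ be dg algebras over $k$. As operators $\overline{\mathsf{C}}(A')\otimes\overline{\mathsf{C}}(A'')\to\overline{\mathsf{C}}(A'\otimes A'')$ one has $b(\delta)H+H(b(\delta)\otimes1+1\otimes b(\delta))=0$ and $BH+H(B\otimes1+1\otimes B)=0$; consequently $$(b+uB)H+H\big((b+uB)\otimes1+1\otimes(b+uB)\big)=b(\mu)H+H\big(b(\mu)\otimes1+1\otimes b(\mu)\big).$$
   Context: Fix a field $k$ of characteristic $0$. All vector spaces are $\mathbb{Z}/2$-graded and the Koszul sign rule is used throughout; $|v|$ denotes the parity of $v$, $\Pi V$ denotes $V$ with reversed parity, and $|\Pi a|=|a|+1$. A dg algebra is a unital $\mathbb{Z}/2$-graded associative $k$-algebra $A$ with an odd derivation $d$ with $d^2=0$. Put $\mathsf{C}(A)=\bigoplus_{n\ge0}A\otimes(\Pi A)^{\otimes n}$, with elements written $a_0[a_1|\dots|a_n]$. On the summand $A\otimes(\Pi A)^{\otimes n}$ define: $\tau(a_0[a_1|\dots|a_n])=(-1)^{|\Pi a_0|\sum_{i=1}^n|\Pi a_i|}a_1[a_2|\dots|a_n|a_0]$; $\delta^{(0)}(a_0[a_1|\dots|a_n])=da_0[a_1|\dots|a_n]$; $\mu^{(0)}(a_0[a_1|\dots|a_n])=0$ if $n=0$ and $=(-1)^{|a_0|}a_0a_1[a_2|\dots|a_n]$ if $n\ge1$; $\delta^{(i)}=\tau^{-i}\delta^{(0)}\tau^{i}$, $\mu^{(i)}=\tau^{-i}\mu^{(0)}\tau^{i}$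 for $1\le i\le n$; $b(\delta)=\sum_{i=0}^n\delta^{(i)}$, $b(\mu)=\sum_{i=0}^n\mu^{(i)}$, $b=b(\delta)+b(\mu)$ (Hochschild differential); $N=\sum_{i=0}^n\tau^i$, $h(a_0[a_1|\dots|a_n])=1[a_0|a_1|\dots|a_n]$, $B=(1-\tau^{-1})hN$. Let $\mathsf{C}'(A)\subset\mathsf{C}(A)$ be spanned by the $a_0[a_1|\dots|a_n]$ with at least one of $a_1,\dots,a_n$ equal to $1$; it is preserved by $b$ and $B$, and the normalized complex is $\overline{\mathsf{C}}(A)=\mathsf{C}(A)/\mathsf{C}'(A)=\bigoplus_{n\ge0}A\otimes(\Pi\overline{A})^{\otimes n}$, $\overline{A}=A/k\cdot1$, with the induced $b$ and $B$ (on the quotient $B=hN$). $u$ is an even formal variable. For dg algebras $A',A''$, $A'\otimes A''$ is the tensor product dg algebra; write $a'$ for $a'\otimes1$, $a''$ for $1\otimes a''$, and $\mathbf{1}=1\otimes1$. For operators $X,Y$, $(X\otimes Y)(x\otimes y)=(-1)^{|Y||x|}Xx\otimes Yy$. For $0\le r\le n$, $0\le s\le m$ define $\mathbf{sh}^{(r,s)}(a'_0[a'_1|\dots|a'_n]\otimes a''_0[a''_1|\dots|a''_m])=(-1)^{**}\mathbf{1}\,sh^{(r,s)}[a'_0|\dots|a'_n|a''_0|\dots|a''_m]$, where $**=|a'_0|+\sum_{i=1}^n|\Pi a'_i|$ and $sh^{(r,s)}$ is the signed sum over those $(n+1,m+1)$-shuffles (permutations preserving the relative orders of the $a'$-entries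 and of the $a''$-entries) in which $a'_r$ stays to the left of $a''_s$, the sign computed by the rule that an adjacent transposition $[\dots|x|y|\dots]\to[\dots|y|x|\dots]$ contributes $(-1)^{(|x|+1)(|y|+1)}$. The odd operator $H:\overline{\mathsf{C}}(A')\otimes\overline{\mathsf{C}}(A'')\to\overline{\mathsf{C}}(A'\otimes A'')$ is defined on $(A'\otimes(\Pi\overline{A'})^{\otimes n})\otimes(A''\otimes(\Pi\overline{A''})^{\otimes m})$ by $$H=\sum_{i=1}^n\sum_{r=0}^{n-i}\sum_{s=0}^m\mathbf{sh}^{(r,s)}(\tau^{-r}\delta^{(i)}\otimes\tau^{-s})+\sum_{i=1}^m\sum_{r=0}^n\sum_{s=0}^{m-i}\mathbf{sh}^{(r,s)}(\tau^{-r}\otimes\tau^{-s}\delta^{(i)}).$$ *)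

theory Defs
  imports Main "HOL.Vector_Spaces" "HOL-Library.Function_Algebras"
begin

text \<open>A dg algebra: the ring structure is the type class ring_1 on 'a, the k-linear
structure is the scalar action dsc, the Z/2-grading is given by the even and odd
subspaces, and ddif is the odd differential.\<close>

record ('k, 'a) dga =
  dsc  :: "'k \<Rightarrow> 'a \<Rightarrow> 'a"
  dev  :: "'a set"
  dodd :: "'a set"
  ddif :: "'a \<Rightarrow> 'a"

definition is_dga :: "('k::field, 'a::ring_1) dga \<Rightarrow> bool" where
  "is_dga D \<longleftrightarrow>
     vector_space (dsc D) \<and>
     (\<forall>c x y. dsc D c (x * y) = dsc D c x * y \<and> dsc D c (x * y) = x * dsc D c y) \<and>
     module.subspace (dsc D) (dev D) \<and> module.subspace (dsc D) (dodd D) \<and>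
     dev D \<inter> dodd D = {0} \<and> (\<forall>z. \<exists>x\<in>dev D. \<exists>y\<in>dodd D. z = x + y) \<and>
     1 \<in> dev D \<and>
     (\<forall>x\<in>dev D. \<forall>y\<in>dev D. x * y \<in> dev D) \<and>
     (\<forall>x\<in>dev D. \<forall>y\<in>dodd D. x * y \<in> dodd D) \<and>
     (\<forall>x\<in>dodd D. \<forall>y\<in>dev D. x * y \<in> dodd D) \<and>
     (\<forall>x\<in>dodd D. \<forall>y\<in>dodd D. x * y \<in> dev D) \<and>
     Vector_Spaces.linear (dsc D) (dsc D) (ddif D) \<and>
     ddif D ` dev D \<subseteq> dodd D \<and> ddif D ` dodd D \<subseteq> dev D \<and>
     (\<forall>x. ddif D (ddif D x) = 0) \<and>
     (\<forall>x\<in>dev D. \<forall>y. ddif D (x * y) = ddif D x * y + x * ddif D y) \<and>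
     (\<forall>x\<in>dodd D. \<forall>y. ddif D (x * y) = ddif D x * y - x * ddif D y)"

definition homog :: "('k, 'a) dga \<Rightarrow> 'a set" where
  "homog D = dev D \<union> dodd D"

definition dg :: "('k, 'a) dga \<Rightarrow> 'a \<Rightarrow> nat" where
  "dg D x = (if x \<in> dodd D then 1 else 0)"

text \<open>A formal sum is a finite list of (coefficient, pure tensor) pairs; operators are
given on pure tensors with homogeneous entries and extended linearly.\<close>

definition fsmap :: "('w \<Rightarrow> ('k::comm_ring_1 \<times> 'v) list) \<Rightarrow> ('k \<times> 'w) list \<Rightarrow> ('k \<times> 'v) list" where
  "fsmap f c = concat (map (\<lambda>(a, w). map (\<lambda>(b, v). (a * b, v)) (f w)) c)"

definition fsneg :: "('k::comm_ring_1 \<times> 'w) list \<Rightarrow> ('k \<times> 'w) list" where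
  "fsneg c = map (\<lambda>(a, w). (- a, w)) c"

definition idop :: "'w \<Rightarrow> ('k::comm_ring_1 \<times> 'w) list" where
  "idop w = [(1, w)]"

definition opow :: "('w \<Rightarrow> ('k::comm_ring_1 \<times> 'w) list) \<Rightarrow> nat \<Rightarrow> 'w \<Rightarrow> ('k \<times> 'w) list" where
  "opow f i w = (fsmap f ^^ i) [(1, w)]"

definition lcf :: "('k::comm_ring_1 \<times> 'w) list \<Rightarrow> 'w \<Rightarrow> 'k" where
  "lcf c = (\<lambda>w. \<Sum>(a, v)\<leftarrow>c. if v = w then a else 0)"

text \<open>An entry structure: parity, differential, product and unit of homogeneous
elements (results as formal sums), used for A and for A' \<otimes> A''.
A word a0 # [a1,...,an] stands for a0[a1|...|an].\<close>

record ('k, 'e) ent =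
  epar :: "'e \<Rightarrow> nat"
  edif :: "'e \<Rightarrow> ('k \<times> 'e) list"
  emul :: "'e \<Rightarrow> 'e \<Rightarrow> ('k \<times> 'e) list"
  eone :: "'e"

definition hc_tau :: "('k::comm_ring_1, 'e) ent \<Rightarrow> 'e list \<Rightarrow> ('k \<times> 'e list) list" where
  "hc_tau E w = (case w of [] \<Rightarrow> []
     | a0 # as \<Rightarrow> [((-1) ^ ((epar E a0 + 1) * (\<Sum>a\<leftarrow>as. epar E a + 1)), as @ [a0])])"

definition hc_tau_inv :: "('k::comm_ring_1, 'e) ent \<Rightarrow> 'e list \<Rightarrow> ('k \<times> 'e list) list" where
  "hc_tau_inv E w = (if w = [] then [] else
     [((-1) ^ ((epar E (last w) + 1) * (\<Sum>a\<leftarrow>butlast w. epar E a + 1)), last w # butlast w)])"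

definition hc_delta0 :: "('k::comm_ring_1, 'e) ent \<Rightarrow> 'e list \<Rightarrow> ('k \<times> 'e list) list" where
  "hc_delta0 E w = (case w of [] \<Rightarrow> [] | a # as \<Rightarrow> map (\<lambda>(c, x). (c, x # as)) (edif E a))"

definition hc_mu0 :: "('k::comm_ring_1, 'e) ent \<Rightarrow> 'e list \<Rightarrow> ('k \<times> 'e list) list" where
  "hc_mu0 E w = (case w of a0 # a1 # as \<Rightarrow>
        map (\<lambda>(c, x). ((-1) ^ epar E a0 * c, x # as)) (emul E a0 a1)
     | _ \<Rightarrow> [])"

definition hc_conj :: "('k::comm_ring_1, 'e) ent \<Rightarrow> ('e list \<Rightarrow> ('k \<times> 'e list) list) \<Rightarrow> nat
    \<Rightarrow> 'e list \<Rightarrow> ('k \<times> 'e list) list" where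
  "hc_conj E F i w = fsmap (opow (hc_tau_inv E) i) (fsmap F (opow (hc_tau E) i w))"

definition hc_delta :: "('k::comm_ring_1, 'e) ent \<Rightarrow> nat \<Rightarrow> 'e list \<Rightarrow> ('k \<times> 'e list) list" where
  "hc_delta E i = hc_conj E (hc_delta0 E) i"

definition hc_mu :: "('k::comm_ring_1, 'e) ent \<Rightarrow> nat \<Rightarrow> 'e list \<Rightarrow> ('k \<times> 'e list) list" where
  "hc_mu E i = hc_conj E (hc_mu0 E) i"

definition hc_bdelta :: "('k::comm_ring_1, 'e) ent \<Rightarrow> 'e list \<Rightarrow> ('k \<times> 'e list) list" where
  "hc_bdelta E w = concat (map (\<lambda>i. hc_delta E i w) [0..<length w])"

definition hc_bmu :: "('k::comm_ring_1, 'e) ent \<Rightarrow> 'e list \<Rightarrow> ('k \<times> 'e list) list" where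
  "hc_bmu E w = concat (map (\<lambda>i. hc_mu E i w) [0..<length w])"

definition hc_b :: "('k::comm_ring_1, 'e) ent \<Rightarrow> 'e list \<Rightarrow> ('k \<times> 'e list) list" where
  "hc_b E w = hc_bdelta E w @ hc_bmu E w"

definition hc_N :: "('k::comm_ring_1, 'e) ent \<Rightarrow> 'e list \<Rightarrow> ('k \<times> 'e list) list" where
  "hc_N E w = concat (map (\<lambda>i. opow (hc_tau E) i w) [0..<length w])"

definition hc_h :: "('k::comm_ring_1, 'e) ent \<Rightarrow> 'e list \<Rightarrow> ('k \<times> 'e list) list" where
  "hc_h E w = [(1, eone E # w)]"

text \<open>B = (1 - tau^(-1)) h N\<close>
definition hc_B :: "('k::comm_ring_1, 'e) ent \<Rightarrow> 'e list \<Rightarrow> ('k \<times> 'e list) list" where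
  "hc_B E w = fsmap (\<lambda>v. (1, v) # fsneg (hc_tau_inv E v)) (fsmap (hc_h E) (hc_N E w))"

definition wpar :: "('k, 'e) ent \<Rightarrow> 'e list \<Rightarrow> nat" where
  "wpar E w = (case w of [] \<Rightarrow> 0 | a0 # as \<Rightarrow> epar E a0 + (\<Sum>a\<leftarrow>as. epar E a + 1))"

definition entA :: "('k::comm_ring_1, 'a::ring_1) dga \<Rightarrow> ('k, 'a) ent" where
  "entA D = \<lparr> epar = dg D, edif = (\<lambda>a. [(1, ddif D a)]), emul = (\<lambda>a b. [(1, a * b)]), eone = 1 \<rparr>"

text \<open>A pure tensor a' \<otimes> a'' of A' \<otimes> A'' is represented by the pair (a', a'').\<close>
definition entT :: "('k::comm_ring_1, 'a::ring_1) dga \<Rightarrow> ('k, 'b::ring_1) dga \<Rightarrow> ('k, 'a \<times> 'b) ent" where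
  "entT D1 D2 = \<lparr> epar = (\<lambda>(a, b). dg D1 a + dg D2 b),
     edif = (\<lambda>(a, b). [(1, (ddif D1 a, b)), ((-1) ^ dg D1 a, (a, ddif D2 b))]),
     emul = (\<lambda>(a, b) (c, e). [((-1) ^ (dg D2 b * dg D1 c), (a * c, b * e))]),
     eone = (1, 1) \<rparr>"

text \<open>Relations defining the normalized complex of A' \<otimes> A'' as a quotient of the free
k-module on words of pure tensors: multilinearity in every entry (bilinearity of each
pure tensor), and vanishing of words having the unit 1 \<otimes> 1 in some position \<ge> 1.\<close>
definition relT :: "('k::field, 'a::ring_1) dga \<Rightarrow> ('k, 'b::ring_1) dga \<Rightarrow> (('a \<times> 'b) list \<Rightarrow> 'k) set" where
  "relT D1 D2 =
     {lcf [(1, u @ (x + y, z) # v), (-1, u @ (x, z) # v), (-1, u @ (y, z) # v)] | u v x y z. True} \<union>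
     {lcf [(1, u @ (z, x + y) # v), (-1, u @ (z, x) # v), (-1, u @ (z, y) # v)] | u v x y z. True} \<union>
     {lcf [(1, u @ (dsc D1 c x, z) # v), (- c, u @ (x, z) # v)] | u v c x z. True} \<union>
     {lcf [(1, u @ (z, dsc D2 c x) # v), (- c, u @ (z, x) # v)] | u v c x z. True} \<union>
     {lcf [(1, u @ (1, 1) # v)] | u v. u \<noteq> []}"

definition nrm_eq :: "('k::field, 'a::ring_1) dga \<Rightarrow> ('k, 'b::ring_1) dga
    \<Rightarrow> ('k \<times> ('a \<times> 'b) list) list \<Rightarrow> ('k \<times> ('a \<times> 'b) list) list \<Rightarrow> bool" where
  "nrm_eq D1 D2 L1 L2 \<longleftrightarrow>
     lcf (L1 @ fsneg L2) \<in> module.span (\<lambda>c f. (\<lambda>w. c * f w)) (relT D1 D2)"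

text \<open>(X \<otimes> Y)(x \<otimes> y) = (-1)^(|Y| |x|) Xx \<otimes> Yy, on pairs of words; pY is the parity of Y.\<close>
definition tens :: "('k::comm_ring_1, 'a) ent \<Rightarrow> ('a list \<Rightarrow> ('k \<times> 'a list) list)
    \<Rightarrow> ('b list \<Rightarrow> ('k \<times> 'b list) list) \<Rightarrow> nat \<Rightarrow> 'a list \<times> 'b list \<Rightarrow> ('k \<times> ('a list \<times> 'b list)) list" where
  "tens E1 X Y pY xy = (case xy of (x, y) \<Rightarrow>
     [((-1) ^ (pY * wpar E1 x) * c1 * c2, (x1, y1)). (c1, x1) \<leftarrow> X x, (c2, y1) \<leftarrow> Y y])"

text \<open>Shuffles of p and q entries encoded as bool lists (False = next entry of the first
word, True = next entry of the second word).\<close>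
fun shb :: "nat \<Rightarrow> nat \<Rightarrow> bool list list" where
  "shb 0 0 = [[]]"
| "shb (Suc p) 0 = map (Cons False) (shb p 0)"
| "shb 0 (Suc q) = map (Cons True) (shb 0 q)"
| "shb (Suc p) (Suc q) = map (Cons False) (shb p (Suc q)) @ map (Cons True) (shb (Suc p) q)"

fun shuf :: "bool list \<Rightarrow> 'x list \<Rightarrow> 'x list \<Rightarrow> 'x list" where
  "shuf (False # bs) (x # xs) ys = x # shuf bs xs ys"
| "shuf (True # bs) xs (y # ys) = y # shuf bs xs ys"
| "shuf _ _ _ = []"

text \<open>Koszul sign exponent of a shuffle, given the shifted parities |x|+1 of the entries:
each entry of the second word passes over the remaining entries of the first word.\<close>
fun shsign :: "bool list \<Rightarrow> nat list \<Rightarrow> nat list \<Rightarrow> nat" where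
  "shsign (False # bs) (p # ps) qs = shsign bs ps qs"
| "shsign (True # bs) ps (q # qs) = q * sum_list ps + shsign bs ps qs"
| "shsign _ _ _ = 0"

text \<open>left_of bs r s: in the shuffle bs, entry r of the first word is left of entry s of the second.\<close>
fun left_of :: "bool list \<Rightarrow> nat \<Rightarrow> nat \<Rightarrow> bool" where
  "left_of (False # bs) r s = (r = 0 \<or> left_of bs (r - 1) s)"
| "left_of (True # bs) r s = (s \<noteq> 0 \<and> left_of bs r (s - 1))"
| "left_of [] r s = False"

definition hc_sh :: "('k::comm_ring_1, 'a::one) ent \<Rightarrow> ('k, 'b::one) ent \<Rightarrow> nat \<Rightarrow> nat
    \<Rightarrow> 'a list \<times> 'b list \<Rightarrow> ('k \<times> ('a \<times> 'b) list) list" where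
  "hc_sh E1 E2 r s xy = (case xy of (x, y) \<Rightarrow>
     [((-1) ^ (wpar E1 x + shsign bs (map (\<lambda>a. epar E1 a + 1) x) (map (\<lambda>b. epar E2 b + 1) y)),
       (1, 1) # shuf bs (map (\<lambda>a. (a, 1)) x) (map (\<lambda>b. (1, b)) y)).
      bs \<leftarrow> shb (length x) (length y), left_of bs r s])"

definition hc_H :: "('k::comm_ring_1, 'a::one) ent \<Rightarrow> ('k, 'b::one) ent
    \<Rightarrow> 'a list \<times> 'b list \<Rightarrow> ('k \<times> ('a \<times> 'b) list) list" where
  "hc_H E1 E2 xy = (case xy of (x, y) \<Rightarrow>
     (let n = length x - 1; m = length y - 1 in
      concat [fsmap (hc_sh E1 E2 r s)
                (tens E1 (\<lambda>v. fsmap (opow (hc_tau_inv E1) r) (hc_delta E1 i v)) (opow (hc_tau_inv E2) s) 0 (x, y)).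
              i \<leftarrow> [1..<Suc n], r \<leftarrow> [0..<Suc (n - i)], s \<leftarrow> [0..<Suc m]]
      @ concat [fsmap (hc_sh E1 E2 r s)
                (tens E1 (opow (hc_tau_inv E1) r) (\<lambda>v. fsmap (opow (hc_tau_inv E2) s) (hc_delta E2 i v)) 1 (x, y)).
              i \<leftarrow> [1..<Suc m], r \<leftarrow> [0..<Suc n], s \<leftarrow> [0..<Suc (m - i)]]))"

text \<open>For odd operators FT on C(A'\<otimes>A''), F1 on C(A'), F2 on C(A''):
FT H + H (F1 \<otimes> 1 + 1 \<otimes> F2), applied to x \<otimes> y.\<close>
definition hc_anti :: "('k::comm_ring_1, 'a::ring_1) dga \<Rightarrow> ('k, 'b::ring_1) dga
    \<Rightarrow> (('a \<times> 'b) list \<Rightarrow> ('k \<times> ('a \<times> 'b) list) list)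
    \<Rightarrow> ('a list \<Rightarrow> ('k \<times> 'a list) list) \<Rightarrow> ('b list \<Rightarrow> ('k \<times> 'b list) list)
    \<Rightarrow> 'a list \<Rightarrow> 'b list \<Rightarrow> ('k \<times> ('a \<times> 'b) list) list" where
  "hc_anti D1 D2 FT F1 F2 x y =
     fsmap FT (hc_H (entA D1) (entA D2) (x, y)) @
     fsmap (hc_H (entA D1) (entA D2))
       (tens (entA D1) F1 idop 0 (x, y) @ tens (entA D1) idop F2 1 (x, y))"

end

theory Submission
  imports Defs "HOL-Library.Multiset"
begin

text \<open>
  All operators act on words a0[a1|...|an], and the key observation is that
  \<delta>^(i) = \<tau>^(-i) \<delta>^(0) \<tau>^i is the differential of the i-th entry with the Koszul sign
  (-1)^(|\<Pi>a0| + ... + |\<Pi>a(i-1)|). In this form b(\<delta>) is a derivation of the tensor algebra on \<Pi>A: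
  it anticommutes with each \<delta>^(i) because d^2 = 0, commutes with \<tau>^(-1), and satisfies the
  Leibniz rule on shuffles. Each summand of H is a shuffle applied to \<tau>^(-r)\<delta>^(i) \<otimes> \<tau>^(-s)
  or to \<tau>^(-r) \<otimes> \<tau>^(-s)\<delta>^(i), so b(\<delta>)H + H(b(\<delta>)\<otimes>1 + 1\<otimes>b(\<delta>)) cancels summand
  by summand, up to words with a zero tensor factor, which vanish by multilinearity.

  For B = hN every term vanishes in the normalized complex: the words in the image of H begin with
  1\<otimes>1, which B moves into a bracket, and B\<otimes>1, 1\<otimes>B produce words containing the unit,
  which the shuffles of H move into a bracket. The last identity follows from b = b(\<delta>) + b(\<mu>).
\<close>

section \<open>Formal linear combinations\<close>

lemma lcf_Nil[simp]: "lcf [] w = 0" by (simp add: lcf_def)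

lemma lcf_Cons[simp]: "lcf ((a,v)#c) w = (if v = w then a else 0) + lcf c w"
  by (simp add: lcf_def)

lemma lcf_append[simp]: "lcf (c @ d) w = lcf c w + lcf d w"
  by (simp add: lcf_def)

lemma lcf_fsneg[simp]: "lcf (fsneg c) w = - lcf c w"
  by (induction c) (auto simp: fsneg_def)

lemma lcf_concat: "lcf (concat cs) w = (\<Sum>c\<leftarrow>cs. lcf c w)"
  by (induction cs) auto

lemma lcf_scale: "lcf (map (\<lambda>(a,v). (k*a, v)) c) w = k * lcf c w"
  by (induction c) (auto simp: algebra_simps)

lemma lcf_scale_fst: "lcf (map (\<lambda>p. (k * fst p, snd p)) c) w = k * lcf c w"
  by (induction c) (auto simp: algebra_simps)

lemma fsmap_append[simp]: "fsmap f (c @ d) = fsmap f c @ fsmap f d"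
  by (simp add: fsmap_def)

lemma fsmap_Nil[simp]: "fsmap f [] = []" by (simp add: fsmap_def)

lemma fsmap_Cons: "fsmap f ((a,v)#c) = map (\<lambda>(b,u). (a*b,u)) (f v) @ fsmap f c"
  by (simp add: fsmap_def)

lemma fsmap_Nil_fun[simp]: "fsmap (\<lambda>p. []) C = []"
  by (induction C) (auto simp: fsmap_Cons)

lemma lcf_fsmap: "lcf (fsmap f c) w = (\<Sum>(a,v)\<leftarrow>c. a * lcf (f v) w)"
  by (induction c) (auto simp: fsmap_def lcf_concat lcf_scale)

lemma lcf_fsmap_fst: "lcf (fsmap f c) w = (\<Sum>p\<leftarrow>c. fst p * lcf (f (snd p)) w)"
  by (induction c) (auto simp: fsmap_Cons lcf_scale)

definition fs_words :: "('k \<times> 'w) list \<Rightarrow> 'w set" where "fs_words c = snd ` set c"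

lemma lcf_notin: "w \<notin> fs_words c \<Longrightarrow> lcf c w = 0"
  by (induction c) (auto simp: fs_words_def)

lemma lcf_nonzero_fs_words: "lcf c w \<noteq> 0 \<Longrightarrow> w \<in> fs_words c"
  using lcf_notin[of w c] by auto

lemma fs_words_Nil[simp]: "fs_words [] = {}" by (simp add: fs_words_def)

lemma fs_words_Cons[simp]: "fs_words ((a,v)#c) = insert v (fs_words c)" by (simp add: fs_words_def)

lemma fs_words_append[simp]: "fs_words (c @ d) = fs_words c \<union> fs_words d" by (auto simp: fs_words_def)

lemma fs_words_concat: "fs_words (concat cs) = (\<Union>c\<in>set cs. fs_words c)" by (auto simp: fs_words_def)

lemma fs_words_fsmap: "fs_words (fsmap f c) \<subseteq> (\<Union>v\<in>fs_words c. fs_words (f v))"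
  by (force simp: fs_words_def fsmap_def image_iff)

lemma fs_words_fsneg[simp]: "fs_words (fsneg c) = fs_words c" by (force simp: fs_words_def fsneg_def)

lemma fs_words_fsmapE:
  assumes "u \<in> fs_words (fsmap f c)"
  obtains v where "v \<in> fs_words c" "u \<in> fs_words (f v)"
  using subsetD[OF fs_words_fsmap assms] that by blast

lemma fs_words_map_snd: "fs_words (map (\<lambda>p. (fst p, g (snd p))) c) = g ` fs_words c"
  by (force simp: fs_words_def)

lemma fs_words_map_scale[simp]: "fs_words (map (\<lambda>q. (k * fst q, snd q)) c) = fs_words c"
  by (force simp: fs_words_def)

lemma sum_list_to_sum:
  assumes "finite S" "fs_words c \<subseteq> S"
  shows "(\<Sum>(a,v)\<leftarrow>c. a * g v) = (\<Sum>v\<in>S. lcf c v * g v)"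
  using assms(2)
proof (induction c)
  case Nil then show ?case by simp
next
  case (Cons p c)
  obtain a v where p: "p = (a,v)" by force
  have vS: "v \<in> S" using Cons.prems p by auto
  have "(\<Sum>u\<in>S. lcf (p#c) u * g u) = (\<Sum>u\<in>S. (if v = u then a * g u else 0)) + (\<Sum>u\<in>S. lcf c u * g u)"
    by (simp add: p sum.distrib[symmetric] algebra_simps) (rule sum.cong, auto)
  also have "(\<Sum>u\<in>S. (if v = u then a * g u else 0)) = a * g v"
    using vS assms(1) by (simp add: sum.delta)
  finally show ?case using Cons p by auto
qed

lemma fsmap_concat: "fsmap f (concat cs) = concat (map (fsmap f) cs)"
  by (induction cs) auto

lemma fsmap_fsmap: "fsmap f (fsmap g c) = fsmap (\<lambda>v. fsmap f (g v)) c"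
proof (induction c)
  case Nil then show ?case by simp
next
  case (Cons p c)
  obtain a v where p: "p = (a,v)" by force
  have aux: "fsmap f (map (\<lambda>(b,u). (a*b,u)) d) = map (\<lambda>(b,u). (a*b,u)) (fsmap f d)" for d
    by (induction d) (auto simp: fsmap_Cons mult.assoc)
  show ?case using Cons by (simp add: p fsmap_Cons aux)
qed

lemma fsmap_single: "fsmap f [(1,v)] = f v"
  by (simp add: fsmap_Cons)

lemma fsmap_singleton_fun: "fsmap (\<lambda>w. [(g w, h w)]) c = map (\<lambda>p. (fst p * g (snd p), h (snd p))) c"
  by (induction c) (auto simp: fsmap_Cons)

lemma fsmap_cong: "(\<And>v. v \<in> fs_words c \<Longrightarrow> f v = g v) \<Longrightarrow> fsmap f c = fsmap g c"
  by (force simp: fsmap_def fs_words_def intro!: arg_cong[where f=concat] map_cong)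

lemma fsmap_unit[simp]: "fsmap (\<lambda>v. [(1,v)]) c = c"
  by (induction c) (auto simp: fsmap_Cons)

lemma fsmap_idop[simp]: "fsmap idop c = c"
  unfolding idop_def by (rule fsmap_unit)

lemma fsmap_fsneg: "fsmap f (fsneg c) = fsneg (fsmap f c)"
  by (induction c) (auto simp: fsmap_Cons fsneg_def)

lemma lcf_fsmap_app: "lcf (fsmap (\<lambda>p. f p @ g p) c) w = lcf (fsmap f c) w + lcf (fsmap g c) w"
  by (simp add: lcf_fsmap_fst sum_list_addf[symmetric] algebra_simps)

lemma lcf_fsmap_single_scaled: "lcf (fsmap F [(k, x)]) w = k * lcf (F x) w"
  by (simp add: fsmap_Cons lcf_scale)

lemma lcf_fsmap_scaled_arg: "lcf (fsmap F (map (\<lambda>q. (k * fst q, snd q)) c)) w = k * lcf (fsmap F c) w"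
  by (simp add: lcf_fsmap_fst sum_list_const_mult o_def algebra_simps)

lemma lcf_fsmap_self_scale: "lcf (fsmap (\<lambda>u. [(g u, u)]) c) w = g w * lcf c w"
  by (induction c) (auto simp: fsmap_Cons algebra_simps)

lemma lcf_fsmap_self_scale_idop: "lcf (fsmap (\<lambda>u. map (\<lambda>q. (g u * fst q, snd q)) (idop u)) c) w = g w * lcf c w"
  unfolding idop_def by (simp add: lcf_fsmap_self_scale)

lemma funpow_fsmap: "(fsmap f ^^ i) c = fsmap (opow f i) c"
proof (induction i arbitrary: c)
  case 0 then show ?case by (simp add: opow_def)
next
  case (Suc i)
  have "(fsmap f ^^ Suc i) c = fsmap f (fsmap (opow f i) c)" using Suc by simp
  also have "\<dots> = fsmap (\<lambda>v. fsmap f (opow f i v)) c" by (simp add: fsmap_fsmap)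
  also have "\<dots> = fsmap (opow f (Suc i)) c" by (simp add: opow_def[abs_def])
  finally show ?case .
qed

lemma opow_0[simp]: "opow f 0 w = [(1,w)]" by (simp add: opow_def)

lemma opow_Suc: "opow f (Suc i) w = fsmap f (opow f i w)" by (simp add: opow_def)

lemma opow_Suc_right: "opow f (Suc i) w = fsmap (opow f i) (f w)"
proof -
  have "opow f (Suc i) w = (fsmap f ^^ i) (fsmap f [(1,w)])"
    by (simp only: opow_def funpow_Suc_right comp_apply)
  also have "\<dots> = fsmap (opow f i) (f w)" by (simp only: fsmap_single funpow_fsmap)
  finally show ?thesis .
qed

lemma fsmap_opow_0: "fsmap (opow f 0) c = c"
  by (simp add: opow_def[abs_def])

lemma fsmap_opow_Suc: "fsmap (\<lambda>v. fsmap f (opow f r v)) c = fsmap (opow f (Suc r)) c"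
  by (rule fsmap_cong) (simp add: opow_Suc)

lemma fs_words_opow_mset:
  assumes "\<And>v u. u \<in> fs_words (f v) \<Longrightarrow> mset u = mset v"
  shows "u \<in> fs_words (opow f r w) \<Longrightarrow> mset u = mset w"
proof (induction r arbitrary: u)
  case 0 then show ?case by simp
next
  case (Suc r)
  then obtain v where "v \<in> fs_words (opow f r w)" "u \<in> fs_words (f v)"
    using fs_words_fsmap[of f "opow f r w"] by (auto simp: opow_Suc)
  then show ?case using Suc.IH assms by metis
qed

text \<open>Used with N the words having a zero entry, which vanish in the quotient by multilinearity.\<close>

definition eq_mod :: "('w \<Rightarrow> bool) \<Rightarrow> ('k::comm_ring_1 \<times> 'w) list \<Rightarrow> ('k \<times> 'w) list \<Rightarrow> bool" where
  "eq_mod N c d \<longleftrightarrow> (\<forall>w. \<not> N w \<longrightarrow> lcf c w = lcf d w)"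

lemma eq_mod_refl[simp]: "eq_mod N c c" by (simp add: eq_mod_def)

lemma eq_mod_sym: "eq_mod N c d \<Longrightarrow> eq_mod N d c" by (simp add: eq_mod_def)

lemma eq_mod_trans[trans]: "eq_mod N c d \<Longrightarrow> eq_mod N d e \<Longrightarrow> eq_mod N c e" by (simp add: eq_mod_def)

lemma eq_mod_append: "eq_mod N c c' \<Longrightarrow> eq_mod N d d' \<Longrightarrow> eq_mod N (c @ d) (c' @ d')"
  by (simp add: eq_mod_def)

lemma eq_mod_fsneg: "eq_mod N c c' \<Longrightarrow> eq_mod N (fsneg c) (fsneg c')"
  by (simp add: eq_mod_def)

lemma eq_mod_lcf: "(\<And>w. \<not> N w \<Longrightarrow> lcf c w = lcf d w) \<Longrightarrow> eq_mod N c d"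
  by (simp add: eq_mod_def)

lemma eq_mod_null: "(\<And>w. w \<in> fs_words c \<Longrightarrow> N w) \<Longrightarrow> eq_mod N c []"
  by (auto simp: eq_mod_def intro!: lcf_notin)

lemma lcf_eq_eq_mod: "(\<And>w. lcf c w = lcf d w) \<Longrightarrow> eq_mod N c d" by (simp add: eq_mod_def)

lemma eq_mod_fsmap:
  assumes "eq_mod N c d" "\<And>v. v \<in> fs_words c \<union> fs_words d \<Longrightarrow> P v"
    "\<And>v w. P v \<Longrightarrow> N v \<Longrightarrow> w \<in> fs_words (f v) \<Longrightarrow> N' w"
  shows "eq_mod N' (fsmap f c) (fsmap f d)"
proof (rule eq_mod_lcf)
  fix w assume w: "\<not> N' w"
  define S where "S = fs_words c \<union> fs_words d"
  have fS: "finite S" by (simp add: S_def fs_words_def)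
  have "lcf (fsmap f c) w = (\<Sum>v\<in>S. lcf c v * lcf (f v) w)"
    unfolding lcf_fsmap by (rule sum_list_to_sum) (use fS S_def in auto)
  also have "\<dots> = (\<Sum>v\<in>S. lcf d v * lcf (f v) w)"
  proof (rule sum.cong)
    fix v assume vS: "v \<in> S"
    show "lcf c v * lcf (f v) w = lcf d v * lcf (f v) w"
    proof (cases "N v")
      case True
      then have "w \<notin> fs_words (f v)" using assms(2,3) w vS S_def by blast
      then show ?thesis by (simp add: lcf_notin)
    next
      case False then show ?thesis using assms(1) by (simp add: eq_mod_def)
    qed
  qed simp
  also have "\<dots> = lcf (fsmap f d) w"
    unfolding lcf_fsmap by (rule sum_list_to_sum[symmetric]) (use fS S_def in auto)
  finally show "lcf (fsmap f c) w = lcf (fsmap f d) w" .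
qed

lemma eq_mod_fsmap_cong:
  assumes "\<And>v. v \<in> fs_words c \<Longrightarrow> eq_mod N (f v) (g v)"
  shows "eq_mod N (fsmap f c) (fsmap g c)"
proof (rule eq_mod_lcf)
  fix w assume w: "\<not> N w"
  have "\<And>a v. (a,v) \<in> set c \<Longrightarrow> a * lcf (f v) w = a * lcf (g v) w"
    using assms w by (force simp: eq_mod_def fs_words_def)
  then show "lcf (fsmap f c) w = lcf (fsmap g c) w"
    unfolding lcf_fsmap by (intro arg_cong[where f=sum_list] map_cong) auto
qed

lemma eq_mod_concat_map: "(\<And>i. i \<in> set I \<Longrightarrow> eq_mod N (F i) (G i)) \<Longrightarrow> eq_mod N (concat (map F I)) (concat (map G I))"
  by (induction I) (auto intro: eq_mod_append)

lemma eq_mod_concat_append: "(\<And>l. l \<in> set L \<Longrightarrow> eq_mod N (A l @ B l) []) \<Longrightarrow> eq_mod N (concat (map A L) @ concat (map B L)) []"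
proof (induction L)
  case Nil then show ?case by simp
next
  case (Cons l L)
  have a: "eq_mod N (A l @ B l) []" using Cons.prems by simp
  have b: "eq_mod N (concat (map A L) @ concat (map B L)) []" using Cons by simp
  show ?case using a b by (simp add: eq_mod_def algebra_simps)
qed

lemma eq_mod_map_same:
  assumes "\<And>c x. (c,x) \<in> set L \<Longrightarrow> \<not> N (W x) \<Longrightarrow> f c x = g c x"
  shows "eq_mod N (map (\<lambda>(c,x). (f c x, W x)) L) (map (\<lambda>(c,x). (g c x, W x)) L)"
  using assms by (induction L) (auto simp: eq_mod_def)

lemma eq_mod_map_fst_snd:
  assumes "\<And>c x. (c,x) \<in> set L \<Longrightarrow> \<not> N (W x) \<Longrightarrow> f c x = g c x"
  shows "eq_mod N (map (\<lambda>p. (f (fst p) (snd p), W (snd p))) L) (map (\<lambda>p. (g (fst p) (snd p), W (snd p))) L)"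
  using assms by (induction L) (auto simp: eq_mod_def)

lemma eq_mod_scale: "eq_mod N c d \<Longrightarrow> eq_mod N (map (\<lambda>p. (k * fst p, snd p)) c) (map (\<lambda>p. (k * fst p, snd p)) d)"
  by (simp add: eq_mod_def lcf_scale_fst)

lemma eq_mod_single:
  assumes "\<not> N W \<Longrightarrow> a = b"
  shows "eq_mod N [(a, W)] [(b, W)]"
  using assms by (auto simp: eq_mod_def)

lemma lcf_fsmap_cong:
  assumes "\<And>w. lcf c w = lcf d w"
  shows "lcf (fsmap f c) w = lcf (fsmap f d) w"
proof -
  have "eq_mod (\<lambda>_. False) (fsmap f c) (fsmap f d)"
    by (rule eq_mod_fsmap[where P="\<lambda>_. True"]) (use assms in \<open>auto simp: eq_mod_def\<close>)
  then show ?thesis by (simp add: eq_mod_def)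
qed

lemma fsmap_concat_swap:
  assumes "\<And>p. p \<in> fs_words C \<Longrightarrow> F p = concat (map (\<lambda>l. G l p) L)"
  shows "eq_mod N (fsmap F C) (concat (map (\<lambda>l. fsmap (G l) C) L))"
proof -
  have "fsmap F C = fsmap (\<lambda>p. concat (map (\<lambda>l. G l p) L)) C" by (rule fsmap_cong) (use assms in auto)
  moreover have "lcf (fsmap (\<lambda>p. concat (map (\<lambda>l. G l p) L)) C) w = lcf (concat (map (\<lambda>l. fsmap (G l) C) L)) w" for w
  proof (induction C)
    case Nil then show ?case by (induction L) (auto simp: lcf_concat)
  next
    case (Cons q C)
    obtain a p where q: "q = (a,p)" by force
    have "lcf (fsmap (\<lambda>p. concat (map (\<lambda>l. G l p) L)) (q#C)) w =
        a * (\<Sum>l\<leftarrow>L. lcf (G l p) w) + lcf (fsmap (\<lambda>p. concat (map (\<lambda>l. G l p) L)) C) w"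
      by (simp add: q fsmap_Cons lcf_scale lcf_concat o_def)
    also have "\<dots> = (\<Sum>l\<leftarrow>L. a * lcf (G l p) w) + (\<Sum>l\<leftarrow>L. lcf (fsmap (G l) C) w)"
      using Cons by (simp add: lcf_concat o_def sum_list_const_mult)
    also have "\<dots> = (\<Sum>l\<leftarrow>L. a * lcf (G l p) w + lcf (fsmap (G l) C) w)"
      by (simp add: sum_list_addf)
    also have "\<dots> = lcf (concat (map (\<lambda>l. fsmap (G l) (q#C)) L)) w"
      by (simp add: q fsmap_Cons lcf_scale lcf_concat o_def)
    finally show ?case .
  qed
  ultimately show ?thesis by (simp add: eq_mod_def)
qed

definition fs_tensor :: "('k::comm_ring_1 \<times> 'u) list \<Rightarrow> ('k \<times> 'v) list \<Rightarrow> ('k \<times> ('u \<times> 'v)) list" where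
  "fs_tensor c d = concat (map (\<lambda>p. map (\<lambda>q. (fst p * fst q, (snd p, snd q))) d) c)"

lemma fs_tensor_Nil[simp]: "fs_tensor [] d = []" by (simp add: fs_tensor_def)

lemma fs_tensor_Cons: "fs_tensor ((a,u)#c) d = map (\<lambda>q. (a * fst q, (u, snd q))) d @ fs_tensor c d"
  by (simp add: fs_tensor_def)

lemma lcf_map_Pair: "lcf (map (\<lambda>q. (a * fst q, (u, snd q))) d) (u',v') = (if u = u' then a * lcf d v' else 0)"
  by (induction d) (auto simp: algebra_simps)

lemma lcf_fs_tensor: "lcf (fs_tensor c d) (u,v) = lcf c u * lcf d v"
  by (induction c) (auto simp: fs_tensor_Cons lcf_map_Pair algebra_simps)

lemma fsmap_fs_tensor: "lcf (fsmap (\<lambda>p. fs_tensor (F (fst p)) (G (snd p))) (fs_tensor c d)) (u',v') =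
    lcf (fsmap F c) u' * lcf (fsmap G d) v'"
proof (induction c)
  case Nil then show ?case by simp
next
  case (Cons p c)
  obtain a u where p: "p = (a,u)" by force
  have aux: "lcf (fsmap (\<lambda>p. fs_tensor (F (fst p)) (G (snd p))) (map (\<lambda>q. (a * fst q, (u, snd q))) d)) (u',v')
      = a * lcf (F u) u' * lcf (fsmap G d) v'"
    by (induction d) (simp_all add: lcf_fsmap_fst lcf_fs_tensor algebra_simps)
  have "lcf (fsmap (\<lambda>p. fs_tensor (F (fst p)) (G (snd p))) (fs_tensor (p#c) d)) (u',v') =
     a * lcf (F u) u' * lcf (fsmap G d) v' + lcf (fsmap F c) u' * lcf (fsmap G d) v'"
    using Cons by (simp add: p fs_tensor_Cons aux)
  also have "\<dots> = lcf (fsmap F (p#c)) u' * lcf (fsmap G d) v'"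
    by (simp add: p fsmap_Cons lcf_scale distrib_right)
  finally show ?case .
qed

lemma fs_words_fs_tensor: "q \<in> fs_words (fs_tensor c d) \<Longrightarrow> fst q \<in> fs_words c \<and> snd q \<in> fs_words d"
proof (induction c)
  case Nil then show ?case by simp
next
  case (Cons p c)
  obtain a u where p: "p = (a,u)" by force
  have "q \<in> fs_words (map (\<lambda>q. (a * fst q, (u, snd q))) d) \<or> q \<in> fs_words (fs_tensor c d)"
    using Cons.prems by (simp add: p fs_tensor_Cons)
  then show ?case
  proof
    assume "q \<in> fs_words (map (\<lambda>q. (a * fst q, (u, snd q))) d)"
    then obtain b v where "(b,v) \<in> set d" "q = (u,v)" by (auto simp: fs_words_def)
    then show ?thesis by (force simp: p fs_words_def)
  next
    assume "q \<in> fs_words (fs_tensor c d)" then show ?thesis using Cons.IH by (simp add: p)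
  qed
qed

lemma lcf_fs_tensor_append_right: "lcf (fs_tensor c (d @ d')) w = lcf (fs_tensor c d) w + lcf (fs_tensor c d') w"
  by (cases w) (simp add: lcf_fs_tensor algebra_simps)

section \<open>Words: rotations, the Hochschild differential and Koszul signs\<close>

definition spar :: "('k, 'e) ent \<Rightarrow> 'e \<Rightarrow> nat" where "spar E e = epar E e + 1"

definition wspar :: "('k, 'e) ent \<Rightarrow> 'e list \<Rightarrow> nat" where "wspar E w = (\<Sum>a\<leftarrow>w. spar E a)"

lemma wspar_simps[simp]: "wspar E [] = 0" "wspar E (a#w) = spar E a + wspar E w" "wspar E (u@v) = wspar E u + wspar E v"
  by (simp_all add: wspar_def)

lemma wspar_rotate1[simp]: "wspar E (rotate1 w) = wspar E w" by (cases w) simp_all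

lemma wspar_rotate[simp]: "wspar E (rotate n w) = wspar E w" by (induction n) (simp_all add: rotate_Suc)

lemma wspar_mset: "mset u = mset v \<Longrightarrow> wspar E u = wspar E v"
  unfolding wspar_def by (metis mset_map sum_mset_sum_list)

lemma elem_le_wspar: "a \<in> set w \<Longrightarrow> spar E a \<le> wspar E w"
  by (induction w) auto

lemma wspar_upd: "i < length w \<Longrightarrow> wspar E (w[i:=x]) + spar E (w!i) = wspar E w + spar E x"
proof -
  assume i: "i < length w"
  have "w = take i w @ w!i # drop (Suc i) w" using i by (simp add: id_take_nth_drop)
  then have "wspar E w = wspar E (take i w) + spar E (w!i) + wspar E (drop (Suc i) w)"
    by (metis wspar_simps(2,3) add.assoc)
  then show ?thesis using i by (simp add: upd_conv_take_nth_drop)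
qed

lemma neg_one_power_parity_eq: "even a = even b \<Longrightarrow> (-1::'k::comm_ring_1)^a = (-1)^b"
  by (simp add: minus_one_power_iff)

lemma neg_one_power_sum_compl:
  assumes "\<forall>a\<in>set l. f a \<le> Q \<and> f a \<le> Q'" "odd (Q + Q')"
  shows "(-1::'k::comm_ring_1)^((\<Sum>a\<leftarrow>l. f a * (Q - f a)) + (\<Sum>a\<leftarrow>l. f a * (Q' - f a))) = (-1)^(\<Sum>a\<leftarrow>l. f a)"
  using assms(1)
proof (induction l)
  case Nil then show ?case by simp
next
  case (Cons a l)
  have m: "odd ((Q - f a) + (Q' - f a))" using Cons.prems assms(2) by auto
  have e: "f a * (Q - f a) + f a * (Q' - f a) = ((Q - f a) + (Q' - f a)) * f a"
    by (simp add: algebra_simps)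
  have "(-1::'k)^(f a * (Q - f a) + f a * (Q' - f a)) = (-1)^(f a)"
    unfolding e power_mult neg_one_odd_power[OF m] by simp
  moreover have "(\<Sum>a\<leftarrow>a#l. f a * (Q - f a)) + (\<Sum>a\<leftarrow>a#l. f a * (Q' - f a))
      = (f a * (Q - f a) + f a * (Q' - f a)) + ((\<Sum>a\<leftarrow>l. f a * (Q - f a)) + (\<Sum>a\<leftarrow>l. f a * (Q' - f a)))"
    by simp
  ultimately show ?case using Cons by (simp only: power_add) (simp add: power_add)
qed

lemma hc_tau_nonempty: "v \<noteq> [] \<Longrightarrow> hc_tau E v = [((-1)^(spar E (hd v) * (wspar E v - spar E (hd v))), rotate1 v)]"
  by (cases v) (simp_all add: hc_tau_def spar_def wspar_def)

lemma hc_tau_inv_nonempty: "v \<noteq> [] \<Longrightarrow> hc_tau_inv E v =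
   [((-1)^(spar E (last v) * (wspar E v - spar E (last v))), last v # butlast v)]"
proof -
  assume v: "v \<noteq> []"
  have "wspar E v = wspar E (butlast v) + spar E (last v)"
    using append_butlast_last_id[OF v] wspar_simps(3)[of E "butlast v" "[last v]"] by simp
  then show ?thesis using v by (simp add: hc_tau_inv_def spar_def wspar_def)
qed

definition rot_exp :: "('k, 'e) ent \<Rightarrow> nat \<Rightarrow> 'e list \<Rightarrow> nat" where
  "rot_exp E i w = (\<Sum>a\<leftarrow>take i w. spar E a * (wspar E w - spar E a))"

lemma rot_exp_Suc: "i < length w \<Longrightarrow> rot_exp E (Suc i) w = rot_exp E i w + spar E (w!i) * (wspar E w - spar E (w!i))"
  by (simp add: rot_exp_def take_Suc_conv_app_nth)

lemma hd_rotate_nth: "i < length w \<Longrightarrow> hd (rotate i w) = w ! i"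
proof -
  assume i: "i < length w"
  then have "w \<noteq> []" by auto
  then show ?thesis using hd_rotate_conv_nth[of w i] i by simp
qed

lemma hc_tau_pow: "i \<le> length w \<Longrightarrow> w \<noteq> [] \<Longrightarrow> opow (hc_tau E) i w = [((-1)^(rot_exp E i w), rotate i w)]"
proof (induction i)
  case 0 then show ?case by (simp add: rot_exp_def)
next
  case (Suc i)
  then have i: "i < length w" by simp
  have ne: "rotate i w \<noteq> []" using Suc by simp
  show ?case using Suc
    by (simp add: opow_Suc fsmap_Cons hc_tau_nonempty[OF ne] hd_rotate_nth[OF i] rotate_Suc rot_exp_Suc[OF i] power_add)
qed

lemma hc_tau_inv_pow_rotate: "i \<le> length w \<Longrightarrow> w \<noteq> [] \<Longrightarrow> opow (hc_tau_inv E) i (rotate i w) = [((-1)^(rot_exp E i w), w)]"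
proof (induction i)
  case 0 then show ?case by (simp add: rot_exp_def)
next
  case (Suc i)
  then have i: "i < length w" by simp
  have ne: "rotate i w \<noteq> []" using Suc by simp
  have ne2: "rotate (Suc i) w \<noteq> []" using Suc by simp
  have r: "rotate (Suc i) w = tl (rotate i w) @ [hd (rotate i w)]"
    using ne by (simp add: rotate_Suc rotate1_hd_tl)
  have l: "last (rotate (Suc i) w) = w ! i" using r hd_rotate_nth[OF i] by simp
  have b: "last (rotate (Suc i) w) # butlast (rotate (Suc i) w) = rotate i w"
    using r ne hd_rotate_nth[OF i] l by (metis list.collapse butlast_snoc)
  have t: "hc_tau_inv E (rotate (Suc i) w) = [((-1)^(spar E (w!i) * (wspar E w - spar E (w!i))), rotate i w)]"
    using hc_tau_inv_nonempty[OF ne2] b unfolding l by simp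
  show ?case unfolding opow_Suc_right t using Suc
    by (simp add: fsmap_Cons rot_exp_Suc[OF i] power_add mult.commute)
qed

lemma Cons_tl_rotate_update: "i < length w \<Longrightarrow> x # tl (rotate i w) = rotate i (w[i:=x])"
proof -
  assume i: "i < length w"
  have "rotate i w = drop i w @ take i w" using i by (simp add: rotate_drop_take)
  also have "drop i w = w ! i # drop (Suc i) w" using i by (simp add: Cons_nth_drop_Suc)
  finally have "x # tl (rotate i w) = (x # drop (Suc i) w) @ take i w" by simp
  also have "\<dots> = rotate (length (take i w)) (take i w @ x # drop (Suc i) w)"
    by (simp only: rotate_append)
  also have "\<dots> = rotate i (w[i:=x])" using i by (simp add: upd_conv_take_nth_drop)
  finally show ?thesis .
qed

lemma hc_delta_explicit: "i < length w \<Longrightarrow> hc_delta E i w =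
   map (\<lambda>(c,x). ((-1)^(rot_exp E i w) * c * (-1)^(rot_exp E i (w[i:=x])), w[i:=x])) (edif E (w!i))"
proof -
  assume i: "i < length w"
  then have ne: "w \<noteq> []" by auto
  have rne: "rotate i w \<noteq> []" using ne by simp
  have d0': "hc_delta0 E (rotate i w) = map (\<lambda>(c,x). (c, x # tl (rotate i w))) (edif E (hd (rotate i w)))"
    using rne by (cases "rotate i w") (auto simp: hc_delta0_def)
  have d0: "hc_delta0 E (rotate i w) = map (\<lambda>(c,x). (c, rotate i (w[i:=x]))) (edif E (w!i))"
    unfolding d0' hd_rotate_nth[OF i] using Cons_tl_rotate_update[OF i] by (simp add: case_prod_beta)
  have ip: "\<And>x. opow (hc_tau_inv E) i (rotate i (w[i:=x])) = [((-1)^(rot_exp E i (w[i:=x])), w[i:=x])]"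
    using i ne by (intro hc_tau_inv_pow_rotate) auto
  show ?thesis
    unfolding hc_delta_def hc_conj_def hc_tau_pow[OF less_imp_le[OF i] ne]
    by (simp add: fsmap_Cons d0 fsmap_def ip o_def case_prod_beta)
qed

lemma fs_words_tauinv: "u \<in> fs_words (hc_tau_inv E v) \<Longrightarrow> mset u = mset v"
  by (cases v rule: rev_cases) (auto simp: hc_tau_inv_def)

lemma fs_words_tauinv_pow: "u \<in> fs_words (opow (hc_tau_inv E) r w) \<Longrightarrow> mset u = mset w"
  by (rule fs_words_opow_mset[OF fs_words_tauinv])

lemma fs_words_tau: "u \<in> fs_words (hc_tau E v) \<Longrightarrow> mset u = mset v"
  by (cases v) (auto simp: hc_tau_def)

lemma fs_words_tau_pow: "u \<in> fs_words (opow (hc_tau E) r w) \<Longrightarrow> mset u = mset w"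
  by (rule fs_words_opow_mset[OF fs_words_tau])

lemma tau_inv_pow_fs_words: "v \<in> fs_words (opow (hc_tau_inv E) r x) \<Longrightarrow> set v = set x \<and> length v = length x"
proof -
  assume "v \<in> fs_words (opow (hc_tau_inv E) r x)"
  then have m: "mset v = mset x" by (rule fs_words_tauinv_pow)
  then show ?thesis using arg_cong[OF m, of size] by (metis set_mset_mset size_mset)
qed

lemma set_subset_of_mset_eq: "mset u = mset w \<Longrightarrow> set w \<subseteq> G \<Longrightarrow> set u \<subseteq> G"
  by (metis set_mset_mset)

lemma set_update_subset: "set w \<subseteq> G \<Longrightarrow> x \<in> G \<Longrightarrow> set (w[i:=x]) \<subseteq> G"
  by (meson order_trans set_update_subset_insert insert_subset)

lemma wpar_wspar: "w \<noteq> [] \<Longrightarrow> wpar E w + 1 = wspar E w"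
  by (cases w) (simp_all add: wpar_def wspar_def spar_def)

lemma wpar_mset: "mset u = mset v \<Longrightarrow> wpar E u = wpar E v"
proof (cases "u = []")
  case True
  assume "mset u = mset v" then show ?thesis using True by simp
next
  case False
  assume m: "mset u = mset v"
  then have "v \<noteq> []" using False by auto
  then show ?thesis using wpar_wspar[OF False, of E] wpar_wspar[of v E] wspar_mset[OF m, of E] by simp
qed

lemma tau_inv_pow_wpar: "v \<in> fs_words (opow (hc_tau_inv E') r u) \<Longrightarrow> wpar E v = wpar E u"
  by (rule wpar_mset[OF fs_words_tauinv_pow])

definition kdelta_at :: "('k::comm_ring_1, 'e) ent \<Rightarrow> nat \<Rightarrow> 'e list \<Rightarrow> ('k \<times> 'e list) list" where
  "kdelta_at E i w = (if i < length w then
      map (\<lambda>(c,x). ((-1)^(wspar E (take i w)) * c, w[i:=x])) (edif E (w!i)) else [])"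

fun kdelta :: "('k::comm_ring_1, 'e) ent \<Rightarrow> 'e list \<Rightarrow> ('k \<times> 'e list) list" where
  "kdelta E [] = []"
| "kdelta E (a#w) = map (\<lambda>(c,x). (c, x#w)) (edif E a) @ map (\<lambda>(c,v). ((-1)^(spar E a) * c, a#v)) (kdelta E w)"

lemma kdelta_at_Suc: "kdelta_at E (Suc i) (a#w) = map (\<lambda>(c,v). ((-1)^(spar E a) * c, a#v)) (kdelta_at E i w)"
  by (auto simp: kdelta_at_def power_add mult.assoc case_prod_beta)

lemma kdelta_eq_concat_kdelta_at: "kdelta E w = concat (map (\<lambda>i. kdelta_at E i w) [0..<length w])"
proof (induction w)
  case Nil then show ?case by simp
next
  case (Cons a w)
  have "[0..<length (a#w)] = 0 # map Suc [0..<length w]"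
    by (simp only: length_Cons upt_conv_Cons[OF zero_less_Suc] map_Suc_upt)
  then show ?case using Cons
    by (simp add: kdelta_at_Suc map_concat o_def case_prod_beta) (simp add: kdelta_at_def case_prod_beta)
qed

lemma kdelta_snoc: "kdelta E (u @ [a]) = map (\<lambda>(c,v). (c, v @ [a])) (kdelta E u) @
     map (\<lambda>(c,x). ((-1)^(wspar E u) * c, u @ [x])) (edif E a)"
  by (induction u) (simp_all add: case_prod_beta power_add mult.assoc)

lemma kdelta_length: "v \<in> fs_words (kdelta E w) \<Longrightarrow> length v = length w"
proof (induction w arbitrary: v)
  case Nil then show ?case by simp
next
  case (Cons a w)
  then show ?case by (auto simp: fs_words_def) (metis image_eqI snd_conv length_Cons)
qed

definition has_entry :: "('e \<Rightarrow> bool) \<Rightarrow> 'e list \<Rightarrow> bool" where "has_entry Ne w \<longleftrightarrow> (\<exists>e\<in>set w. Ne e)"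

lemma has_entry_update: "i < length w \<Longrightarrow> \<not> has_entry Ne (w[i:=x]) \<Longrightarrow> \<not> Ne x"
  by (auto simp: has_entry_def set_update_memI)

lemma has_entry_set: "set u = set v \<Longrightarrow> has_entry Ne u = has_entry Ne v" by (simp add: has_entry_def)

text \<open>What is used of the differential: it preserves the homogeneous entries G and is odd, except when
  the result satisfies Ne (is zero), and it maps entries satisfying Ne to such entries.\<close>

definition wf_ent :: "('k, 'e) ent \<Rightarrow> 'e set \<Rightarrow> ('e \<Rightarrow> bool) \<Rightarrow> bool" where
  "wf_ent E G Ne \<longleftrightarrow> (\<forall>e\<in>G. \<forall>(c,e')\<in>set (edif E e). e' \<in> G \<and>
       (\<not> Ne e' \<longrightarrow> \<not> Ne e \<and> odd (epar E e' + epar E e)))"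

lemma wf_ent_D: "wf_ent E G Ne \<Longrightarrow> e \<in> G \<Longrightarrow> (c,e') \<in> set (edif E e) \<Longrightarrow> e' \<in> G"
  "wf_ent E G Ne \<Longrightarrow> e \<in> G \<Longrightarrow> (c,e') \<in> set (edif E e) \<Longrightarrow> \<not> Ne e' \<Longrightarrow> \<not> Ne e"
  "wf_ent E G Ne \<Longrightarrow> e \<in> G \<Longrightarrow> (c,e') \<in> set (edif E e) \<Longrightarrow> \<not> Ne e' \<Longrightarrow> odd (spar E e' + spar E e)"
  by (fastforce simp: wf_ent_def spar_def)+

lemma delta_eq_mod_kdelta_at:
  assumes wf: "wf_ent E G Ne" and G: "set w \<subseteq> G" and i: "i < length w"
  shows "eq_mod (has_entry Ne) (hc_delta E i w) (kdelta_at E i w)"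
  unfolding hc_delta_explicit[OF i] kdelta_at_def using i
proof (simp, intro eq_mod_map_same)
  fix c x assume cx: "(c,x) \<in> set (edif E (w!i))" and nn: "\<not> has_entry Ne (w[i:=x])"
  have wi: "w!i \<in> G" using G i by auto
  have "odd (spar E x + spar E (w!i))" using wf_ent_D(3)[OF wf wi cx] has_entry_update[OF i nn] by simp
  then have odd: "odd (wspar E w + wspar E (w[i:=x]))" using wspar_upd[OF i, of E x] by presburger
  have tk: "take i (w[i:=x]) = take i w" by simp
  have le: "\<forall>a\<in>set (take i w). spar E a \<le> wspar E w \<and> spar E a \<le> wspar E (w[i:=x])"
    using elem_le_wspar tk by (metis in_set_takeD)
  have "(-1::'a)^(rot_exp E i w + rot_exp E i (w[i:=x])) = (-1)^(wspar E (take i w))"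
    unfolding rot_exp_def tk using neg_one_power_sum_compl[OF le odd] by (simp add: wspar_def)
  then show "(-1)^(rot_exp E i w) * c * (-1)^(rot_exp E i (w[i:=x])) = (-1)^(wspar E (take i w)) * c"
    by (simp add: power_add algebra_simps)
qed

lemma bdelta_eq_mod_kdelta:
  assumes wf: "wf_ent E G Ne" and G: "set w \<subseteq> G"
  shows "eq_mod (has_entry Ne) (hc_bdelta E w) (kdelta E w)"
  unfolding hc_bdelta_def kdelta_eq_concat_kdelta_at
  by (rule eq_mod_concat_map) (use delta_eq_mod_kdelta_at[OF wf G] in auto)

lemma kdelta_fs_words:
  assumes wf: "wf_ent E G Ne"
  shows "set w \<subseteq> G \<Longrightarrow> v \<in> fs_words (kdelta E w) \<Longrightarrow>
     set v \<subseteq> G \<and> length v = length w \<and> (\<not> has_entry Ne v \<longrightarrow> odd (wspar E v + wspar E w)) \<and> (has_entry Ne w \<longrightarrow> has_entry Ne v)"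
proof (induction w arbitrary: v)
  case Nil then show ?case by simp
next
  case (Cons a w)
  have aG: "a \<in> G" and wG: "set w \<subseteq> G" using Cons.prems by auto
  from Cons.prems(2) consider (d) c x where "(c,x) \<in> set (edif E a)" "v = x # w"
    | (r) c v' where "(c,v') \<in> set (kdelta E w)" "v = a # v'"
    by (auto simp: fs_words_def)
  then show ?case
  proof cases
    case d
    have xG: "x \<in> G" using wf_ent_D(1)[OF wf aG d(1)] .
    show ?thesis using d wf_ent_D(2,3)[OF wf aG d(1)] xG wG
      by (auto simp: has_entry_def)
  next
    case r
    have "v' \<in> fs_words (kdelta E w)" using r by (force simp: fs_words_def)
    from Cons.IH[OF wG this] show ?thesis using r aG by (auto simp: has_entry_def)
  qed
qed

lemma kdelta_tau_inv_comm:
  assumes wf: "wf_ent E G Ne" and G: "set w \<subseteq> G" and ne: "w \<noteq> []"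
  shows "eq_mod (has_entry Ne) (fsmap (kdelta E) (hc_tau_inv E w)) (fsmap (hc_tau_inv E) (kdelta E w))"
proof -
  obtain u a where w: "w = u @ [a]" using ne by (metis append_butlast_last_id)
  have aG: "a \<in> G" and uG: "set u \<subseteq> G" using G w by auto
  have ti: "hc_tau_inv E w = [((-1)^(spar E a * wspar E u), a # u)]"
    using hc_tau_inv_nonempty[OF ne, of E] w by simp
  define s where "s = (-1::'a)^(spar E a * wspar E u)"
  have L: "fsmap (kdelta E) (hc_tau_inv E w) =
     map (\<lambda>p. (s * fst p, snd p # u)) (edif E a) @
     map (\<lambda>p. (s * ((-1)^(spar E a) * fst p), a # snd p)) (kdelta E u)"
    by (simp add: ti s_def fsmap_Cons case_prod_beta)
  have ti2: "\<And>v. hc_tau_inv E (v @ [a]) = [((-1)^(spar E a * wspar E v), a # v)]"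
    using hc_tau_inv_nonempty by (simp add: hc_tau_inv_nonempty)
  have ti3: "\<And>x. hc_tau_inv E (u @ [x]) = [((-1)^(spar E x * wspar E u), x # u)]"
    using hc_tau_inv_nonempty by (simp add: hc_tau_inv_nonempty)
  have R: "fsmap (hc_tau_inv E) (kdelta E w) =
     map (\<lambda>p. (fst p * (-1)^(spar E a * wspar E (snd p)), a # snd p)) (kdelta E u) @
     map (\<lambda>p. ((-1)^(wspar E u) * fst p * (-1)^(spar E (snd p) * wspar E u), snd p # u)) (edif E a)"
    unfolding w kdelta_snoc fsmap_append
    by (simp add: fsmap_def ti2 ti3 case_prod_beta o_def)
  have e1: "eq_mod (has_entry Ne) (map (\<lambda>p. (s * fst p, snd p # u)) (edif E a))
     (map (\<lambda>p. ((-1)^(wspar E u) * fst p * (-1)^(spar E (snd p) * wspar E u), snd p # u)) (edif E a))"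
  proof (rule eq_mod_map_fst_snd)
    fix c x assume cx: "(c,x) \<in> set (edif E a)" and nn: "\<not> has_entry Ne (x # u)"
    have "odd (spar E x + spar E a)" using wf_ent_D(3)[OF wf aG cx] nn by (simp add: has_entry_def)
    then have "(-1::'a)^(spar E a * wspar E u) = (-1)^(wspar E u) * (-1)^(spar E x * wspar E u)"
      unfolding power_add[symmetric] by (intro neg_one_power_parity_eq) (auto simp: even_add even_mult_iff)
    then show "s * c = (-1)^(wspar E u) * c * (-1)^(spar E x * wspar E u)" by (simp add: s_def algebra_simps)
  qed
  have e2: "eq_mod (has_entry Ne) (map (\<lambda>p. (s * ((-1)^(spar E a) * fst p), a # snd p)) (kdelta E u))
     (map (\<lambda>p. (fst p * (-1)^(spar E a * wspar E (snd p)), a # snd p)) (kdelta E u))"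
  proof (rule eq_mod_map_fst_snd)
    fix c v assume cv: "(c,v) \<in> set (kdelta E u)" and nn: "\<not> has_entry Ne (a # v)"
    have "v \<in> fs_words (kdelta E u)" using cv by (force simp: fs_words_def)
    then have "odd (wspar E v + wspar E u)" using kdelta_fs_words[OF wf uG] nn by (auto simp: has_entry_def)
    then have "(-1::'a)^(spar E a * wspar E u) * (-1)^(spar E a) = (-1)^(spar E a * wspar E v)"
      unfolding power_add[symmetric] by (intro neg_one_power_parity_eq) (auto simp: even_add even_mult_iff)
    then show "s * ((-1)^(spar E a) * c) = c * (-1)^(spar E a * wspar E v)" by (simp add: s_def algebra_simps)
  qed
  have "eq_mod (has_entry Ne) (fsmap (kdelta E) (hc_tau_inv E w))
     (map (\<lambda>p. ((-1)^(wspar E u) * fst p * (-1)^(spar E (snd p) * wspar E u), snd p # u)) (edif E a) @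
      map (\<lambda>p. (fst p * (-1)^(spar E a * wspar E (snd p)), a # snd p)) (kdelta E u))"
    unfolding L by (rule eq_mod_append[OF e1 e2])
  also have "eq_mod (has_entry Ne) \<dots> (fsmap (hc_tau_inv E) (kdelta E w))"
    unfolding R by (rule lcf_eq_eq_mod) simp
  finally show ?thesis .
qed

lemma kdelta_tau_inv_pow_comm:
  assumes wf: "wf_ent E G Ne" and G: "set w \<subseteq> G" and ne: "w \<noteq> []"
  shows "eq_mod (has_entry Ne) (fsmap (kdelta E) (opow (hc_tau_inv E) r w)) (fsmap (opow (hc_tau_inv E) r) (kdelta E w))"
proof (induction r)
  case 0 then show ?case by (simp add: fsmap_single fsmap_opow_0)
next
  case (Suc r)
  let ?T = "hc_tau_inv E"
  have wr: "\<And>v. v \<in> fs_words (opow ?T r w) \<Longrightarrow> set v \<subseteq> G \<and> v \<noteq> []"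
    using fs_words_tauinv_pow G ne by (metis set_subset_of_mset_eq mset_zero_iff)
  have "fsmap (kdelta E) (opow ?T (Suc r) w) = fsmap (\<lambda>v. fsmap (kdelta E) (?T v)) (opow ?T r w)"
    by (simp add: opow_Suc fsmap_fsmap)
  also have "eq_mod (has_entry Ne) \<dots> (fsmap (\<lambda>v. fsmap ?T (kdelta E v)) (opow ?T r w))"
    by (rule eq_mod_fsmap_cong) (use kdelta_tau_inv_comm[OF wf] wr in blast)
  also have "fsmap (\<lambda>v. fsmap ?T (kdelta E v)) (opow ?T r w) = fsmap ?T (fsmap (kdelta E) (opow ?T r w))"
    by (simp add: fsmap_fsmap)
  also have "eq_mod (has_entry Ne) \<dots> (fsmap ?T (fsmap (opow ?T r) (kdelta E w)))"
  proof (rule eq_mod_fsmap[OF Suc.IH, where P="\<lambda>v. set v \<subseteq> G"])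
    fix v assume "v \<in> fs_words (fsmap (kdelta E) (opow ?T r w)) \<union> fs_words (fsmap (opow ?T r) (kdelta E w))"
    then show "set v \<subseteq> G"
    proof
      assume "v \<in> fs_words (fsmap (kdelta E) (opow ?T r w))"
      then show ?thesis by (rule fs_words_fsmapE) (use wr kdelta_fs_words[OF wf] in blast)
    next
      assume "v \<in> fs_words (fsmap (opow ?T r) (kdelta E w))"
      then show ?thesis by (rule fs_words_fsmapE) (use kdelta_fs_words[OF wf G] fs_words_tauinv_pow set_subset_of_mset_eq in blast)
    qed
  next
    fix v u assume "has_entry Ne v" "u \<in> fs_words (?T v)"
    then show "has_entry Ne u" using fs_words_tauinv by (metis has_entry_set set_mset_mset)
  qed
  also have "fsmap ?T (fsmap (opow ?T r) (kdelta E w)) = fsmap (opow ?T (Suc r)) (kdelta E w)"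
    by (simp add: fsmap_fsmap fsmap_opow_Suc)
  finally show ?case .
qed

lemma delta_fs_words: "i < length w \<Longrightarrow> v \<in> fs_words (hc_delta E i w) \<Longrightarrow> \<exists>c x. (c,x) \<in> set (edif E (w!i)) \<and> v = w[i:=x]"
  by (auto simp: hc_delta_explicit fs_words_def) blast

lemma kdelta_at_fs_words: "v \<in> fs_words (kdelta_at E i w) \<Longrightarrow> i < length w \<and> (\<exists>c x. (c,x) \<in> set (edif E (w!i)) \<and> v = w[i:=x])"
  by (auto simp: kdelta_at_def fs_words_def split: if_splits) blast

lemma delta_fs_words_homog: "wf_ent E G Ne \<Longrightarrow> set w \<subseteq> G \<Longrightarrow> i < length w \<Longrightarrow> v \<in> fs_words (hc_delta E i w) \<Longrightarrow>
   set v \<subseteq> G \<and> length v = length w \<and> (has_entry Ne w \<longrightarrow> has_entry Ne v)"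
proof -
  assume wf: "wf_ent E G Ne" and G: "set w \<subseteq> G" and i: "i < length w" and v: "v \<in> fs_words (hc_delta E i w)"
  obtain c x where cx: "(c,x) \<in> set (edif E (w!i))" "v = w[i:=x]" using delta_fs_words[OF i v] by blast
  have wi: "w!i \<in> G" using G i by auto
  have xG: "x \<in> G" using wf_ent_D(1)[OF wf wi cx(1)] .
  have "has_entry Ne w \<longrightarrow> has_entry Ne v"
  proof
    assume "has_entry Ne w"
    then obtain k where k: "k < length w" "Ne (w!k)" by (auto simp: has_entry_def in_set_conv_nth)
    show "has_entry Ne v"
    proof (cases "k = i")
      case True
      then have "Ne x" using wf_ent_D(2)[OF wf wi cx(1)] k by blast
      then show ?thesis using cx(2) i by (auto simp: has_entry_def set_update_memI)
    next
      case False
      then have "v ! k = w ! k" using cx(2) by simp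
      then show ?thesis using k cx(2) by (auto simp: has_entry_def in_set_conv_nth intro!: exI[of _ k])
    qed
  qed
  then show ?thesis using cx set_update_subset[OF G xG] by simp
qed

lemma kdelta_at_fs_words_homog: "wf_ent E G Ne \<Longrightarrow> set w \<subseteq> G \<Longrightarrow> v \<in> fs_words (kdelta_at E i w) \<Longrightarrow>
   set v \<subseteq> G \<and> length v = length w"
proof -
  assume wf: "wf_ent E G Ne" and G: "set w \<subseteq> G" and v: "v \<in> fs_words (kdelta_at E i w)"
  obtain c x where i: "i < length w" and cx: "(c,x) \<in> set (edif E (w!i))" "v = w[i:=x]"
    using kdelta_at_fs_words[OF v] by blast
  have "w!i \<in> G" using G i by auto
  then have "x \<in> G" using wf_ent_D(1)[OF wf _ cx(1)] by blast
  then show ?thesis using set_update_subset[OF G] cx by simp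
qed

lemma bdelta_fs_words: "v \<in> fs_words (hc_bdelta E w) \<Longrightarrow> \<exists>i<length w. v \<in> fs_words (hc_delta E i w)"
  unfolding hc_bdelta_def fs_words_concat by auto

definition fs_over :: "'e set \<Rightarrow> ('k \<times> 'e list) list \<Rightarrow> bool" where
  "fs_over G c \<longleftrightarrow> (\<forall>v\<in>fs_words c. set v \<subseteq> G)"

lemma fs_over_fsmap: "(\<And>v. v \<in> fs_words c \<Longrightarrow> fs_over G (f v)) \<Longrightarrow> fs_over G (fsmap f c)"
  unfolding fs_over_def by (metis fs_words_fsmapE)

lemma fs_over_kdelta:
  assumes "wf_ent E G Ne" "set w \<subseteq> G"
  shows "fs_over G (kdelta E w)"
  using kdelta_fs_words[OF assms] by (auto simp: fs_over_def)

lemma fs_over_delta: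
  assumes "wf_ent E G Ne" "set w \<subseteq> G" "i < length w"
  shows "fs_over G (hc_delta E i w)"
  using delta_fs_words_homog[OF assms] by (auto simp: fs_over_def)

lemma fs_over_kdelta_at:
  assumes "wf_ent E G Ne" "set w \<subseteq> G"
  shows "fs_over G (kdelta_at E i w)"
  using kdelta_at_fs_words_homog[OF assms] by (auto simp: fs_over_def)

lemma fs_over_D: "fs_over G c \<Longrightarrow> v \<in> fs_words c \<Longrightarrow> set v \<subseteq> G" by (simp add: fs_over_def)

lemma eq_mod_fsmap_homog:
  assumes "eq_mod (has_entry Ne) c d" "fs_over G c" "fs_over G d"
    and "\<And>v u. set v \<subseteq> G \<Longrightarrow> has_entry Ne v \<Longrightarrow> u \<in> fs_words (f v) \<Longrightarrow> has_entry Ne u"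
  shows "eq_mod (has_entry Ne) (fsmap f c) (fsmap f d)"
  by (rule eq_mod_fsmap[OF assms(1), where P="\<lambda>v. set v \<subseteq> G"])
    (use assms(2-4) in \<open>auto simp: fs_over_def\<close>)

lemma kdelta_has_entry:
  assumes "wf_ent E G Ne" "set v \<subseteq> G" "has_entry Ne v" "u \<in> fs_words (kdelta E v)"
  shows "has_entry Ne u"
  using kdelta_fs_words[OF assms(1,2,4)] assms(3) by simp

lemma tau_inv_pow_has_entry: "has_entry Ne v \<Longrightarrow> u \<in> fs_words (opow (hc_tau_inv E) r v) \<Longrightarrow> has_entry Ne u"
  by (metis tau_inv_pow_fs_words has_entry_set)

lemma delta_fs_words_length: "i < length w \<Longrightarrow> v \<in> fs_words (hc_delta E i w) \<Longrightarrow> length v = length w"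
  using delta_fs_words by fastforce

definition rot_delta :: "('k::comm_ring_1, 'e) ent \<Rightarrow> nat \<Rightarrow> nat \<Rightarrow> 'e list \<Rightarrow> ('k \<times> 'e list) list" where
  "rot_delta E i r v = fsmap (opow (hc_tau_inv E) r) (hc_delta E i v)"

lemma rot_delta_fs_words:
  assumes wf: "wf_ent E G Ne" and G: "set x \<subseteq> G" and i: "i < length x" and v: "v \<in> fs_words (rot_delta E i r x)"
  shows "set v \<subseteq> G \<and> length v = length x \<and> (has_entry Ne x \<longrightarrow> has_entry Ne v)"
proof -
  obtain v0 where v0: "v0 \<in> fs_words (hc_delta E i x)" "v \<in> fs_words (opow (hc_tau_inv E) r v0)"
    using v unfolding rot_delta_def by (rule fs_words_fsmapE)
  have m: "mset v = mset v0" by (rule fs_words_tauinv_pow[OF v0(2)])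
  have s: "set v = set v0" using m by (metis set_mset_mset)
  have l: "length v = length v0" using arg_cong[OF m, of size] by simp
  have "set v0 \<subseteq> G \<and> length v0 = length x \<and> (has_entry Ne x \<longrightarrow> has_entry Ne v0)" by (rule delta_fs_words_homog[OF wf G i v0(1)])
  then show ?thesis using s l by (simp add: has_entry_def)
qed

definition shuf_sign :: "('k::comm_ring_1, 'e) ent \<Rightarrow> bool list \<Rightarrow> 'e list \<Rightarrow> 'e list \<Rightarrow> 'k" where
  "shuf_sign E bs X Y = (-1)^(shsign bs (map (spar E) X) (map (spar E) Y))"

definition shuf_kdelta :: "('k::comm_ring_1, 'e) ent \<Rightarrow> bool list \<Rightarrow> 'e list \<Rightarrow> 'e list \<Rightarrow> ('k \<times> 'e list) list" where
  "shuf_kdelta E bs X Y = map (\<lambda>p. (shuf_sign E bs (snd p) Y * fst p, shuf bs (snd p) Y)) (kdelta E X) @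
     map (\<lambda>p. ((-1)^(wspar E X) * shuf_sign E bs X (snd p) * fst p, shuf bs X (snd p))) (kdelta E Y)"

definition fits_shuffle :: "bool list \<Rightarrow> 'x list \<Rightarrow> 'y list \<Rightarrow> bool" where
  "fits_shuffle bs X Y \<longleftrightarrow> length (filter Not bs) = length X \<and> length (filter id bs) = length Y"

lemma set_shuf: "fits_shuffle bs X Y \<Longrightarrow> set (shuf bs X Y) = set X \<union> set Y"
proof (induction bs arbitrary: X Y)
  case Nil then show ?case by (simp add: fits_shuffle_def)
next
  case (Cons b bs)
  show ?case
  proof (cases b)
    case True
    then obtain y Y' where "Y = y # Y'" using Cons.prems by (cases Y) (auto simp: fits_shuffle_def)
    then show ?thesis using Cons True by (auto simp: fits_shuffle_def)
  next
    case False
    then obtain x X' where "X = x # X'" using Cons.prems by (cases X) (auto simp: fits_shuffle_def)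
    then show ?thesis using Cons False by (auto simp: fits_shuffle_def)
  qed
qed

lemma shb_fits_shuffle: "bs \<in> set (shb p q) \<Longrightarrow> length (filter Not bs) = p \<and> length (filter id bs) = q"
  by (induction p q arbitrary: bs rule: shb.induct) auto

lemma has_entry_shuf:
  assumes "fits_shuffle bs X Y" "has_entry N X \<or> has_entry N Y"
  shows "has_entry N (shuf bs X Y)"
  using assms(2) unfolding has_entry_def set_shuf[OF assms(1)] by blast

lemma eq_mod_fsmap_shuf_left:
  assumes "eq_mod (has_entry N) c d" and "\<And>v. v \<in> fs_words c \<union> fs_words d \<Longrightarrow> length v = length X"
    and "fits_shuffle bs X Y"
  shows "eq_mod (has_entry N) (fsmap (\<lambda>X'. [(f X', shuf bs X' Y)]) c) (fsmap (\<lambda>X'. [(f X', shuf bs X' Y)]) d)"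
proof (rule eq_mod_fsmap[OF assms(1), where P="\<lambda>v. length v = length X"])
  fix v u assume "length v = length X" "has_entry N v" "u \<in> fs_words [(f v, shuf bs v Y)]"
  moreover from this(1) have "fits_shuffle bs v Y" using assms(3) by (simp add: fits_shuffle_def)
  ultimately show "has_entry N u" using has_entry_shuf by auto
qed (rule assms(2))

lemma eq_mod_fsmap_shuf_right:
  assumes "eq_mod (has_entry N) c d" and "\<And>v. v \<in> fs_words c \<union> fs_words d \<Longrightarrow> length v = length Y"
    and "fits_shuffle bs X Y"
  shows "eq_mod (has_entry N) (fsmap (\<lambda>Y'. [(f Y', shuf bs X Y')]) c) (fsmap (\<lambda>Y'. [(f Y', shuf bs X Y')]) d)"
proof (rule eq_mod_fsmap[OF assms(1), where P="\<lambda>v. length v = length Y"])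
  fix v u assume "length v = length Y" "has_entry N v" "u \<in> fs_words [(f v, shuf bs X v)]"
  moreover from this(1) have "fits_shuffle bs X v" using assms(3) by (simp add: fits_shuffle_def)
  ultimately show "has_entry N u" using has_entry_shuf by auto
qed (rule assms(2))

lemma lcf_map_cons: "lcf (map (\<lambda>p. (k * fst p, b # snd p)) c) w =
   (case w of [] \<Rightarrow> 0 | h # t \<Rightarrow> if h = b then k * lcf c t else 0)"
  by (induction c) (auto split: list.splits simp: algebra_simps)

lemma eq_mod_map_cons: "eq_mod (has_entry Ne) c d \<Longrightarrow>
   eq_mod (has_entry Ne) (map (\<lambda>p. (k * fst p, b # snd p)) c) (map (\<lambda>p. (k * fst p, b # snd p)) d)"
  unfolding eq_mod_def lcf_map_cons by (auto split: list.splits simp: has_entry_def)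

text \<open>The Leibniz rule for kdelta on a shuffle of two words.\<close>

lemma kdelta_shuf_Cons_right:
  fixes E :: "('k::comm_ring_1, 'e) ent"
  assumes wf: "wf_ent E G Ne" and v: "fits_shuffle bs X Y0" and GX: "set X \<subseteq> G" and cG: "c0 \<in> G"
    and IH: "eq_mod (has_entry Ne) (map (\<lambda>p. (shuf_sign E bs X Y0 * fst p, snd p)) (kdelta E (shuf bs X Y0)))
               (shuf_kdelta E bs X Y0)"
  shows "eq_mod (has_entry Ne) (map (\<lambda>p. (shuf_sign E (True#bs) X (c0#Y0) * fst p, snd p)) (kdelta E (shuf (True#bs) X (c0#Y0))))
           (shuf_kdelta E (True#bs) X (c0#Y0))"
proof -
  let ?S = "shuf bs X Y0"
  let ?kz = "shuf_sign E bs X Y0"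
  let ?qb = "spar E c0" and ?QX = "wspar E X"
  have ksT: "\<And>Z W. shuf_sign E (True # bs) Z (c0 # W) = (-1)^(?qb * wspar E Z) * shuf_sign E bs Z W"
    by (simp add: shuf_sign_def power_add wspar_def)
  have ksT': "\<And>x. shuf_sign E (True # bs) X (x # Y0) = (-1)^(spar E x * ?QX) * ?kz"
    by (simp add: shuf_sign_def power_add wspar_def)
  let ?Le = "map (\<lambda>p. ((-1)^(?qb * ?QX) * ?kz * fst p, snd p # ?S)) (edif E c0)"
  let ?Ee = "map (\<lambda>p. ((-1)^?QX * ((-1)^(spar E (snd p) * ?QX) * ?kz) * fst p, snd p # ?S)) (edif E c0)"
  let ?kk = "(-1)^(?qb * ?QX + ?qb) :: 'k"
  let ?Xp = "map (\<lambda>p. ((-1)^(?qb * wspar E (snd p)) * shuf_sign E bs (snd p) Y0 * fst p, c0 # shuf bs (snd p) Y0)) (kdelta E X)"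
  let ?Xq = "map (\<lambda>p. (?kk * (shuf_sign E bs (snd p) Y0 * fst p), c0 # shuf bs (snd p) Y0)) (kdelta E X)"
  let ?Yp = "map (\<lambda>p. (?kk * ((-1)^?QX * shuf_sign E bs X (snd p) * fst p), c0 # shuf bs X (snd p))) (kdelta E Y0)"
  have L: "map (\<lambda>p. (shuf_sign E (True#bs) X (c0#Y0) * fst p, snd p)) (kdelta E (shuf (True#bs) X (c0#Y0))) =
     ?Le @ map (\<lambda>p. (?kk * fst p, c0 # snd p)) (map (\<lambda>p. (?kz * fst p, snd p)) (kdelta E ?S))"
    by (simp add: ksT case_prod_beta algebra_simps power_add)
  have R: "shuf_kdelta E (True#bs) X (c0#Y0) = ?Xp @ ?Ee @ ?Yp"
    by (simp add: shuf_kdelta_def ksT ksT' case_prod_beta algebra_simps power_add)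
  have mc: "map (\<lambda>p. (?kk * fst p, c0 # snd p)) (shuf_kdelta E bs X Y0) = ?Xq @ ?Yp"
    by (simp add: shuf_kdelta_def case_prod_beta)
  have e1: "eq_mod (has_entry Ne) ?Le ?Ee"
  proof (rule eq_mod_map_fst_snd)
    fix c x assume cx: "(c,x) \<in> set (edif E c0)" and nn: "\<not> has_entry Ne (x # ?S)"
    have "odd (spar E x + ?qb)" using wf_ent_D(3)[OF wf cG cx] nn by (simp add: has_entry_def)
    then have "(-1::'k)^(?qb * ?QX) = (-1)^?QX * (-1)^(spar E x * ?QX)"
      unfolding power_add[symmetric] by (intro neg_one_power_parity_eq) (auto simp: even_add even_mult_iff)
    then show "(-1)^(?qb * ?QX) * ?kz * c = (-1)^?QX * ((-1)^(spar E x * ?QX) * ?kz) * c" by simp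
  qed
  have e2: "eq_mod (has_entry Ne) ?Xq ?Xp"
  proof (rule eq_mod_map_fst_snd)
    fix c X' assume cx: "(c,X') \<in> set (kdelta E X)" and nn: "\<not> has_entry Ne (c0 # shuf bs X' Y0)"
    have X'w: "X' \<in> fs_words (kdelta E X)" using cx by (force simp: fs_words_def)
    have lX': "length X' = length X" and GX': "set X' \<subseteq> G"
      using kdelta_fs_words[OF wf GX X'w] by auto
    have "fits_shuffle bs X' Y0" using v lX' by (simp add: fits_shuffle_def)
    then have "set X' \<subseteq> set (c0 # shuf bs X' Y0)" using set_shuf by auto
    then have "\<not> has_entry Ne X'" using nn unfolding has_entry_def by blast
    then have "odd (wspar E X' + ?QX)" using kdelta_fs_words[OF wf GX X'w] by simp
    then have "(-1::'k)^(?qb * ?QX + ?qb) = (-1)^(?qb * wspar E X')"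
      by (intro neg_one_power_parity_eq) (auto simp: even_add even_mult_iff)
    then show "?kk * (shuf_sign E bs X' Y0 * c) = (-1)^(?qb * wspar E X') * shuf_sign E bs X' Y0 * c" by simp
  qed
  have "eq_mod (has_entry Ne) (map (\<lambda>p. (shuf_sign E (True#bs) X (c0#Y0) * fst p, snd p)) (kdelta E (shuf (True#bs) X (c0#Y0))))
      (?Ee @ (?Xp @ ?Yp))"
    unfolding L
  proof (rule eq_mod_append[OF e1])
    have "eq_mod (has_entry Ne) (map (\<lambda>p. (?kk * fst p, c0 # snd p)) (map (\<lambda>p. (?kz * fst p, snd p)) (kdelta E ?S)))
        (map (\<lambda>p. (?kk * fst p, c0 # snd p)) (shuf_kdelta E bs X Y0))"
      by (rule eq_mod_map_cons[OF IH])
    also have "map (\<lambda>p. (?kk * fst p, c0 # snd p)) (shuf_kdelta E bs X Y0) = ?Xq @ ?Yp" by (rule mc)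
    also have "eq_mod (has_entry Ne) \<dots> (?Xp @ ?Yp)" by (rule eq_mod_append[OF e2 eq_mod_refl])
    finally show "eq_mod (has_entry Ne) (map (\<lambda>p. (?kk * fst p, c0 # snd p)) (map (\<lambda>p. (?kz * fst p, snd p)) (kdelta E ?S))) (?Xp @ ?Yp)" .
  qed
  also have "eq_mod (has_entry Ne) \<dots> (shuf_kdelta E (True#bs) X (c0#Y0))"
    unfolding R by (rule lcf_eq_eq_mod) simp
  finally show ?thesis .
qed

lemma kdelta_shuf:
  assumes wf: "wf_ent E G Ne"
  shows "fits_shuffle bs X Y \<Longrightarrow> set X \<subseteq> G \<Longrightarrow> set Y \<subseteq> G \<Longrightarrow>
    eq_mod (has_entry Ne) (map (\<lambda>p. (shuf_sign E bs X Y * fst p, snd p)) (kdelta E (shuf bs X Y))) (shuf_kdelta E bs X Y)"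
proof (induction bs arbitrary: X Y)
  case Nil
  then have "X = []" "Y = []" by (auto simp: fits_shuffle_def)
  then show ?case by (simp add: shuf_kdelta_def)
next
  case (Cons b bs)
  show ?case
  proof (cases b)
    case False
    then obtain a X0 where X: "X = a # X0" using Cons.prems by (cases X) (auto simp: fits_shuffle_def)
    have v: "fits_shuffle bs X0 Y" using Cons.prems X False by (simp add: fits_shuffle_def)
    have G: "set X0 \<subseteq> G" using Cons.prems X by auto
    note IH = Cons.IH[OF v G Cons.prems(3)]
    let ?S = "shuf bs X0 Y"
    let ?kz = "shuf_sign E bs X0 Y"
    let ?p1 = "map (\<lambda>p. (?kz * fst p, snd p # ?S)) (edif E a)"
    have ksF: "\<And>Z W. shuf_sign E (False # bs) (a # Z) W = shuf_sign E bs Z W" by (simp add: shuf_sign_def)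
    have ksF': "\<And>x. shuf_sign E (False # bs) (x # X0) Y = shuf_sign E bs X0 Y" by (simp add: shuf_sign_def)
    have L: "map (\<lambda>p. (shuf_sign E (b#bs) X Y * fst p, snd p)) (kdelta E (shuf (b#bs) X Y)) =
       ?p1 @ map (\<lambda>p. ((-1)^(spar E a) * fst p, a # snd p)) (map (\<lambda>p. (?kz * fst p, snd p)) (kdelta E ?S))"
      using False by (simp add: X ksF case_prod_beta algebra_simps)
    have R: "shuf_kdelta E (b#bs) X Y = ?p1 @ map (\<lambda>p. ((-1)^(spar E a) * fst p, a # snd p)) (shuf_kdelta E bs X0 Y)"
      using False by (simp add: X shuf_kdelta_def ksF ksF' case_prod_beta algebra_simps power_add)
    show ?thesis unfolding L R by (rule eq_mod_append[OF eq_mod_refl eq_mod_map_cons[OF IH]])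
  next
    case True
    then obtain c0 Y0 where Y: "Y = c0 # Y0" using Cons.prems by (cases Y) (auto simp: fits_shuffle_def)
    have v: "fits_shuffle bs X Y0" using Cons.prems Y True by (simp add: fits_shuffle_def)
    have G: "set Y0 \<subseteq> G" and cG: "c0 \<in> G" using Cons.prems Y by auto
    from True have b: "b = True" by simp
    show ?thesis
      unfolding b Y by (rule kdelta_shuf_Cons_right[OF wf v Cons.prems(2) cG Cons.IH[OF v Cons.prems(2) G]])
  qed
qed

lemma wspar_take_update: "i < j \<Longrightarrow> j \<le> length w \<Longrightarrow> wspar E (take j (w[i:=x])) + spar E (w!i) = wspar E (take j w) + spar E x"
proof -
  assume ij: "i < j" "j \<le> length w"
  have "take j (w[i:=x]) = (take j w)[i:=x]" by (simp add: take_update_swap)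
  moreover have "i < length (take j w)" using ij by simp
  moreover have "take j w ! i = w ! i" using ij by simp
  ultimately show ?thesis using wspar_upd[of i "take j w" E x] by simp
qed

lemma koszul_sign_swap:
  assumes "i \<noteq> j" "i < length w" "j < length w"
    and "odd (spar E x + spar E (w!i))" "odd (spar E y + spar E (w!j))"
  shows "(-1::'k::comm_ring_1)^(wspar E (take i w) + wspar E (take j (w[i:=x]))) =
         - ((-1)^(wspar E (take j w) + wspar E (take i (w[j:=y]))))"
proof -
  have "even (wspar E (take i w) + wspar E (take j (w[i:=x]))) =
        even (wspar E (take j w) + wspar E (take i (w[j:=y])) + 1)"
  proof (cases "j < i")
    case True
    have "wspar E (take j (w[i:=x])) = wspar E (take j w)" using True by simp
    moreover have "wspar E (take i (w[j:=y])) + spar E (w!j) = wspar E (take i w) + spar E y"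
      by (rule wspar_take_update[OF True less_imp_le[OF assms(2)]])
    ultimately show ?thesis using assms(5) by presburger
  next
    case False
    with assms(1) have ij: "i < j" by simp
    have "wspar E (take i (w[j:=y])) = wspar E (take i w)" using ij by simp
    moreover have "wspar E (take j (w[i:=x])) + spar E (w!i) = wspar E (take j w) + spar E x"
      by (rule wspar_take_update[OF ij less_imp_le[OF assms(3)]])
    ultimately show ?thesis using assms(4) by presburger
  qed
  then have "(-1::'k)^(wspar E (take i w) + wspar E (take j (w[i:=x]))) =
      (-1)^(wspar E (take j w) + wspar E (take i (w[j:=y])) + 1)"
    by (rule neg_one_power_parity_eq)
  then show ?thesis by simp
qed

section \<open>The Hochschild complex of a dg algebra\<close>

context
  fixes D :: "('k::field, 'a::ring_1) dga"
  assumes D: "is_dga D"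
begin

lemma dga_even_odd: "dev D \<inter> dodd D = {0}"
  using D unfolding is_dga_def by (elim conjE) assumption

lemma dga_one_even: "1 \<in> dev D"
  using D unfolding is_dga_def by (elim conjE) assumption

lemma dga_ddif_even: "ddif D ` dev D \<subseteq> dodd D"
  using D unfolding is_dga_def by (elim conjE) assumption

lemma dga_ddif_odd: "ddif D ` dodd D \<subseteq> dev D"
  using D unfolding is_dga_def by (elim conjE) assumption

lemma dga_ddif_ddif: "ddif D (ddif D a) = 0"
proof -
  have "\<forall>x. ddif D (ddif D x) = 0" using D unfolding is_dga_def by (elim conjE) assumption
  then show ?thesis by blast
qed

lemma dga_ddif_mult_even: "x \<in> dev D \<Longrightarrow> ddif D (x * y) = ddif D x * y + x * ddif D y"
proof -
  have "\<forall>x\<in>dev D. \<forall>y. ddif D (x * y) = ddif D x * y + x * ddif D y"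
    using D unfolding is_dga_def by (elim conjE) assumption
  then show "x \<in> dev D \<Longrightarrow> ?thesis" by blast
qed

lemma dga_zero_even: "0 \<in> dev D"
  using dga_even_odd by auto

lemma dga_ddif_zero: "ddif D 0 = 0"
  using dga_ddif_mult_even[OF dga_zero_even, of 0] by simp

lemma dga_ddif_one: "ddif D 1 = 0"
  using dga_ddif_mult_even[OF dga_one_even, of 1] by simp

lemma dga_ddif_homog: "a \<in> homog D \<Longrightarrow> ddif D a \<in> homog D"
  using dga_ddif_even dga_ddif_odd unfolding homog_def image_subset_iff by blast

lemma dga_ddif_parity:
  assumes a: "a \<in> homog D" and da: "ddif D a \<noteq> 0"
  shows "odd (dg D (ddif D a) + dg D a)"
proof (cases "a \<in> dev D")
  case True
  have "a \<notin> dodd D"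
  proof
    assume "a \<in> dodd D"
    with True dga_even_odd have "a = 0" by blast
    with da dga_ddif_zero show False by simp
  qed
  moreover have "ddif D a \<in> dodd D" using True dga_ddif_even by blast
  ultimately show ?thesis by (simp add: dg_def)
next
  case False
  then have odd: "a \<in> dodd D" using a by (simp add: homog_def)
  then have "ddif D a \<in> dev D" using dga_ddif_odd by blast
  then have "ddif D a \<notin> dodd D" using dga_even_odd da by blast
  then show ?thesis using odd by (simp add: dg_def)
qed

lemma dga_dg_one:
  assumes "(1::'a) \<noteq> 0"
  shows "dg D 1 = 0"
proof -
  have "1 \<notin> dodd D" using dga_one_even dga_even_odd assms by blast
  then show ?thesis by (simp add: dg_def)
qed

end

abbreviation zero_ent :: "'a::zero \<Rightarrow> bool" where "zero_ent a \<equiv> a = 0"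

lemma edif_entA[simp]: "edif (entA D) a = [(1, ddif D a)]" by (simp add: entA_def)

lemma epar_entA[simp]: "epar (entA D) a = dg D a" by (simp add: entA_def)

lemma eone_entA[simp]: "eone (entA D) = 1" by (simp add: entA_def)

lemma wf_entA: "is_dga D \<Longrightarrow> wf_ent (entA D) (homog D) zero_ent"
  using dga_ddif_homog[of D] dga_ddif_parity[of D] dga_ddif_zero[of D] by (auto simp: wf_ent_def)

lemma kdelta_at_entA: "j < length v \<Longrightarrow> kdelta_at (entA D) j v = [((-1)^(wspar (entA D) (take j v)), v[j := ddif D (v!j)])]"
  by (simp add: kdelta_at_def)

lemma kdelta_kdelta_at_anticomm:
  assumes D: "is_dga D" and G: "set w \<subseteq> homog D" and i: "i < length w"
  shows "eq_mod (has_entry zero_ent) (fsmap (kdelta (entA D)) (kdelta_at (entA D) i w)) (fsneg (fsmap (kdelta_at (entA D) i) (kdelta (entA D) w)))"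
proof -
  let ?E = "entA D"
  define e where "e = ddif D (w!i)"
  define w' where "w' = w[i:=e]"
  define si where "si = (-1::'a)^(wspar ?E (take i w))"
  have lw': "length w' = length w" by (simp add: w'_def)
  have LHS: "fsmap (kdelta ?E) (kdelta_at ?E i w) = concat (map (\<lambda>j. map (\<lambda>(c,v). (si * c, v)) (kdelta_at ?E j w')) [0..<length w])"
    by (simp add: kdelta_at_entA[OF i] fsmap_Cons kdelta_eq_concat_kdelta_at lw' map_concat si_def w'_def e_def o_def)
  have RHS: "fsneg (fsmap (kdelta_at ?E i) (kdelta ?E w)) = concat (map (\<lambda>j. fsneg (fsmap (kdelta_at ?E i) (kdelta_at ?E j w))) [0..<length w])"
    by (simp add: kdelta_eq_concat_kdelta_at fsmap_concat fsneg_def map_concat o_def)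
  show ?thesis unfolding LHS RHS
  proof (rule eq_mod_concat_map)
    fix j assume "j \<in> set [0..<length w]"
    then have j: "j < length w" by simp
    define wj where "wj = w[j := ddif D (w!j)]"
    have l1: "map (\<lambda>(c,v). (si * c, v)) (kdelta_at ?E j w') = [(si * (-1)^(wspar ?E (take j w')), w'[j := ddif D (w'!j)])]"
      using j lw' by (simp add: kdelta_at_entA)
    have l2: "fsneg (fsmap (kdelta_at ?E i) (kdelta_at ?E j w)) = [(- ((-1)^(wspar ?E (take j w)) * (-1)^(wspar ?E (take i wj))), wj[i := ddif D (wj!i)])]"
      using j i by (simp add: kdelta_at_entA fsmap_Cons fsneg_def wj_def)
    show "eq_mod (has_entry zero_ent) (map (\<lambda>(c,v). (si * c, v)) (kdelta_at ?E j w')) (fsneg (fsmap (kdelta_at ?E i) (kdelta_at ?E j w)))"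
      unfolding l1 l2
    proof (cases "j = i")
      case True
      have n1: "has_entry zero_ent (w'[j := ddif D (w'!j)])" using True i dga_ddif_ddif[OF D]
        by (auto simp: has_entry_def w'_def e_def set_update_memI)
      have n2: "has_entry zero_ent (wj[i := ddif D (wj!i)])" using True i dga_ddif_ddif[OF D]
        by (auto simp: has_entry_def wj_def set_update_memI)
      show "eq_mod (has_entry zero_ent) [(si * (-1)^(wspar ?E (take j w')), w'[j := ddif D (w'!j)])]
          [(- ((-1)^(wspar ?E (take j w)) * (-1)^(wspar ?E (take i wj))), wj[i := ddif D (wj!i)])]"
        by (rule eq_mod_trans[OF eq_mod_null eq_mod_sym[OF eq_mod_null]]) (use n1 n2 in auto)
    next
      case False
      have wordeq: "w'[j := ddif D (w'!j)] = wj[i := ddif D (wj!i)]"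
        using False i j by (simp add: w'_def wj_def e_def list_update_swap)
      show "eq_mod (has_entry zero_ent) [(si * (-1)^(wspar ?E (take j w')), w'[j := ddif D (w'!j)])]
          [(- ((-1)^(wspar ?E (take j w)) * (-1)^(wspar ?E (take i wj))), wj[i := ddif D (wj!i)])]"
        unfolding wordeq
      proof (rule eq_mod_single)
        assume nn: "\<not> has_entry zero_ent (wj[i := ddif D (wj!i)])"
        have wji: "wj ! i = w ! i" using False by (simp add: wj_def)
        have ne1: "ddif D (w!i) \<noteq> 0" using nn i wji by (auto simp: has_entry_def wj_def set_update_memI)
        have eqj: "(wj[i := ddif D (wj!i)]) ! j = ddif D (w!j)" using False j by (simp add: wj_def)
        have mem: "(wj[i := ddif D (wj!i)]) ! j \<in> set (wj[i := ddif D (wj!i)])"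
          by (rule nth_mem) (simp add: wj_def j)
        have ne2: "ddif D (w!j) \<noteq> 0" using nn mem unfolding has_entry_def eqj by blast
        have hi: "w!i \<in> homog D" and hj: "w!j \<in> homog D" using G i j by auto
        have pi: "odd (spar ?E e + spar ?E (w!i))" using dga_ddif_parity[OF D hi ne1] by (simp add: spar_def e_def)
        have pj: "odd (spar ?E (ddif D (w!j)) + spar ?E (w!j))" using dga_ddif_parity[OF D hj ne2] by (simp add: spar_def)
        have "(-1::'a)^(wspar ?E (take i w) + wspar ?E (take j w')) =
            - ((-1)^(wspar ?E (take j w) + wspar ?E (take i wj)))"
          unfolding w'_def wj_def by (rule koszul_sign_swap[OF False[symmetric] i j pi pj])
        then show "si * (-1)^(wspar ?E (take j w')) = - ((-1)^(wspar ?E (take j w)) * (-1)^(wspar ?E (take i wj)))"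
          by (simp add: si_def power_add)
      qed
    qed
  qed
qed

lemma kdelta_delta_anticomm:
  assumes D: "is_dga D" and G: "set x \<subseteq> homog D" and i: "i < length x"
  shows "eq_mod (has_entry zero_ent) (fsmap (kdelta (entA D)) (hc_delta (entA D) i x))
           (fsneg (fsmap (hc_delta (entA D) i) (kdelta (entA D) x)))"
proof -
  let ?E = "entA D" and ?G = "homog D"
  have wf: "wf_ent ?E ?G zero_ent" by (rule wf_entA[OF D])
  have "eq_mod (has_entry zero_ent) (fsmap (kdelta ?E) (hc_delta ?E i x)) (fsmap (kdelta ?E) (kdelta_at ?E i x))"
    by (rule eq_mod_fsmap_homog[OF delta_eq_mod_kdelta_at[OF wf G i] fs_over_delta[OF wf G i]
          fs_over_kdelta_at[OF wf G] kdelta_has_entry[OF wf]])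
  also have "eq_mod (has_entry zero_ent) \<dots> (fsneg (fsmap (kdelta_at ?E i) (kdelta ?E x)))"
    by (rule kdelta_kdelta_at_anticomm[OF D G i])
  also have "eq_mod (has_entry zero_ent) \<dots> (fsneg (fsmap (hc_delta ?E i) (kdelta ?E x)))"
  proof (rule eq_mod_fsneg, rule eq_mod_fsmap_cong)
    fix v assume v: "v \<in> fs_words (kdelta ?E x)"
    have "i < length v" using kdelta_length[OF v] i by simp
    then show "eq_mod (has_entry zero_ent) (kdelta_at ?E i v) (hc_delta ?E i v)"
      using delta_eq_mod_kdelta_at[OF wf fs_over_D[OF fs_over_kdelta[OF wf G] v]] eq_mod_sym by blast
  qed
  finally show ?thesis .
qed

lemma kdelta_rot_delta_anticomm:
  assumes D: "is_dga D" and G: "set x \<subseteq> homog D" and i: "i < length x"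
  shows "eq_mod (has_entry zero_ent) (fsmap (kdelta (entA D)) (rot_delta (entA D) i r x))
           (fsneg (fsmap (rot_delta (entA D) i r) (kdelta (entA D) x)))"
proof -
  let ?E = "entA D" and ?G = "homog D"
  let ?T = "opow (hc_tau_inv ?E) r"
  have wf: "wf_ent ?E ?G zero_ent" by (rule wf_entA[OF D])
  have Gd: "fs_over ?G (hc_delta ?E i x)" by (rule fs_over_delta[OF wf G i])
  have Gk: "fs_over ?G (kdelta ?E x)" by (rule fs_over_kdelta[OF wf G])
  have "fsmap (kdelta ?E) (rot_delta ?E i r x) = fsmap (\<lambda>v. fsmap (kdelta ?E) (?T v)) (hc_delta ?E i x)"
    by (simp add: rot_delta_def fsmap_fsmap)
  also have "eq_mod (has_entry zero_ent) \<dots> (fsmap (\<lambda>v. fsmap ?T (kdelta ?E v)) (hc_delta ?E i x))"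
  proof (rule eq_mod_fsmap_cong)
    fix v assume v: "v \<in> fs_words (hc_delta ?E i x)"
    have "v \<noteq> []" using delta_fs_words_length[OF i v] i by auto
    then show "eq_mod (has_entry zero_ent) (fsmap (kdelta ?E) (?T v)) (fsmap ?T (kdelta ?E v))"
      using kdelta_tau_inv_pow_comm[OF wf fs_over_D[OF Gd v]] by blast
  qed
  also have "fsmap (\<lambda>v. fsmap ?T (kdelta ?E v)) (hc_delta ?E i x) = fsmap ?T (fsmap (kdelta ?E) (hc_delta ?E i x))"
    by (simp add: fsmap_fsmap)
  also have "eq_mod (has_entry zero_ent) \<dots> (fsmap ?T (fsneg (fsmap (hc_delta ?E i) (kdelta ?E x))))"
  proof (rule eq_mod_fsmap_homog[OF kdelta_delta_anticomm[OF D G i]])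
    show "fs_over ?G (fsmap (kdelta ?E) (hc_delta ?E i x))"
      by (rule fs_over_fsmap) (use fs_over_kdelta[OF wf] fs_over_D[OF Gd] in blast)
    show "fs_over ?G (fsneg (fsmap (hc_delta ?E i) (kdelta ?E x)))"
      unfolding fs_over_def fs_words_fsneg
    proof
      fix u assume "u \<in> fs_words (fsmap (hc_delta ?E i) (kdelta ?E x))"
      then obtain v where v: "v \<in> fs_words (kdelta ?E x)" "u \<in> fs_words (hc_delta ?E i v)"
        by (rule fs_words_fsmapE)
      have "i < length v" using kdelta_length[OF v(1)] i by simp
      then show "set u \<subseteq> ?G" using fs_over_delta[OF wf fs_over_D[OF Gk v(1)]] v(2) by (simp add: fs_over_def)
    qed
  qed (rule tau_inv_pow_has_entry)
  also have "fsmap ?T (fsneg (fsmap (hc_delta ?E i) (kdelta ?E x))) = fsneg (fsmap (rot_delta ?E i r) (kdelta ?E x))"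
    by (simp add: fsmap_fsneg rot_delta_def[abs_def] fsmap_fsmap)
  finally show ?thesis .
qed

lemma rot_delta_wpar:
  assumes D: "is_dga D" and G: "set x \<subseteq> homog D" and i: "i < length x"
    and v: "v \<in> fs_words (rot_delta (entA D) i r x)" and nn: "\<not> has_entry zero_ent v"
  shows "odd (wpar (entA D) v + wpar (entA D) x)"
proof -
  let ?E = "entA D"
  obtain v0 where v0: "v0 \<in> fs_words (hc_delta ?E i x)" "v \<in> fs_words (opow (hc_tau_inv ?E) r v0)"
    using v unfolding rot_delta_def by (rule fs_words_fsmapE)
  have m: "mset v = mset v0" by (rule fs_words_tauinv_pow[OF v0(2)])
  obtain c e where ce: "(c,e) \<in> set (edif ?E (x!i))" "v0 = x[i:=e]" using delta_fs_words[OF i v0(1)] by blast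
  have e: "e = ddif D (x!i)" using ce(1) by simp
  have "set v = set v0" using m by (metis set_mset_mset)
  then have nn0: "\<not> has_entry zero_ent v0" using nn by (simp add: has_entry_def)
  then have "e \<noteq> 0" using has_entry_update[OF i] ce(2) by blast
  moreover have "x!i \<in> homog D" using G i by auto
  ultimately have "odd (spar ?E e + spar ?E (x!i))" using dga_ddif_parity[OF D] e by (simp add: spar_def)
  then have "odd (wspar ?E v0 + wspar ?E x)" using wspar_upd[OF i, of ?E e] ce(2) by presburger
  moreover have "wspar ?E v = wspar ?E v0" by (rule wspar_mset[OF m])
  moreover have "x \<noteq> []" using i by auto
  moreover have "length v = length v0" using arg_cong[OF m, of size] by simp
  then have "v \<noteq> []" using ce(2) \<open>x \<noteq> []\<close> by auto
  ultimately show ?thesis using wpar_wspar[of x ?E] wpar_wspar[of v ?E] by presburger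
qed

lemma tau_inv_pow_kdelta_wpar:
  assumes D: "is_dga D" and G: "set x \<subseteq> homog D" and xne: "x \<noteq> []"
    and v: "v \<in> fs_words (fsmap (opow (hc_tau_inv (entA D)) r) (kdelta (entA D) x))" and nn: "\<not> has_entry zero_ent v"
  shows "odd (wpar (entA D) v + wpar (entA D) x)"
proof -
  let ?E = "entA D"
  obtain v0 where v0: "v0 \<in> fs_words (kdelta ?E x)" "v \<in> fs_words (opow (hc_tau_inv ?E) r v0)"
    using v by (rule fs_words_fsmapE)
  have m: "mset v = mset v0" by (rule fs_words_tauinv_pow[OF v0(2)])
  have "set v = set v0" using m by (metis set_mset_mset)
  then have nn0: "\<not> has_entry zero_ent v0" using nn by (simp add: has_entry_def)
  have l: "length v0 = length x" by (rule kdelta_length[OF v0(1)])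
  have "odd (wspar ?E v0 + wspar ?E x)" using kdelta_fs_words[OF wf_entA[OF D] G v0(1)] nn0 by simp
  moreover have "wspar ?E v = wspar ?E v0" by (rule wspar_mset[OF m])
  moreover have "length v = length v0" using arg_cong[OF m, of size] by simp
  then have "v \<noteq> []" using l xne by auto
  ultimately show ?thesis using wpar_wspar[OF xne, of ?E] wpar_wspar[of v ?E] by presburger
qed

lemma rot_delta_keeps_unit:
  assumes D: "is_dga D" and one: "1 \<in> set x" and i: "i < length x" and v: "v \<in> fs_words (rot_delta (entA D) i r x)"
  shows "1 \<in> set v \<or> 0 \<in> set v"
proof -
  obtain v0 where v0: "v0 \<in> fs_words (hc_delta (entA D) i x)" "v \<in> fs_words (opow (hc_tau_inv (entA D)) r v0)"
    using v unfolding rot_delta_def by (rule fs_words_fsmapE)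
  have s: "set v = set v0" using fs_words_tauinv_pow[OF v0(2)] by (metis set_mset_mset)
  have v0e: "v0 = x[i := ddif D (x!i)]" using delta_fs_words[OF i v0(1)] by auto
  show ?thesis
  proof (cases "x!i = 1")
    case True
    then have "0 \<in> set v0" using v0e i dga_ddif_one[OF D] by (simp add: set_update_memI)
    then show ?thesis using s by simp
  next
    case False
    obtain k where k: "k < length x" "x!k = 1" using one by (auto simp: in_set_conv_nth)
    then have "k \<noteq> i" using False by auto
    then have "v0 ! k = 1" using v0e k by simp
    then have "1 \<in> set v0" using k v0e by (metis length_list_update nth_mem)
    then show ?thesis using s by simp
  qed
qed

section \<open>Shuffles into the Hochschild complex of a tensor product\<close>

abbreviation zero_pair :: "'a::zero \<times> 'b::zero \<Rightarrow> bool" where "zero_pair p \<equiv> fst p = 0 \<or> snd p = 0"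

abbreviation null_pair :: "'a::zero list \<times> 'b::zero list \<Rightarrow> bool" where
  "null_pair p \<equiv> has_entry zero_ent (fst p) \<or> has_entry zero_ent (snd p)"

lemma edif_entT[simp]: "edif (entT D1 D2) (a,b) = [(1,(ddif D1 a, b)), ((-1)^(dg D1 a), (a, ddif D2 b))]"
  by (simp add: entT_def)

lemma epar_entT[simp]: "epar (entT D1 D2) (a,b) = dg D1 a + dg D2 b"
  by (simp add: entT_def)

lemma eone_entT[simp]: "eone (entT D1 D2) = (1,1)" by (simp add: entT_def)

lemma wf_entT:
  assumes D1: "is_dga D1" and D2: "is_dga D2"
  shows "wf_ent (entT D1 D2) (homog D1 \<times> homog D2) zero_pair"
  unfolding wf_ent_def
proof (intro ballI, clarify)
  fix a b c a' b' assume ab: "a \<in> homog D1" "b \<in> homog D2" and m: "(c, a', b') \<in> set (edif (entT D1 D2) (a,b))"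
  from m have "(a' = ddif D1 a \<and> b' = b) \<or> (a' = a \<and> b' = ddif D2 b)" by auto
  then show "(a', b') \<in> homog D1 \<times> homog D2 \<and>
         (\<not> zero_pair (a', b') \<longrightarrow> \<not> zero_pair (a, b) \<and> odd (epar (entT D1 D2) (a', b') + epar (entT D1 D2) (a, b)))"
  proof
    assume h: "a' = ddif D1 a \<and> b' = b"
    show ?thesis using h ab dga_ddif_homog[OF D1] dga_ddif_parity[OF D1] dga_ddif_zero[OF D1] by (auto; presburger)
  next
    assume h: "a' = a \<and> b' = ddif D2 b"
    show ?thesis using h ab dga_ddif_homog[OF D2] dga_ddif_parity[OF D2] dga_ddif_zero[OF D2] by (auto; presburger)
  qed
qed

definition incl1 :: "'a \<Rightarrow> 'a \<times> 'b::one" where "incl1 a = (a, 1)"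

definition incl2 :: "'b \<Rightarrow> 'a::one \<times> 'b" where "incl2 b = (1, b)"

lemma kdelta_entT_incl1:
  assumes D1: "is_dga D1" and D2: "is_dga D2" and one: "dg D2 (1::'b::ring_1) = 0"
  shows "eq_mod (has_entry zero_pair) (kdelta (entT D1 D2) (map (incl1::'a::ring_1 \<Rightarrow> 'a \<times> 'b) x))
            (map (\<lambda>p. (fst p, map incl1 (snd p))) (kdelta (entA D1) x))"
proof (induction x)
  case Nil then show ?case by simp
next
  case (Cons a x)
  let ?ET = "entT D1 D2"
  have nul: "eq_mod (has_entry zero_pair) [((-1)^(dg D1 a), (a, ddif D2 (1::'b)) # map incl1 x)] []"
    by (rule eq_mod_null) (simp add: dga_ddif_one[OF D2] has_entry_def)
  have L: "kdelta ?ET (map incl1 (a#x)) = [(1, incl1 (ddif D1 a) # map incl1 x)] @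
      ([((-1)^(dg D1 a), (a, ddif D2 (1::'b)) # map incl1 x)] @
       map (\<lambda>p. ((-1)^(spar (entA D1) a) * fst p, incl1 a # snd p)) (kdelta ?ET (map incl1 x)))"
    using one by (simp add: incl1_def case_prod_beta spar_def)
  have R: "map (\<lambda>p. (fst p, map incl1 (snd p))) (kdelta (entA D1) (a#x)) = [(1, incl1 (ddif D1 a) # map incl1 x)] @
      map (\<lambda>p. ((-1)^(spar (entA D1) a) * fst p, incl1 a # snd p)) (map (\<lambda>p. (fst p, map incl1 (snd p))) (kdelta (entA D1) x))"
    by (simp add: case_prod_beta)
  have "eq_mod (has_entry zero_pair) ([((-1)^(dg D1 a), (a, ddif D2 (1::'b)) # map incl1 x)] @
       map (\<lambda>p. ((-1)^(spar (entA D1) a) * fst p, incl1 a # snd p)) (kdelta ?ET (map incl1 x)))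
      ([] @ map (\<lambda>p. ((-1)^(spar (entA D1) a) * fst p, incl1 a # snd p)) (map (\<lambda>p. (fst p, map incl1 (snd p))) (kdelta (entA D1) x)))"
    by (rule eq_mod_append[OF nul eq_mod_map_cons[OF Cons.IH]])
  then show ?case unfolding L R by (intro eq_mod_append[OF eq_mod_refl]) simp
qed

lemma kdelta_entT_incl2:
  assumes D1: "is_dga D1" and D2: "is_dga D2" and one: "dg D1 (1::'a::ring_1) = 0"
  shows "eq_mod (has_entry zero_pair) (kdelta (entT D1 D2) (map (incl2::'b::ring_1 \<Rightarrow> 'a \<times> 'b) y))
            (map (\<lambda>p. (fst p, map incl2 (snd p))) (kdelta (entA D2) y))"
proof (induction y)
  case Nil then show ?case by simp
next
  case (Cons b y)
  let ?ET = "entT D1 D2"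
  have nul: "eq_mod (has_entry zero_pair) [(1, (ddif D1 (1::'a), b) # map incl2 y)] []"
    by (rule eq_mod_null) (simp add: dga_ddif_one[OF D1] has_entry_def)
  have L: "kdelta ?ET (map incl2 (b#y)) = [(1, (ddif D1 (1::'a), b) # map incl2 y)] @
      ([(1, incl2 (ddif D2 b) # map incl2 y)] @
       map (\<lambda>p. ((-1)^(spar (entA D2) b) * fst p, incl2 b # snd p)) (kdelta ?ET (map incl2 y)))"
    using one by (simp add: incl2_def case_prod_beta spar_def)
  have R: "map (\<lambda>p. (fst p, map incl2 (snd p))) (kdelta (entA D2) (b#y)) = [] @ ([(1, incl2 (ddif D2 b) # map incl2 y)] @
      map (\<lambda>p. ((-1)^(spar (entA D2) b) * fst p, incl2 b # snd p)) (map (\<lambda>p. (fst p, map incl2 (snd p))) (kdelta (entA D2) y)))"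
    by (simp add: case_prod_beta)
  show ?case unfolding L R
    by (rule eq_mod_append[OF nul eq_mod_append[OF eq_mod_refl eq_mod_map_cons[OF Cons.IH]]])
qed

definition sh_term :: "('k::comm_ring_1, 'a::ring_1) dga \<Rightarrow> ('k, 'b::ring_1) dga \<Rightarrow> bool list \<Rightarrow> 'a list \<times> 'b list
    \<Rightarrow> ('k \<times> ('a \<times> 'b) list) list" where
  "sh_term D1 D2 bs xy = (case xy of (x, y) \<Rightarrow>
     [((-1) ^ (wpar (entA D1) x + shsign bs (map (\<lambda>a. epar (entA D1) a + 1) x) (map (\<lambda>b. epar (entA D2) b + 1) y)),
       (1, 1) # shuf bs (map incl1 x) (map incl2 y))])"

lemma hc_sh_Pair_eq: "hc_sh (entA D1) (entA D2) r s (x,y) =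
   concat (map (\<lambda>bs. if left_of bs r s then sh_term D1 D2 bs (x,y) else []) (shb (length x) (length y)))"
  unfolding hc_sh_def sh_term_def incl1_def incl2_def
  by (induction "shb (length x) (length y)") (auto simp: concat_map_singleton)

lemma hc_sh_eq: "hc_sh (entA D1) (entA D2) r s p =
   concat (map (\<lambda>bs. if left_of bs r s then sh_term D1 D2 bs p else []) (shb (length (fst p)) (length (snd p))))"
proof -
  obtain a b where p: "p = (a,b)" by force
  show ?thesis unfolding p by (simp add: hc_sh_Pair_eq)
qed

lemma shuf_sign_conv:
  assumes "dg D2 (1::'b::ring_1) = 0" "dg D1 (1::'a::ring_1) = 0"
  shows "shuf_sign (entT D1 D2) bs (map (incl1::'a \<Rightarrow> 'a \<times> 'b) x) (map incl2 y) =
    (-1)^(shsign bs (map (\<lambda>a. epar (entA D1) a + 1) x) (map (\<lambda>b. epar (entA D2) b + 1) y))"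
  using assms by (simp add: shuf_sign_def o_def spar_def incl1_def incl2_def)

lemma wspar_incl1: "dg D2 (1::'b::ring_1) = 0 \<Longrightarrow> wspar (entT D1 D2) (map (incl1::'a::ring_1 \<Rightarrow> 'a \<times> 'b) x) = wspar (entA D1) x"
  by (induction x) (simp_all add: spar_def incl1_def)

lemma set_map_incl1_homog: "is_dga D1 \<Longrightarrow> is_dga D2 \<Longrightarrow> set x \<subseteq> homog D1 \<Longrightarrow> set (map (incl1::'a::ring_1 \<Rightarrow> 'a \<times> 'b::ring_1) x) \<subseteq> homog D1 \<times> homog D2"
  using dga_one_even by (auto simp: incl1_def homog_def)

lemma set_map_incl2_homog: "is_dga D1 \<Longrightarrow> is_dga D2 \<Longrightarrow> set y \<subseteq> homog D2 \<Longrightarrow> set (map (incl2::'b::ring_1 \<Rightarrow> 'a::ring_1 \<times> 'b) y) \<subseteq> homog D1 \<times> homog D2"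
  using dga_one_even by (auto simp: incl2_def homog_def)

lemma concat_map_Pair_right: "concat (map (\<lambda>(c1, x1). [(c1, x1, y)]) L) = map (\<lambda>q. (fst q, (snd q, y))) L"
  by (induction L) auto

lemma concat_map_Pair_left: "concat (map (\<lambda>(c2, y1). [(k * c2, x, y1)]) L) = map (\<lambda>q. (k * fst q, (x, snd q))) L"
  by (induction L) auto

lemma tens_idop_right: "tens E1 F idop 0 (x,y) = map (\<lambda>q. (fst q, (snd q, y))) (F x)"
  unfolding tens_def idop_def by (simp add: concat_map_Pair_right)

lemma tens_idop_left: "tens E1 idop F 1 (x,y) = map (\<lambda>q. ((-1)^(wpar E1 x) * fst q, (x, snd q))) (F y)"
  unfolding tens_def idop_def by (simp add: concat_map_Pair_left case_prod_beta)

lemma sh_term_eq: "sh_term D1 D2 bs = (\<lambda>p. [((-1) ^ (wpar (entA D1) (fst p) + shsign bs (map (\<lambda>a. epar (entA D1) a + 1) (fst p)) (map (\<lambda>b. epar (entA D2) b + 1) (snd p))),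
       (1, 1) # shuf bs (map incl1 (fst p)) (map incl2 (snd p)))])"
  by (rule ext) (simp add: sh_term_def case_prod_beta)

lemma fs_words_tens_idop_right: "fs_words (tens E1 F idop 0 (x,y)) = (\<lambda>v. (v,y)) ` fs_words (F x)"
  unfolding tens_idop_right by (force simp: fs_words_def)

lemma fs_words_tens_idop_left: "fs_words (tens E1 idop F 1 (x,y)) = (\<lambda>v. (x,v)) ` fs_words (F y)"
  unfolding tens_idop_left by (force simp: fs_words_def)

lemma shuf_kdelta_incl:
  fixes D1 :: "('c::field, 'a::ring_1) dga" and D2 :: "('c, 'b::ring_1) dga" and x :: "'a list" and y :: "'b list"
  assumes D1: "is_dga D1" and D2: "is_dga D2"
    and o1: "dg D1 (1::'a) = 0" and o2: "dg D2 (1::'b) = 0" and vb: "fits_shuffle bs x y"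
  defines "X \<equiv> map incl1 x :: ('a \<times> 'b) list" and "Y \<equiv> map incl2 y :: ('a \<times> 'b) list"
  shows "eq_mod (has_entry zero_pair) (shuf_kdelta (entT D1 D2) bs X Y)
     ((fsmap (\<lambda>X'. [(shuf_sign (entT D1 D2) bs X' Y, shuf bs X' Y)]) (map (\<lambda>p. (fst p, map incl1 (snd p))) (kdelta (entA D1) x))) @
      (fsmap (\<lambda>Y'. [((-1)^(wspar (entT D1 D2) X) * shuf_sign (entT D1 D2) bs X Y', shuf bs X Y')]) (map (\<lambda>p. (fst p, map incl2 (snd p))) (kdelta (entA D2) y))))"
proof -
  let ?ET = "entT D1 D2" and ?E1 = "entA D1" and ?E2 = "entA D2"
  let ?X = "map incl1 x :: ('a \<times> 'b) list" and ?Y = "map incl2 y :: ('a \<times> 'b) list"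
  have vXY: "fits_shuffle bs ?X ?Y" using vb by (simp add: fits_shuffle_def)
  have split: "shuf_kdelta ?ET bs ?X ?Y =
      fsmap (\<lambda>X'. [(shuf_sign ?ET bs X' ?Y, shuf bs X' ?Y)]) (kdelta ?ET ?X) @
      fsmap (\<lambda>Y'. [((-1)^(wspar ?ET ?X) * shuf_sign ?ET bs ?X Y', shuf bs ?X Y')]) (kdelta ?ET ?Y)"
    unfolding shuf_kdelta_def fsmap_singleton_fun by (simp add: ac_simps)
  have "eq_mod (has_entry zero_pair)
      (fsmap (\<lambda>X'. [(shuf_sign ?ET bs X' ?Y, shuf bs X' ?Y)]) (kdelta ?ET ?X) @
       fsmap (\<lambda>Y'. [((-1)^(wspar ?ET ?X) * shuf_sign ?ET bs ?X Y', shuf bs ?X Y')]) (kdelta ?ET ?Y))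
      (fsmap (\<lambda>X'. [(shuf_sign ?ET bs X' ?Y, shuf bs X' ?Y)]) (map (\<lambda>p. (fst p, map incl1 (snd p))) (kdelta ?E1 x)) @
       fsmap (\<lambda>Y'. [((-1)^(wspar ?ET ?X) * shuf_sign ?ET bs ?X Y', shuf bs ?X Y')]) (map (\<lambda>p. (fst p, map incl2 (snd p))) (kdelta ?E2 y)))"
    by (rule eq_mod_append[OF eq_mod_fsmap_shuf_left[OF kdelta_entT_incl1[OF D1 D2 o2] _ vXY]
          eq_mod_fsmap_shuf_right[OF kdelta_entT_incl2[OF D1 D2 o1] _ vXY]])
      (auto simp: fs_words_map_snd dest: kdelta_length)
  then show ?thesis unfolding X_def Y_def split .
qed

lemma sh_term_kdelta_left:
  fixes D1 :: "('c::field, 'a::ring_1) dga" and D2 :: "('c, 'b::ring_1) dga" and x :: "'a list" and y :: "'b list"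
  assumes D1: "is_dga D1" and o1: "dg D1 (1::'a) = 0" and o2: "dg D2 (1::'b) = 0"
    and xne: "x \<noteq> []" and Gx: "set x \<subseteq> homog D1" and vb: "fits_shuffle bs x y"
  defines "X \<equiv> map incl1 x :: ('a \<times> 'b) list" and "Y \<equiv> map incl2 y :: ('a \<times> 'b) list"
    and "k1 \<equiv> - ((-1::'c)^(wpar (entA D1) x))"
  shows "eq_mod (has_entry zero_pair) (map (\<lambda>p. (k1 * fst p, (1,1) # snd p)) (fsmap (\<lambda>X'. [(shuf_sign (entT D1 D2) bs X' Y, shuf bs X' Y)]) (map (\<lambda>p. (fst p, map incl1 (snd p))) (kdelta (entA D1) x))))
     (fsmap (sh_term D1 D2 bs) (tens (entA D1) (kdelta (entA D1)) idop 0 (x,y)))"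
proof -
  let ?ET = "entT D1 D2" and ?E1 = "entA D1" and ?E2 = "entA D2"
  let ?X = "map incl1 x :: ('a \<times> 'b) list" and ?Y = "map incl2 y :: ('a \<times> 'b) list"
  let ?sg = "\<lambda>x y. shsign bs (map (\<lambda>a. epar (entA D1) a + 1) x) (map (\<lambda>b. epar (entA D2) b + 1) y)"
  have wf1: "wf_ent ?E1 (homog D1) zero_ent" by (rule wf_entA[OF D1])
  have t1: "fsmap (sh_term D1 D2 bs) (tens ?E1 (kdelta ?E1) idop 0 (x,y)) =
     map (\<lambda>p. (fst p * (-1)^(wpar ?E1 (snd p) + ?sg (snd p) y), (1,1) # shuf bs (map incl1 (snd p)) ?Y)) (kdelta ?E1 x)"
    unfolding tens_idop_right sh_term_eq fsmap_singleton_fun by (simp add: o_def)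
  have l1: "map (\<lambda>p. (k1 * fst p, (1,1) # snd p)) (fsmap (\<lambda>X'. [(shuf_sign ?ET bs X' ?Y, shuf bs X' ?Y)]) (map (\<lambda>p. (fst p, map incl1 (snd p))) (kdelta ?E1 x)))
     = map (\<lambda>p. (k1 * (fst p * shuf_sign ?ET bs (map incl1 (snd p)) ?Y), (1,1) # shuf bs (map incl1 (snd p)) ?Y)) (kdelta ?E1 x)"
    by (simp add: fsmap_def case_prod_beta o_def)
  show ?thesis unfolding X_def Y_def t1 l1
  proof (rule eq_mod_map_fst_snd)
    fix c x' assume cx: "(c, x') \<in> set (kdelta ?E1 x)" and nn: "\<not> has_entry zero_pair ((1,1) # shuf bs (map incl1 x') ?Y)"
    have x'w: "x' \<in> fs_words (kdelta ?E1 x)" using cx by (force simp: fs_words_def)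
    have lx: "length x' = length x" by (rule kdelta_length[OF x'w])
    have "fits_shuffle bs (map incl1 x') ?Y" using vb lx by (simp add: fits_shuffle_def)
    then have "set (shuf bs (map incl1 x') ?Y) = set (map incl1 x') \<union> set ?Y" by (rule set_shuf)
    then have sub: "set (map incl1 x') \<subseteq> set ((1,1) # shuf bs (map incl1 x') ?Y)" by (simp only: set_simps) blast
    have "\<not> has_entry zero_ent x'"
    proof
      assume "has_entry zero_ent x'"
      then have "0 \<in> set x'" by (simp add: has_entry_def)
      then have "incl1 0 \<in> set ((1,1) # shuf bs (map incl1 x') ?Y)" using sub by auto
      then show False using nn unfolding has_entry_def incl1_def by force
    qed
    then have od: "odd (wspar ?E1 x' + wspar ?E1 x)" using kdelta_fs_words[OF wf1 Gx x'w] by simp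
    have x'ne: "x' \<noteq> []" using lx xne by auto
    have "(-1::'c)^(wpar ?E1 x' + ?sg x' y) = k1 * (-1)^(?sg x' y)"
    proof -
      have "even (wpar ?E1 x') = odd (wpar ?E1 x)"
        using od wpar_wspar[OF x'ne, of ?E1] wpar_wspar[OF xne, of ?E1] by presburger
      then have "(-1::'c)^(wpar ?E1 x') = - ((-1)^(wpar ?E1 x))"
        by (simp add: minus_one_power_iff)
      then show ?thesis by (simp add: k1_def power_add)
    qed
    moreover have "shuf_sign ?ET bs (map incl1 x') ?Y = (-1)^(?sg x' y)" by (rule shuf_sign_conv[OF o2 o1])
    ultimately show "k1 * (c * shuf_sign ?ET bs (map incl1 x') ?Y) = c * (-1)^(wpar ?E1 x' + ?sg x' y)"
      by simp
  qed
qed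

lemma sh_term_kdelta_right:
  fixes D1 :: "('c::field, 'a::ring_1) dga" and D2 :: "('c, 'b::ring_1) dga" and x :: "'a list" and y :: "'b list"
  assumes D1: "is_dga D1" and o1: "dg D1 (1::'a) = 0" and o2: "dg D2 (1::'b) = 0"
    and xne: "x \<noteq> []" and Gx: "set x \<subseteq> homog D1" and vb: "fits_shuffle bs x y"
  defines "X \<equiv> map incl1 x :: ('a \<times> 'b) list" and "Y \<equiv> map incl2 y :: ('a \<times> 'b) list"
    and "k1 \<equiv> - ((-1::'c)^(wpar (entA D1) x))"
  shows "eq_mod (has_entry zero_pair) (map (\<lambda>p. (k1 * fst p, (1,1) # snd p)) (fsmap (\<lambda>Y'. [((-1)^(wspar (entT D1 D2) X) * shuf_sign (entT D1 D2) bs X Y', shuf bs X Y')]) (map (\<lambda>p. (fst p, map incl2 (snd p))) (kdelta (entA D2) y))))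
     (fsmap (sh_term D1 D2 bs) (tens (entA D1) idop (kdelta (entA D2)) 1 (x,y)))"
proof -
  let ?ET = "entT D1 D2" and ?E1 = "entA D1" and ?E2 = "entA D2"
  let ?X = "map incl1 x :: ('a \<times> 'b) list" and ?Y = "map incl2 y :: ('a \<times> 'b) list"
  let ?sg = "\<lambda>x y. shsign bs (map (\<lambda>a. epar (entA D1) a + 1) x) (map (\<lambda>b. epar (entA D2) b + 1) y)"
  have t2: "fsmap (sh_term D1 D2 bs) (tens ?E1 idop (kdelta ?E2) 1 (x,y)) =
     map (\<lambda>p. ((-1)^(wpar ?E1 x) * fst p * (-1)^(wpar ?E1 x + ?sg x (snd p)), (1,1) # shuf bs ?X (map incl2 (snd p)))) (kdelta ?E2 y)"
    unfolding tens_idop_left sh_term_eq fsmap_singleton_fun by (simp add: o_def algebra_simps)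
  have l2: "map (\<lambda>p. (k1 * fst p, (1,1) # snd p)) (fsmap (\<lambda>Y'. [((-1)^(wspar ?ET ?X) * shuf_sign ?ET bs ?X Y', shuf bs ?X Y')]) (map (\<lambda>p. (fst p, map incl2 (snd p))) (kdelta ?E2 y)))
     = map (\<lambda>p. (k1 * (fst p * ((-1)^(wspar ?ET ?X) * shuf_sign ?ET bs ?X (map incl2 (snd p)))), (1,1) # shuf bs ?X (map incl2 (snd p)))) (kdelta ?E2 y)"
    by (simp add: fsmap_def case_prod_beta o_def)
  show ?thesis unfolding X_def Y_def t2 l2
  proof (rule eq_mod_map_fst_snd)
    fix c y' assume cy: "(c, y') \<in> set (kdelta ?E2 y)"
    have q: "wspar ?ET ?X = wpar ?E1 x + 1" using wspar_incl1[OF o2, of D1 x] wpar_wspar[OF xne, of ?E1] by simp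
    have k: "shuf_sign ?ET bs ?X (map incl2 y') = (-1)^(?sg x y')" by (rule shuf_sign_conv[OF o2 o1])
    show "k1 * (c * ((-1)^(wspar ?ET ?X) * shuf_sign ?ET bs ?X (map incl2 y'))) = (-1)^(wpar ?E1 x) * c * (-1)^(wpar ?E1 x + ?sg x y')"
      unfolding q k k1_def by (simp add: power_add algebra_simps)
  qed
qed

lemma bdelta_sh_term:
  fixes D1 :: "('c::field, 'a::ring_1) dga" and D2 :: "('c, 'b::ring_1) dga" and x :: "'a list" and y :: "'b list"
  assumes D1: "is_dga D1" and D2: "is_dga D2"
    and one1: "(1::'a::ring_1) \<noteq> 0" and one2: "(1::'b::ring_1) \<noteq> 0"
    and xne: "x \<noteq> []" and Gx: "set x \<subseteq> homog D1" and Gy: "set (y::'b list) \<subseteq> homog D2"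
    and vb: "fits_shuffle bs x y"
  shows "eq_mod (has_entry zero_pair) (fsmap (hc_bdelta (entT D1 D2)) (sh_term D1 D2 bs (x,y)))
     (fsmap (sh_term D1 D2 bs) (tens (entA D1) (kdelta (entA D1)) idop 0 (x,y) @ tens (entA D1) idop (kdelta (entA D2)) 1 (x,y)))"
proof -
  let ?ET = "entT D1 D2" and ?E1 = "entA D1" and ?E2 = "entA D2"
  let ?GT = "homog D1 \<times> homog D2"
  let ?X = "map incl1 x :: ('a \<times> 'b) list" and ?Y = "map incl2 y :: ('a \<times> 'b) list"
  let ?S = "shuf bs ?X ?Y"
  let ?sg = "\<lambda>x y. shsign bs (map (\<lambda>a. epar (entA D1) a + 1) x) (map (\<lambda>b. epar (entA D2) b + 1) y)"
  have o1: "dg D1 (1::'a) = 0" by (rule dga_dg_one[OF D1 one1])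
  have o2: "dg D2 (1::'b) = 0" by (rule dga_dg_one[OF D2 one2])
  have wfT: "wf_ent ?ET ?GT zero_pair" by (rule wf_entT[OF D1 D2])
  have GX: "set ?X \<subseteq> ?GT" by (rule set_map_incl1_homog[OF D1 D2 Gx])
  have GY: "set ?Y \<subseteq> ?GT" by (rule set_map_incl2_homog[OF D1 D2 Gy])
  have vXY: "fits_shuffle bs ?X ?Y" using vb by (simp add: fits_shuffle_def)
  have h11: "(1::'a, 1::'b) \<in> ?GT" using dga_one_even[OF D1] dga_one_even[OF D2] by (auto simp: homog_def)
  have GW: "set ((1,1) # ?S) \<subseteq> ?GT" using set_shuf[OF vXY] GX GY h11 by auto
  define k1 where "k1 = - ((-1::'c)^(wpar ?E1 x))"
  have ksc: "shuf_sign ?ET bs ?X ?Y = (-1)^(?sg x y)" by (rule shuf_sign_conv[OF o2 o1])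
  have W: "sh_term D1 D2 bs (x,y) = [((-1)^(wpar ?E1 x + ?sg x y), (1,1) # ?S)]"
    by (simp add: sh_term_def)
  have "fsmap (hc_bdelta ?ET) (sh_term D1 D2 bs (x,y)) =
      map (\<lambda>p. ((-1)^(wpar ?E1 x + ?sg x y) * fst p, snd p)) (hc_bdelta ?ET ((1,1) # ?S))"
    unfolding W by (simp add: fsmap_Cons case_prod_beta)
  also have "eq_mod (has_entry zero_pair) \<dots> (map (\<lambda>p. ((-1)^(wpar ?E1 x + ?sg x y) * fst p, snd p)) (kdelta ?ET ((1,1) # ?S)))"
    by (rule eq_mod_scale[OF bdelta_eq_mod_kdelta[OF wfT GW]])
  also have "map (\<lambda>p. ((-1)^(wpar ?E1 x + ?sg x y) * fst p, snd p)) (kdelta ?ET ((1,1) # ?S)) =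
      [((-1)^(wpar ?E1 x + ?sg x y), (0,1) # ?S), ((-1)^(wpar ?E1 x + ?sg x y) * (-1)^(dg D1 (1::'a)), (1,0) # ?S)] @
      map (\<lambda>p. (k1 * fst p, (1,1) # snd p)) (map (\<lambda>p. (shuf_sign ?ET bs ?X ?Y * fst p, snd p)) (kdelta ?ET ?S))"
    using o1 o2 by (simp add: dga_ddif_one[OF D1] dga_ddif_one[OF D2] case_prod_beta spar_def k1_def ksc power_add)
  also have "eq_mod (has_entry zero_pair) \<dots> ([] @ map (\<lambda>p. (k1 * fst p, (1,1) # snd p)) (shuf_kdelta ?ET bs ?X ?Y))"
    \<comment> \<open>the differential of the leading 1\<otimes>1 only produces words with a zero tensor factor\<close>
    by (rule eq_mod_append[OF eq_mod_null eq_mod_map_cons[OF kdelta_shuf[OF wfT vXY GX GY]]]) (auto simp: has_entry_def)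
  also have "eq_mod (has_entry zero_pair) \<dots>
      (map (\<lambda>p. (k1 * fst p, (1,1) # snd p)) (fsmap (\<lambda>X'. [(shuf_sign ?ET bs X' ?Y, shuf bs X' ?Y)]) (map (\<lambda>p. (fst p, map incl1 (snd p))) (kdelta ?E1 x))) @
       map (\<lambda>p. (k1 * fst p, (1,1) # snd p)) (fsmap (\<lambda>Y'. [((-1)^(wspar ?ET ?X) * shuf_sign ?ET bs ?X Y', shuf bs ?X Y')]) (map (\<lambda>p. (fst p, map incl2 (snd p))) (kdelta ?E2 y))))"
    using eq_mod_map_cons[OF shuf_kdelta_incl[OF D1 D2 o1 o2 vb], of k1 "(1,1)"] by simp
  also have "eq_mod (has_entry zero_pair) \<dots>
      (fsmap (sh_term D1 D2 bs) (tens ?E1 (kdelta ?E1) idop 0 (x,y) @ tens ?E1 idop (kdelta ?E2) 1 (x,y)))"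
    unfolding k1_def fsmap_append
    by (rule eq_mod_append[OF sh_term_kdelta_left[OF D1 o1 o2 xne Gx vb] sh_term_kdelta_right[OF D1 o1 o2 xne Gx vb]])
  finally show ?thesis .
qed

lemma bdelta_sh:
  fixes D1 :: "('c::field, 'a::ring_1) dga" and D2 :: "('c, 'b::ring_1) dga" and x :: "'a list" and y :: "'b list"
  assumes D1: "is_dga D1" and D2: "is_dga D2"
    and one1: "(1::'a::ring_1) \<noteq> 0" and one2: "(1::'b::ring_1) \<noteq> 0"
    and xne: "x \<noteq> []" and Gx: "set x \<subseteq> homog D1" and Gy: "set (y::'b list) \<subseteq> homog D2"
  shows "eq_mod (has_entry zero_pair) (fsmap (hc_bdelta (entT D1 D2)) (hc_sh (entA D1) (entA D2) r s (x,y)))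
     (fsmap (hc_sh (entA D1) (entA D2) r s) (tens (entA D1) (kdelta (entA D1)) idop 0 (x,y) @ tens (entA D1) idop (kdelta (entA D2)) 1 (x,y)))"
proof -
  let ?C = "tens (entA D1) (kdelta (entA D1)) idop 0 (x,y) @ tens (entA D1) idop (kdelta (entA D2)) 1 (x,y)"
  let ?G = "\<lambda>bs p. if left_of bs r s then sh_term D1 D2 bs p else []"
  let ?L = "shb (length x) (length y)"
  have "fsmap (hc_bdelta (entT D1 D2)) (hc_sh (entA D1) (entA D2) r s (x,y)) =
      concat (map (\<lambda>bs. fsmap (hc_bdelta (entT D1 D2)) (?G bs (x,y))) ?L)"
    by (simp add: hc_sh_Pair_eq fsmap_concat o_def)
  also have "eq_mod (has_entry zero_pair) \<dots> (concat (map (\<lambda>bs. fsmap (?G bs) ?C) ?L))"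
  proof (rule eq_mod_concat_map)
    fix bs assume "bs \<in> set ?L"
    then have vb: "fits_shuffle bs x y" using shb_fits_shuffle by (auto simp: fits_shuffle_def)
    show "eq_mod (has_entry zero_pair) (fsmap (hc_bdelta (entT D1 D2)) (?G bs (x,y))) (fsmap (?G bs) ?C)"
    proof (cases "left_of bs r s")
      case True
      then show ?thesis using bdelta_sh_term[OF D1 D2 one1 one2 xne Gx Gy vb] by simp
    next
      case False
      then show ?thesis by simp
    qed
  qed
  also have "eq_mod (has_entry zero_pair) \<dots> (fsmap (hc_sh (entA D1) (entA D2) r s) ?C)"
  proof (rule eq_mod_sym, rule fsmap_concat_swap)
    fix p assume p: "p \<in> fs_words ?C"
    from p have "(\<exists>v\<in>fs_words (kdelta (entA D1) x). p = (v,y)) \<or> (\<exists>v\<in>fs_words (kdelta (entA D2) y). p = (x,v))"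
      unfolding fs_words_append fs_words_tens_idop_right fs_words_tens_idop_left by blast
    then have "length (fst p) = length x \<and> length (snd p) = length y"
    proof (elim disjE bexE)
      fix v assume "v \<in> fs_words (kdelta (entA D1) x)" "p = (v,y)"
      then show ?thesis using kdelta_length[of v "entA D1" x] by simp
    next
      fix v assume "v \<in> fs_words (kdelta (entA D2) y)" "p = (x,v)"
      then show ?thesis using kdelta_length[of v "entA D2" y] by simp
    qed
    then show "hc_sh (entA D1) (entA D2) r s p = concat (map (\<lambda>bs. ?G bs p) ?L)"
      by (simp add: hc_sh_eq)
  qed
  finally show ?thesis .
qed

lemma sh_fs_words: "w \<in> fs_words (hc_sh (entA D1) (entA D2) r s p) \<Longrightarrow>
   \<exists>bs. fits_shuffle bs (fst p) (snd p) \<and> w = (1,1) # shuf bs (map incl1 (fst p)) (map incl2 (snd p))"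
proof -
  assume w: "w \<in> fs_words (hc_sh (entA D1) (entA D2) r s p)"
  then obtain bs where bs: "bs \<in> set (shb (length (fst p)) (length (snd p)))"
    "w \<in> fs_words (if left_of bs r s then sh_term D1 D2 bs p else [])"
    unfolding hc_sh_eq fs_words_concat by auto
  then have "w = (1,1) # shuf bs (map incl1 (fst p)) (map incl2 (snd p))"
    by (auto simp: sh_term_eq split: if_splits)
  moreover have "fits_shuffle bs (fst p) (snd p)" using shb_fits_shuffle[OF bs(1)] by (simp add: fits_shuffle_def)
  ultimately show ?thesis by blast
qed

lemma sh_null_pair: "null_pair p \<Longrightarrow> w \<in> fs_words (hc_sh (entA D1) (entA D2) r s (p :: 'a::ring_1 list \<times> 'b::ring_1 list)) \<Longrightarrow> has_entry zero_pair w"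
proof -
  assume np: "null_pair p" and w: "w \<in> fs_words (hc_sh (entA D1) (entA D2) r s p)"
  obtain bs where bs: "fits_shuffle bs (fst p) (snd p)" "w = (1,1) # shuf bs (map incl1 (fst p)) (map incl2 (snd p))"
    using sh_fs_words[OF w] by blast
  have v: "fits_shuffle bs (map (incl1 :: 'a \<Rightarrow> 'a \<times> 'b) (fst p)) (map (incl2 :: 'b \<Rightarrow> 'a \<times> 'b) (snd p))"
    using bs(1) by (simp add: fits_shuffle_def)
  have st: "set (map incl1 (fst p)) \<union> set (map incl2 (snd p)) \<subseteq> set w"
    using set_shuf[OF v] bs(2) by auto
  from np show ?thesis
  proof
    assume "has_entry zero_ent (fst p)"
    then have "(0::'a) \<in> set (fst p)" by (simp add: has_entry_def)
    then have "incl1 (0::'a) \<in> set w" using st by auto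
    then show ?thesis unfolding has_entry_def incl1_def by force
  next
    assume "has_entry zero_ent (snd p)"
    then have "(0::'b) \<in> set (snd p)" by (simp add: has_entry_def)
    then have "incl2 (0::'b) \<in> set w" using st by auto
    then show ?thesis unfolding has_entry_def incl2_def by force
  qed
qed

lemma sh_fs_words_unit: "w \<in> fs_words (hc_sh E1 E2 r s q) \<Longrightarrow> \<exists>t. w = (1,1) # t"
  by (cases q) (auto simp: hc_sh_def fs_words_def)

section \<open>The homotopy H and the differential b(delta)\<close>

lemma tens_fs_tensor: "tens E F G pY (u,v) = fs_tensor (map (\<lambda>q. ((-1)^(pY * wpar E u) * fst q, snd q)) (F u)) (G v)"
  unfolding tens_def fs_tensor_def by (simp add: case_prod_beta o_def mult.assoc cong: map_cong)

lemma tens_eq_fs_tensor: "tens E F G pY = (\<lambda>p. fs_tensor (map (\<lambda>q. ((-1)^(pY * wpar E (fst p)) * fst q, snd q)) (F (fst p))) (G (snd p)))"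
  by (rule ext) (metis prod.collapse tens_fs_tensor)

lemma fs_words_tens: "q \<in> fs_words (tens E F G pY (u,v)) \<Longrightarrow> fst q \<in> fs_words (F u) \<and> snd q \<in> fs_words (G v)"
  unfolding tens_fs_tensor using fs_words_fs_tensor by fastforce

lemma lcf_tens_fs_tensor: "lcf (fsmap (tens E F G pY) (fs_tensor c d)) (u',v') =
   lcf (fsmap (\<lambda>u. map (\<lambda>q. ((-1)^(pY * wpar E u) * fst q, snd q)) (F u)) c) u' * lcf (fsmap G d) v'"
  unfolding tens_eq_fs_tensor by (rule fsmap_fs_tensor)

lemma lcf_fsmap_src_sign:
  assumes "\<And>u v. v \<in> fs_words (F u) \<Longrightarrow> wpar E v = wpar E u"
  shows "lcf (fsmap (\<lambda>u. map (\<lambda>q. ((-1)^(wpar E u) * fst q, snd q)) (F u)) c) w = (-1)^(wpar E w) * lcf (fsmap F c) w"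
proof -
  have "\<And>p. fst p * lcf (map (\<lambda>q. ((-1)^(wpar E (snd p)) * fst q, snd q)) (F (snd p))) w =
      (-1)^(wpar E w) * (fst p * lcf (F (snd p)) w)"
  proof -
    fix p
    show "fst p * lcf (map (\<lambda>q. ((-1)^(wpar E (snd p)) * fst q, snd q)) (F (snd p))) w =
      (-1)^(wpar E w) * (fst p * lcf (F (snd p)) w)"
    proof (cases "w \<in> fs_words (F (snd p))")
      case True
      then have "wpar E w = wpar E (snd p)" using assms by blast
      then show ?thesis by (simp add: lcf_scale_fst)
    next
      case False
      then show ?thesis by (simp add: lcf_scale_fst lcf_notin)
    qed
  qed
  then show ?thesis by (simp add: lcf_fsmap_fst sum_list_const_mult)
qed

lemma fs_tensor_eq_mod_left: "eq_mod (has_entry zero_ent) c c' \<Longrightarrow> eq_mod null_pair (fs_tensor c d) (fs_tensor c' d)"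
  unfolding eq_mod_def by (auto simp: lcf_fs_tensor)

lemma fs_tensor_eq_mod_right: "eq_mod (has_entry zero_ent) d d' \<Longrightarrow> eq_mod null_pair (fs_tensor c d) (fs_tensor c d')"
  unfolding eq_mod_def by (auto simp: lcf_fs_tensor)

lemma H_term_left_anticomm:
  fixes D1 :: "('c::field, 'a::ring_1) dga" and D2 :: "('c, 'b::ring_1) dga" and x :: "'a list" and y :: "'b list"
  assumes D1: "is_dga D1" and D2: "is_dga D2"
    and Gx: "set x \<subseteq> homog D1" and Gy: "set y \<subseteq> homog D2" and i: "i < length x" and yne: "y \<noteq> []"
  shows "eq_mod null_pair (fsmap (\<lambda>p. tens (entA D1) (kdelta (entA D1)) idop 0 p @ tens (entA D1) idop (kdelta (entA D2)) 1 p)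
                  (tens (entA D1) (rot_delta (entA D1) i r) (opow (hc_tau_inv (entA D2)) s) 0 (x,y)) @
       fsmap (tens (entA D1) (rot_delta (entA D1) i r) (opow (hc_tau_inv (entA D2)) s) 0)
          (tens (entA D1) (kdelta (entA D1)) idop 0 (x,y) @ tens (entA D1) idop (kdelta (entA D2)) 1 (x,y))) []"
proof (rule eq_mod_lcf)
  let ?E1 = "entA D1" and ?E2 = "entA D2"
  let ?X = "rot_delta ?E1 i r" and ?Y = "opow (hc_tau_inv ?E2) s"
  fix w :: "'a list \<times> 'b list" assume nw: "\<not> null_pair w"
  obtain u' v' where w: "w = (u',v')" by force
  have nu: "\<not> has_entry zero_ent u'" and nv: "\<not> has_entry zero_ent v'" using nw w by auto
  let ?wx = "wpar ?E1 x"
  have T0: "tens ?E1 ?X ?Y 0 (x,y) = fs_tensor (?X x) (?Y y)" by (simp add: tens_fs_tensor)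
  have C1: "tens ?E1 (kdelta ?E1) idop 0 (x,y) = fs_tensor (kdelta ?E1 x) [(1,y)]" by (simp add: tens_fs_tensor idop_def)
  have C2: "tens ?E1 idop (kdelta ?E2) 1 (x,y) = fs_tensor [((-1)^?wx, x)] (kdelta ?E2 y)" by (simp add: tens_fs_tensor idop_def)
  have F1: "lcf (fsmap (kdelta ?E1) (?X x)) u' = - lcf (fsmap ?X (kdelta ?E1 x)) u'"
    using kdelta_rot_delta_anticomm[OF D1 Gx i, of r] nu by (simp add: eq_mod_def)
  have F2: "lcf (fsmap (kdelta ?E2) (?Y y)) v' = lcf (fsmap ?Y (kdelta ?E2 y)) v'"
    using kdelta_tau_inv_pow_comm[OF wf_entA[OF D2] Gy yne, of s] nv by (simp add: eq_mod_def)
  have F3: "(-1)^(wpar ?E1 u') * lcf (?X x) u' = - ((-1)^?wx) * lcf (?X x) u'"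
  proof (cases "lcf (?X x) u' = 0")
    case False
    then have "u' \<in> fs_words (?X x)" by (rule lcf_nonzero_fs_words)
    then have "odd (wpar ?E1 u' + ?wx)" using rot_delta_wpar[OF D1 Gx i _ nu] by blast
    then have "(-1::'c)^(wpar ?E1 u') = - ((-1)^?wx)"
      by (simp add: minus_one_power_iff split: if_splits)
    then show ?thesis by simp
  qed simp
  have L1: "lcf (fsmap (\<lambda>p. tens ?E1 (kdelta ?E1) idop 0 p @ tens ?E1 idop (kdelta ?E2) 1 p) (tens ?E1 ?X ?Y 0 (x,y))) w
      = lcf (fsmap (kdelta ?E1) (?X x)) u' * lcf (?Y y) v' + (-1)^(wpar ?E1 u') * lcf (?X x) u' * lcf (fsmap (kdelta ?E2) (?Y y)) v'"
    unfolding w T0 lcf_fsmap_app lcf_tens_fs_tensor by (simp add: lcf_fsmap_self_scale_idop)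
  have L2: "lcf (fsmap (tens ?E1 ?X ?Y 0) (tens ?E1 (kdelta ?E1) idop 0 (x,y) @ tens ?E1 idop (kdelta ?E2) 1 (x,y))) w
      = lcf (fsmap ?X (kdelta ?E1 x)) u' * lcf (?Y y) v' + (-1)^?wx * lcf (?X x) u' * lcf (fsmap ?Y (kdelta ?E2 y)) v'"
    unfolding w C1 C2 fsmap_append lcf_append lcf_tens_fs_tensor
    by (simp add: fsmap_single lcf_fsmap_single_scaled)
  show "lcf (fsmap (\<lambda>p. tens ?E1 (kdelta ?E1) idop 0 p @ tens ?E1 idop (kdelta ?E2) 1 p) (tens ?E1 ?X ?Y 0 (x,y)) @
       fsmap (tens ?E1 ?X ?Y 0) (tens ?E1 (kdelta ?E1) idop 0 (x,y) @ tens ?E1 idop (kdelta ?E2) 1 (x,y))) w = lcf [] w"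
    unfolding lcf_append L1 L2 F1 F2 using F3 by (simp add: algebra_simps)
qed

lemma neg_one_power_square[simp]: "(-1::'k::comm_ring_1)^n * (-1)^n = 1"
  by (metis power_mult_distrib mult_minus_left mult_1_left minus_minus power_one)

lemma ring_cancel_signs:
  fixes p S a b c m :: "'k::comm_ring_1"
  assumes h1: "p * c = S * c" and h2: "p * a = - S * a" and h3: "S * S = 1"
  shows "S * a * b + p * (S * c) * - m + (p * a * b + S * (S * c) * m) = 0"
proof -
  have e1: "p * (S * c) = c" using h1 h3 by (metis mult.left_commute mult.assoc mult_1_left)
  have e2: "p * a * b = - (S * a * b)" using h2 by simp
  have e3: "S * (S * c) = c" using h3 by (metis mult.assoc mult_1_left)
  show ?thesis unfolding e2 e3 using e1 by (simp add: algebra_simps)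
qed

lemma H_term_right_anticomm:
  fixes D1 :: "('c::field, 'a::ring_1) dga" and D2 :: "('c, 'b::ring_1) dga" and x :: "'a list" and y :: "'b list"
  assumes D1: "is_dga D1" and D2: "is_dga D2"
    and Gx: "set x \<subseteq> homog D1" and Gy: "set y \<subseteq> homog D2" and i: "i < length y" and xne: "x \<noteq> []"
  shows "eq_mod null_pair (fsmap (\<lambda>p. tens (entA D1) (kdelta (entA D1)) idop 0 p @ tens (entA D1) idop (kdelta (entA D2)) 1 p)
                  (tens (entA D1) (opow (hc_tau_inv (entA D1)) r) (rot_delta (entA D2) i s) 1 (x,y)) @
       fsmap (tens (entA D1) (opow (hc_tau_inv (entA D1)) r) (rot_delta (entA D2) i s) 1)
          (tens (entA D1) (kdelta (entA D1)) idop 0 (x,y) @ tens (entA D1) idop (kdelta (entA D2)) 1 (x,y))) []"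
proof (rule eq_mod_lcf)
  let ?E1 = "entA D1" and ?E2 = "entA D2"
  let ?X = "opow (hc_tau_inv ?E1) r" and ?Y = "rot_delta ?E2 i s"
  fix w :: "'a list \<times> 'b list" assume nw: "\<not> null_pair w"
  obtain u' v' where w: "w = (u',v')" by force
  have nu: "\<not> has_entry zero_ent u'" and nv: "\<not> has_entry zero_ent v'" using nw w by auto
  let ?wx = "wpar ?E1 x"
  let ?S = "(-1::'c)^?wx"
  have T0: "tens ?E1 ?X ?Y 1 (x,y) = fs_tensor (map (\<lambda>q. (?S * fst q, snd q)) (?X x)) (?Y y)" by (simp add: tens_fs_tensor)
  have C1: "tens ?E1 (kdelta ?E1) idop 0 (x,y) = fs_tensor (kdelta ?E1 x) [(1,y)]" by (simp add: tens_fs_tensor idop_def)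
  have C2: "tens ?E1 idop (kdelta ?E2) 1 (x,y) = fs_tensor [(?S, x)] (kdelta ?E2 y)" by (simp add: tens_fs_tensor idop_def)
  have G1: "lcf (fsmap (kdelta ?E1) (?X x)) u' = lcf (fsmap ?X (kdelta ?E1 x)) u'"
    using kdelta_tau_inv_pow_comm[OF wf_entA[OF D1] Gx xne, of r] nu by (simp add: eq_mod_def)
  have G2: "lcf (fsmap (kdelta ?E2) (?Y y)) v' = - lcf (fsmap ?Y (kdelta ?E2 y)) v'"
    using kdelta_rot_delta_anticomm[OF D2 Gy i, of s] nv by (simp add: eq_mod_def)
  have G3: "(-1)^(wpar ?E1 u') * lcf (?X x) u' = ?S * lcf (?X x) u'"
  proof (cases "lcf (?X x) u' = 0")
    case False
    then have "u' \<in> fs_words (?X x)" by (rule lcf_nonzero_fs_words)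
    then have "wpar ?E1 u' = ?wx" by (rule tau_inv_pow_wpar)
    then show ?thesis by simp
  qed simp
  have G4: "(-1)^(wpar ?E1 u') * lcf (fsmap ?X (kdelta ?E1 x)) u' = - ?S * lcf (fsmap ?X (kdelta ?E1 x)) u'"
  proof (cases "lcf (fsmap ?X (kdelta ?E1 x)) u' = 0")
    case False
    then have "u' \<in> fs_words (fsmap ?X (kdelta ?E1 x))" by (rule lcf_nonzero_fs_words)
    then have "odd (wpar ?E1 u' + ?wx)" using tau_inv_pow_kdelta_wpar[OF D1 Gx xne _ nu] by blast
    then have "(-1::'c)^(wpar ?E1 u') = - ?S"
      by (simp add: minus_one_power_iff split: if_splits)
    then show ?thesis by simp
  qed simp
  have srcs: "\<And>u v. v \<in> fs_words (?X u) \<Longrightarrow> wpar ?E1 v = wpar ?E1 u" by (rule tau_inv_pow_wpar)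
  have L1: "lcf (fsmap (\<lambda>p. tens ?E1 (kdelta ?E1) idop 0 p @ tens ?E1 idop (kdelta ?E2) 1 p) (tens ?E1 ?X ?Y 1 (x,y))) w
      = ?S * lcf (fsmap (kdelta ?E1) (?X x)) u' * lcf (?Y y) v' + (-1)^(wpar ?E1 u') * (?S * lcf (?X x) u') * lcf (fsmap (kdelta ?E2) (?Y y)) v'"
    unfolding w T0 lcf_fsmap_app lcf_tens_fs_tensor
    by (simp add: lcf_fsmap_self_scale_idop lcf_fsmap_scaled_arg lcf_scale_fst)
  have L2: "lcf (fsmap (tens ?E1 ?X ?Y 1) (tens ?E1 (kdelta ?E1) idop 0 (x,y) @ tens ?E1 idop (kdelta ?E2) 1 (x,y))) w
      = (-1)^(wpar ?E1 u') * lcf (fsmap ?X (kdelta ?E1 x)) u' * lcf (?Y y) v' + ?S * (?S * lcf (?X x) u') * lcf (fsmap ?Y (kdelta ?E2 y)) v'"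
    unfolding w C1 C2 fsmap_append lcf_append lcf_tens_fs_tensor
    by (simp add: fsmap_single lcf_fsmap_single_scaled lcf_fsmap_src_sign[OF srcs] lcf_scale_fst)
  have "lcf (fsmap (\<lambda>p. tens ?E1 (kdelta ?E1) idop 0 p @ tens ?E1 idop (kdelta ?E2) 1 p) (tens ?E1 ?X ?Y 1 (x,y))) w +
      lcf (fsmap (tens ?E1 ?X ?Y 1) (tens ?E1 (kdelta ?E1) idop 0 (x,y) @ tens ?E1 idop (kdelta ?E2) 1 (x,y))) w = 0"
    unfolding L1 L2 G1 G2 by (rule ring_cancel_signs[OF G3 G4 neg_one_power_square])
  then show "lcf (fsmap (\<lambda>p. tens ?E1 (kdelta ?E1) idop 0 p @ tens ?E1 idop (kdelta ?E2) 1 p) (tens ?E1 ?X ?Y 1 (x,y)) @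
       fsmap (tens ?E1 ?X ?Y 1) (tens ?E1 (kdelta ?E1) idop 0 (x,y) @ tens ?E1 idop (kdelta ?E2) 1 (x,y))) w = lcf [] w"
    by simp
qed

text \<open>H is the sum of H_term D1 D2 l over l \<in> H_index: Inl (i,r,s) indexes the summands of the first
  double sum in the definition of H, Inr (i,r,s) those of the second.\<close>

definition H_index1 :: "nat \<Rightarrow> nat \<Rightarrow> (nat \<times> nat \<times> nat) list" where
  "H_index1 n m = concat (map (\<lambda>i. concat (map (\<lambda>r. map (\<lambda>s. (i,r,s)) [0..<Suc m]) [0..<Suc (n - i)])) [1..<Suc n])"

definition H_index2 :: "nat \<Rightarrow> nat \<Rightarrow> (nat \<times> nat \<times> nat) list" where
  "H_index2 n m = concat (map (\<lambda>i. concat (map (\<lambda>r. map (\<lambda>s. (i,r,s)) [0..<Suc (m - i)]) [0..<Suc n])) [1..<Suc m])"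

definition H_index :: "nat \<Rightarrow> nat \<Rightarrow> ((nat \<times> nat \<times> nat) + (nat \<times> nat \<times> nat)) list" where
  "H_index n m = map Inl (H_index1 n m) @ map Inr (H_index2 n m)"

definition H_term :: "('k::comm_ring_1, 'a::ring_1) dga \<Rightarrow> ('k, 'b::ring_1) dga \<Rightarrow> ((nat \<times> nat \<times> nat) + (nat \<times> nat \<times> nat))
   \<Rightarrow> 'a list \<times> 'b list \<Rightarrow> ('k \<times> ('a \<times> 'b) list) list" where
  "H_term D1 D2 l p = (case l of
      Inl (i,r,s) \<Rightarrow> fsmap (hc_sh (entA D1) (entA D2) r s) (tens (entA D1) (rot_delta (entA D1) i r) (opow (hc_tau_inv (entA D2)) s) 0 p)
    | Inr (i,r,s) \<Rightarrow> fsmap (hc_sh (entA D1) (entA D2) r s) (tens (entA D1) (opow (hc_tau_inv (entA D1)) r) (rot_delta (entA D2) i s) 1 p))"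

lemma H_expand: "hc_H (entA D1) (entA D2) (u,v) = concat (map (\<lambda>l. H_term D1 D2 l (u,v)) (H_index (length u - 1) (length v - 1)))"
  unfolding hc_H_def H_index_def H_term_def H_index1_def H_index2_def rot_delta_def[abs_def] Let_def
  by (simp add: map_concat o_def)

lemma H_index_range: "Inl (i,r,s) \<in> set (H_index n m) \<Longrightarrow> 1 \<le> i \<and> i \<le> n"
  "Inr (i,r,s) \<in> set (H_index n m) \<Longrightarrow> 1 \<le> i \<and> i \<le> m"
  by (auto simp: H_index_def H_index1_def H_index2_def)

abbreviation kdelta_tensor :: "('k::comm_ring_1, 'a::ring_1) dga \<Rightarrow> ('k, 'b::ring_1) dga \<Rightarrow> 'a list \<Rightarrow> 'b list
    \<Rightarrow> ('k \<times> ('a list \<times> 'b list)) list" where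
  "kdelta_tensor D1 D2 x y \<equiv> tens (entA D1) (kdelta (entA D1)) idop 0 (x,y) @ tens (entA D1) idop (kdelta (entA D2)) 1 (x,y)"

lemma bdelta_sh_anticomm:
  fixes D1 :: "('c::field, 'a::ring_1) dga" and D2 :: "('c, 'b::ring_1) dga" and x :: "'a list" and y :: "'b list"
    and T :: "'a list \<times> 'b list \<Rightarrow> ('c \<times> ('a list \<times> 'b list)) list"
  assumes D1: "is_dga D1" and D2: "is_dga D2" and one1: "(1::'a) \<noteq> 0" and one2: "(1::'b) \<noteq> 0"
    and W: "\<And>q. q \<in> fs_words (T (x,y)) \<Longrightarrow> fst q \<noteq> [] \<and> set (fst q) \<subseteq> homog D1 \<and> set (snd q) \<subseteq> homog D2"
    and P: "eq_mod null_pair (fsmap (\<lambda>p. tens (entA D1) (kdelta (entA D1)) idop 0 p @ tens (entA D1) idop (kdelta (entA D2)) 1 p) (T (x,y))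
              @ fsmap T (kdelta_tensor D1 D2 x y)) []"
  shows "eq_mod (has_entry zero_pair) (fsmap (hc_bdelta (entT D1 D2)) (fsmap (hc_sh (entA D1) (entA D2) r s) (T (x,y))) @
           fsmap (\<lambda>p. fsmap (hc_sh (entA D1) (entA D2) r s) (T p)) (kdelta_tensor D1 D2 x y)) []"
proof -
  let ?E1 = "entA D1" and ?E2 = "entA D2" and ?ET = "entT D1 D2"
  let ?Dp = "\<lambda>p. tens ?E1 (kdelta ?E1) idop 0 p @ tens ?E1 idop (kdelta ?E2) 1 p"
  let ?T0 = "T (x,y)" and ?sh = "hc_sh ?E1 ?E2 r s"
  have "fsmap (hc_bdelta ?ET) (fsmap ?sh ?T0) = fsmap (\<lambda>p. fsmap (hc_bdelta ?ET) (?sh p)) ?T0"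
    by (simp add: fsmap_fsmap)
  also have "eq_mod (has_entry zero_pair) \<dots> (fsmap (\<lambda>p. fsmap ?sh (?Dp p)) ?T0)"
  proof (rule eq_mod_fsmap_cong)
    fix q assume q: "q \<in> fs_words ?T0"
    obtain u v where uv: "q = (u,v)" by force
    have "u \<noteq> []" "set u \<subseteq> homog D1" "set v \<subseteq> homog D2" using W[OF q] uv by auto
    then show "eq_mod (has_entry zero_pair) (fsmap (hc_bdelta ?ET) (?sh q)) (fsmap ?sh (?Dp q))"
      unfolding uv by (rule bdelta_sh[OF D1 D2 one1 one2])
  qed
  also have "fsmap (\<lambda>p. fsmap ?sh (?Dp p)) ?T0 = fsmap ?sh (fsmap ?Dp ?T0)" by (simp add: fsmap_fsmap)
  finally have a: "eq_mod (has_entry zero_pair) (fsmap (hc_bdelta ?ET) (fsmap ?sh ?T0)) (fsmap ?sh (fsmap ?Dp ?T0))" .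
  have c: "eq_mod (has_entry zero_pair) (fsmap ?sh (fsmap ?Dp ?T0 @ fsmap T (kdelta_tensor D1 D2 x y))) (fsmap ?sh [])"
    by (rule eq_mod_fsmap[OF P, where P="\<lambda>_. True"]) (auto intro: sh_null_pair)
  have "eq_mod (has_entry zero_pair) (fsmap (hc_bdelta ?ET) (fsmap ?sh ?T0) @ fsmap (\<lambda>p. fsmap ?sh (T p)) (kdelta_tensor D1 D2 x y))
      (fsmap ?sh (fsmap ?Dp ?T0 @ fsmap T (kdelta_tensor D1 D2 x y)))"
    unfolding fsmap_append fsmap_fsmap[symmetric] by (rule eq_mod_append[OF a eq_mod_refl])
  also have "eq_mod (has_entry zero_pair) \<dots> (fsmap ?sh [])" by (rule c)
  finally show ?thesis by simp
qed

lemma anti_bdelta_H_term: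
  fixes D1 :: "('c::field, 'a::ring_1) dga" and D2 :: "('c, 'b::ring_1) dga" and x :: "'a list" and y :: "'b list"
  assumes D1: "is_dga D1" and D2: "is_dga D2"
    and one1: "(1::'a) \<noteq> 0" and one2: "(1::'b) \<noteq> 0"
    and xne: "x \<noteq> []" and yne: "y \<noteq> []" and Gx: "set x \<subseteq> homog D1" and Gy: "set y \<subseteq> homog D2"
    and l: "l \<in> set (H_index (length x - 1) (length y - 1))"
  shows "eq_mod (has_entry zero_pair) (fsmap (hc_bdelta (entT D1 D2)) (H_term D1 D2 l (x,y)) @ fsmap (H_term D1 D2 l) (kdelta_tensor D1 D2 x y)) []"
proof -
  let ?E1 = "entA D1" and ?E2 = "entA D2" and ?ET = "entT D1 D2"
  show ?thesis
  proof (cases l)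
    case (Inl t)
    obtain i r s where t: "t = (i,r,s)" by (cases t) auto
    have i: "1 \<le> i" "i < length x" using H_index_range(1)[of i r s] l Inl t by fastforce+
    have W: "\<And>q. q \<in> fs_words (tens ?E1 (rot_delta ?E1 i r) (opow (hc_tau_inv ?E2) s) 0 (x,y)) \<Longrightarrow>
        fst q \<noteq> [] \<and> set (fst q) \<subseteq> homog D1 \<and> set (snd q) \<subseteq> homog D2"
    proof -
      fix q assume "q \<in> fs_words (tens ?E1 (rot_delta ?E1 i r) (opow (hc_tau_inv ?E2) s) 0 (x,y))"
      then have q: "fst q \<in> fs_words (rot_delta ?E1 i r x)" "snd q \<in> fs_words (opow (hc_tau_inv ?E2) s y)" using fs_words_tens by blast+
      show "fst q \<noteq> [] \<and> set (fst q) \<subseteq> homog D1 \<and> set (snd q) \<subseteq> homog D2"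
        using rot_delta_fs_words[OF wf_entA[OF D1] Gx i(2) q(1)] tau_inv_pow_fs_words[OF q(2)] Gy xne by auto
    qed
    show ?thesis unfolding Inl t H_term_def
      using bdelta_sh_anticomm[OF D1 D2 one1 one2 W H_term_left_anticomm[OF D1 D2 Gx Gy i(2) yne, of r s]] by simp
  next
    case (Inr t)
    obtain i r s where t: "t = (i,r,s)" by (cases t) auto
    have i: "1 \<le> i" "i < length y" using H_index_range(2)[of i r s] l Inr t by fastforce+
    have W: "\<And>q. q \<in> fs_words (tens ?E1 (opow (hc_tau_inv ?E1) r) (rot_delta ?E2 i s) 1 (x,y)) \<Longrightarrow>
        fst q \<noteq> [] \<and> set (fst q) \<subseteq> homog D1 \<and> set (snd q) \<subseteq> homog D2"
    proof -
      fix q assume "q \<in> fs_words (tens ?E1 (opow (hc_tau_inv ?E1) r) (rot_delta ?E2 i s) 1 (x,y))"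
      then have q: "fst q \<in> fs_words (opow (hc_tau_inv ?E1) r x)" "snd q \<in> fs_words (rot_delta ?E2 i s y)" using fs_words_tens by blast+
      show "fst q \<noteq> [] \<and> set (fst q) \<subseteq> homog D1 \<and> set (snd q) \<subseteq> homog D2"
        using rot_delta_fs_words[OF wf_entA[OF D2] Gy i(2) q(2)] tau_inv_pow_fs_words[OF q(1)] Gx xne by auto
    qed
    show ?thesis unfolding Inr t H_term_def
      using bdelta_sh_anticomm[OF D1 D2 one1 one2 W H_term_right_anticomm[OF D1 D2 Gx Gy i(2) xne, of r s]] by simp
  qed
qed

lemma H_zero_pair:
  fixes D1 :: "('c::field, 'a::ring_1) dga" and D2 :: "('c, 'b::ring_1) dga" and u :: "'a list" and v :: "'b list"
  assumes D1: "is_dga D1" and D2: "is_dga D2" and Gu: "set u \<subseteq> homog D1" and Gv: "set v \<subseteq> homog D2"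
    and np: "null_pair (u,v)" and w: "w \<in> fs_words (hc_H (entA D1) (entA D2) (u,v))"
  shows "has_entry zero_pair w"
proof -
  let ?E1 = "entA D1" and ?E2 = "entA D2"
  obtain l where l: "l \<in> set (H_index (length u - 1) (length v - 1))" and wl: "w \<in> fs_words (H_term D1 D2 l (u,v))"
    using w unfolding H_expand fs_words_concat by auto
  show ?thesis
  proof (cases l)
    case (Inl t)
    obtain i r s where t: "t = (i,r,s)" by (cases t) auto
    have i: "i < length u" using H_index_range(1)[of i r s] l Inl t by fastforce
    obtain q where q: "q \<in> fs_words (tens ?E1 (rot_delta ?E1 i r) (opow (hc_tau_inv ?E2) s) 0 (u,v))"
        "w \<in> fs_words (hc_sh ?E1 ?E2 r s q)"
      using wl unfolding Inl t H_term_def by (auto elim: fs_words_fsmapE)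
    have q1: "fst q \<in> fs_words (rot_delta ?E1 i r u)" and q2: "snd q \<in> fs_words (opow (hc_tau_inv ?E2) s v)"
      using fs_words_tens[OF q(1)] by auto
    have "null_pair q"
      using np rot_delta_fs_words[OF wf_entA[OF D1] Gu i q1] tau_inv_pow_fs_words[OF q2] by (auto simp: has_entry_def)
    then show ?thesis using sh_null_pair q(2) by blast
  next
    case (Inr t)
    obtain i r s where t: "t = (i,r,s)" by (cases t) auto
    have i: "i < length v" using H_index_range(2)[of i r s] l Inr t by fastforce
    obtain q where q: "q \<in> fs_words (tens ?E1 (opow (hc_tau_inv ?E1) r) (rot_delta ?E2 i s) 1 (u,v))"
        "w \<in> fs_words (hc_sh ?E1 ?E2 r s q)"
      using wl unfolding Inr t H_term_def by (auto elim: fs_words_fsmapE)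
    have q1: "fst q \<in> fs_words (opow (hc_tau_inv ?E1) r u)" and q2: "snd q \<in> fs_words (rot_delta ?E2 i s v)"
      using fs_words_tens[OF q(1)] by auto
    have "null_pair q"
      using np rot_delta_fs_words[OF wf_entA[OF D2] Gv i q2] tau_inv_pow_fs_words[OF q1] by (auto simp: has_entry_def)
    then show ?thesis using sh_null_pair q(2) by blast
  qed
qed

lemma kdelta_tensor_fs_words:
  fixes D1 :: "('c::field, 'a::ring_1) dga" and D2 :: "('c, 'b::ring_1) dga" and x :: "'a list" and y :: "'b list"
  assumes D1: "is_dga D1" and D2: "is_dga D2" and Gx: "set x \<subseteq> homog D1" and Gy: "set y \<subseteq> homog D2"
    and p: "p \<in> fs_words (kdelta_tensor D1 D2 x y)"
  shows "set (fst p) \<subseteq> homog D1 \<and> set (snd p) \<subseteq> homog D2 \<and> length (fst p) = length x \<and> length (snd p) = length y"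
proof -
  let ?E1 = "entA D1" and ?E2 = "entA D2"
  have wf1: "wf_ent ?E1 (homog D1) zero_ent" by (rule wf_entA[OF D1])
  have wf2: "wf_ent ?E2 (homog D2) zero_ent" by (rule wf_entA[OF D2])
  from p have "p \<in> fs_words (tens ?E1 (kdelta ?E1) idop 0 (x,y)) \<or> p \<in> fs_words (tens ?E1 idop (kdelta ?E2) 1 (x,y))" by simp
  then show ?thesis
  proof
    assume "p \<in> fs_words (tens ?E1 (kdelta ?E1) idop 0 (x,y))"
    then have "fst p \<in> fs_words (kdelta ?E1 x) \<and> snd p \<in> fs_words (idop y :: ('c \<times> 'b list) list)" by (rule fs_words_tens)
    then show ?thesis using kdelta_fs_words[OF wf1 Gx] Gy by (auto simp: idop_def)
  next
    assume "p \<in> fs_words (tens ?E1 idop (kdelta ?E2) 1 (x,y))"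
    then have "fst p \<in> fs_words (idop x :: ('c \<times> 'a list) list) \<and> snd p \<in> fs_words (kdelta ?E2 y)" by (rule fs_words_tens)
    then show ?thesis using kdelta_fs_words[OF wf2 Gy] Gx by (auto simp: idop_def)
  qed
qed

lemma bdelta_tensor_fs_words:
  fixes D1 :: "('c::field, 'a::ring_1) dga" and D2 :: "('c, 'b::ring_1) dga" and x :: "'a list" and y :: "'b list"
  assumes D1: "is_dga D1" and D2: "is_dga D2" and Gx: "set x \<subseteq> homog D1" and Gy: "set y \<subseteq> homog D2"
    and p: "p \<in> fs_words (tens (entA D1) (hc_bdelta (entA D1)) idop 0 (x,y) @ tens (entA D1) idop (hc_bdelta (entA D2)) 1 (x,y))"
  shows "set (fst p) \<subseteq> homog D1 \<and> set (snd p) \<subseteq> homog D2 \<and> length (fst p) = length x \<and> length (snd p) = length y"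
proof -
  let ?E1 = "entA D1" and ?E2 = "entA D2"
  have wf1: "wf_ent ?E1 (homog D1) zero_ent" by (rule wf_entA[OF D1])
  have wf2: "wf_ent ?E2 (homog D2) zero_ent" by (rule wf_entA[OF D2])
  from p have "p \<in> fs_words (tens ?E1 (hc_bdelta ?E1) idop 0 (x,y)) \<or> p \<in> fs_words (tens ?E1 idop (hc_bdelta ?E2) 1 (x,y))" by simp
  then show ?thesis
  proof
    assume "p \<in> fs_words (tens ?E1 (hc_bdelta ?E1) idop 0 (x,y))"
    then have "fst p \<in> fs_words (hc_bdelta ?E1 x) \<and> snd p \<in> fs_words (idop y :: ('c \<times> 'b list) list)" by (rule fs_words_tens)
    then have a: "fst p \<in> fs_words (hc_bdelta ?E1 x)" "snd p \<in> fs_words (idop y :: ('c \<times> 'b list) list)" by auto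
    obtain i where "i < length x" "fst p \<in> fs_words (hc_delta ?E1 i x)" using bdelta_fs_words[OF a(1)] by blast
    then show ?thesis using delta_fs_words_homog[OF wf1 Gx] a(2) Gy by (auto simp: idop_def)
  next
    assume "p \<in> fs_words (tens ?E1 idop (hc_bdelta ?E2) 1 (x,y))"
    then have "fst p \<in> fs_words (idop x :: ('c \<times> 'a list) list) \<and> snd p \<in> fs_words (hc_bdelta ?E2 y)" by (rule fs_words_tens)
    then have a: "fst p \<in> fs_words (idop x :: ('c \<times> 'a list) list)" "snd p \<in> fs_words (hc_bdelta ?E2 y)" by auto
    obtain i where "i < length y" "snd p \<in> fs_words (hc_delta ?E2 i y)" using bdelta_fs_words[OF a(2)] by blast
    then show ?thesis using delta_fs_words_homog[OF wf2 Gy] a(1) Gx by (auto simp: idop_def)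
  qed
qed

lemma bdelta_tensor_eq_mod_kdelta_tensor:
  fixes D1 :: "('c::field, 'a::ring_1) dga" and D2 :: "('c, 'b::ring_1) dga" and x :: "'a list" and y :: "'b list"
  assumes D1: "is_dga D1" and D2: "is_dga D2" and Gx: "set x \<subseteq> homog D1" and Gy: "set y \<subseteq> homog D2"
  shows "eq_mod null_pair (tens (entA D1) (hc_bdelta (entA D1)) idop 0 (x,y) @ tens (entA D1) idop (hc_bdelta (entA D2)) 1 (x,y))
           (kdelta_tensor D1 D2 x y)"
proof -
  let ?E1 = "entA D1" and ?E2 = "entA D2"
  have wf1: "wf_ent ?E1 (homog D1) zero_ent" by (rule wf_entA[OF D1])
  have wf2: "wf_ent ?E2 (homog D2) zero_ent" by (rule wf_entA[OF D2])
  have e1: "tens ?E1 (hc_bdelta ?E1) idop 0 (x,y) = fs_tensor (hc_bdelta ?E1 x) [(1,y)]" by (simp add: tens_fs_tensor idop_def)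
  have e2: "tens ?E1 (kdelta ?E1) idop 0 (x,y) = fs_tensor (kdelta ?E1 x) [(1,y)]" by (simp add: tens_fs_tensor idop_def)
  have e3: "tens ?E1 idop (hc_bdelta ?E2) 1 (x,y) = fs_tensor [((-1)^(wpar ?E1 x), x)] (hc_bdelta ?E2 y)" by (simp add: tens_fs_tensor idop_def)
  have e4: "tens ?E1 idop (kdelta ?E2) 1 (x,y) = fs_tensor [((-1)^(wpar ?E1 x), x)] (kdelta ?E2 y)" by (simp add: tens_fs_tensor idop_def)
  show ?thesis unfolding e1 e2 e3 e4
    by (rule eq_mod_append[OF fs_tensor_eq_mod_left[OF bdelta_eq_mod_kdelta[OF wf1 Gx]] fs_tensor_eq_mod_right[OF bdelta_eq_mod_kdelta[OF wf2 Gy]]])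
qed

lemma anti_bdelta_eq_mod_zero_pair:
  fixes D1 :: "('c::field, 'a::ring_1) dga" and D2 :: "('c, 'b::ring_1) dga" and x :: "'a list" and y :: "'b list"
  assumes D1: "is_dga D1" and D2: "is_dga D2"
    and one1: "(1::'a) \<noteq> 0" and one2: "(1::'b) \<noteq> 0"
    and xne: "x \<noteq> []" and yne: "y \<noteq> []" and Gx: "set x \<subseteq> homog D1" and Gy: "set y \<subseteq> homog D2"
  shows "eq_mod (has_entry zero_pair) (hc_anti D1 D2 (hc_bdelta (entT D1 D2)) (hc_bdelta (entA D1)) (hc_bdelta (entA D2)) x y) []"
proof -
  let ?E1 = "entA D1" and ?E2 = "entA D2" and ?ET = "entT D1 D2"
  let ?H = "hc_H ?E1 ?E2"
  let ?L = "H_index (length x - 1) (length y - 1)"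
  let ?Cd = "tens ?E1 (hc_bdelta ?E1) idop 0 (x,y) @ tens ?E1 idop (hc_bdelta ?E2) 1 (x,y)"
  let ?C = "kdelta_tensor D1 D2 x y"
  let ?P = "\<lambda>p. set (fst p) \<subseteq> homog D1 \<and> set (snd p) \<subseteq> homog D2 \<and> length (fst p) = length x \<and> length (snd p) = length y"
  have PC: "\<And>p. p \<in> fs_words ?C \<Longrightarrow> ?P p" by (rule kdelta_tensor_fs_words[OF D1 D2 Gx Gy])
  have PCd: "\<And>p. p \<in> fs_words ?Cd \<Longrightarrow> ?P p" by (rule bdelta_tensor_fs_words[OF D1 D2 Gx Gy])
  have "hc_anti D1 D2 (hc_bdelta ?ET) (hc_bdelta ?E1) (hc_bdelta ?E2) x y = fsmap (hc_bdelta ?ET) (?H (x,y)) @ fsmap ?H ?Cd"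
    by (simp add: hc_anti_def)
  also have "eq_mod (has_entry zero_pair) \<dots> (fsmap (hc_bdelta ?ET) (?H (x,y)) @ fsmap ?H ?C)"
  proof (rule eq_mod_append[OF eq_mod_refl], rule eq_mod_fsmap[OF bdelta_tensor_eq_mod_kdelta_tensor[OF D1 D2 Gx Gy], where P="?P"])
    fix p assume "p \<in> fs_words ?Cd \<union> fs_words ?C" then show "?P p" using PC PCd by blast
  next
    fix p w assume "?P p" "null_pair p" "w \<in> fs_words (?H p)"
    then show "has_entry zero_pair w" using H_zero_pair[OF D1 D2, of "fst p" "snd p"] by simp
  qed
  also have "eq_mod (has_entry zero_pair) (fsmap (hc_bdelta ?ET) (?H (x,y)) @ fsmap ?H ?C)
      (concat (map (\<lambda>l. fsmap (hc_bdelta ?ET) (H_term D1 D2 l (x,y))) ?L) @ concat (map (\<lambda>l. fsmap (H_term D1 D2 l) ?C) ?L))"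
  proof (rule eq_mod_append)
    show "eq_mod (has_entry zero_pair) (fsmap (hc_bdelta ?ET) (?H (x,y))) (concat (map (\<lambda>l. fsmap (hc_bdelta ?ET) (H_term D1 D2 l (x,y))) ?L))"
      by (simp add: H_expand fsmap_concat o_def)
    show "eq_mod (has_entry zero_pair) (fsmap ?H ?C) (concat (map (\<lambda>l. fsmap (H_term D1 D2 l) ?C) ?L))"
    proof (rule fsmap_concat_swap)
      fix p assume "p \<in> fs_words ?C"
      then have "?P p" by (rule PC)
      then show "?H p = concat (map (\<lambda>l. H_term D1 D2 l p) ?L)"
        using H_expand[of D1 D2 "fst p" "snd p"] by simp
    qed
  qed
  also have "eq_mod (has_entry zero_pair) \<dots> []"
    by (rule eq_mod_concat_append) (rule anti_bdelta_H_term[OF D1 D2 one1 one2 xne yne Gx Gy])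
  finally show ?thesis .
qed

section \<open>Passing to the normalized complex\<close>

lemma H_fs_words_unit: "w \<in> fs_words (hc_H (entA D1) (entA D2) (u,v)) \<Longrightarrow> \<exists>t. w = (1,1) # t"
proof -
  assume w: "w \<in> fs_words (hc_H (entA D1) (entA D2) (u,v))"
  obtain l where wl: "w \<in> fs_words (H_term D1 D2 l (u,v))"
    using w unfolding H_expand fs_words_concat by auto
  show ?thesis
  proof (cases l)
    case (Inl t)
    obtain i r s where t: "t = (i,r,s)" by (cases t) auto
    show ?thesis using wl unfolding Inl t H_term_def by (auto elim: fs_words_fsmapE dest: sh_fs_words_unit)
  next
    case (Inr t)
    obtain i r s where t: "t = (i,r,s)" by (cases t) auto
    show ?thesis using wl unfolding Inr t H_term_def by (auto elim: fs_words_fsmapE dest: sh_fs_words_unit)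
  qed
qed

lemma B_fs_words:
  assumes w: "w \<in> fs_words (hc_B E v)" and ne: "v \<noteq> []"
  shows "\<exists>v''. mset v'' = mset v \<and> (w = eone E # v'' \<or> w = last v'' # eone E # butlast v'')"
proof -
  obtain v' where v': "v' \<in> fs_words (fsmap (hc_h E) (hc_N E v))" "w \<in> fs_words ((1,v') # fsneg (hc_tau_inv E v'))"
    using w unfolding hc_B_def by (rule fs_words_fsmapE)
  obtain v'' where v'': "v'' \<in> fs_words (hc_N E v)" "v' \<in> fs_words (hc_h E v'')" using v'(1) by (rule fs_words_fsmapE)
  have v'e: "v' = eone E # v''" using v''(2) by (simp add: hc_h_def)
  obtain i where "v'' \<in> fs_words (opow (hc_tau E) i v)" using v''(1) unfolding hc_N_def fs_words_concat by auto
  then have m: "mset v'' = mset v" by (rule fs_words_tau_pow)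
  have "v'' \<noteq> []" using m ne by auto
  from v'(2) have "w = v' \<or> w \<in> fs_words (hc_tau_inv E v')" by auto
  then show ?thesis
  proof
    assume "w = v'" then show ?thesis using m v'e by blast
  next
    assume "w \<in> fs_words (hc_tau_inv E v')"
    then have "w = last v' # butlast v'" unfolding v'e by (simp add: hc_tau_inv_def split: if_splits)
    then have "w = last v'' # eone E # butlast v''" using v'e \<open>v'' \<noteq> []\<close> by simp
    then show ?thesis using m by blast
  qed
qed

text \<open>Words that vanish in the normalized complex of A'\<otimes>A'': a zero tensor factor, or the unit
  1\<otimes>1 in a bracket position.\<close>

definition degenerate_word :: "('a::ring_1 \<times> 'b::ring_1) list \<Rightarrow> bool" where
  "degenerate_word w \<longleftrightarrow> has_entry zero_pair w \<or> (1,1) \<in> set (tl w)"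

lemma sh_degenerate:
  fixes D1 :: "('c::comm_ring_1, 'a::ring_1) dga" and D2 :: "('c, 'b::ring_1) dga"
    and q :: "'a list \<times> 'b list"
  assumes ws: "w \<in> fs_words (hc_sh (entA D1) (entA D2) r s q)"
    and h: "(1 \<in> set (fst q) \<or> 0 \<in> set (fst q)) \<or> (1 \<in> set (snd q) \<or> 0 \<in> set (snd q))"
  shows "degenerate_word w"
proof -
  obtain bs where bs: "fits_shuffle bs (fst q) (snd q)" "w = (1,1) # shuf bs (map incl1 (fst q)) (map incl2 (snd q))"
    using sh_fs_words[OF ws] by blast
  have vv: "fits_shuffle bs (map (incl1 :: 'a \<Rightarrow> 'a \<times> 'b) (fst q)) (map (incl2 :: 'b \<Rightarrow> 'a \<times> 'b) (snd q))"
    using bs(1) by (simp add: fits_shuffle_def)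
  have st: "set (tl w) = set (map incl1 (fst q)) \<union> set (map incl2 (snd q))" using set_shuf[OF vv] bs(2) by simp
  from h show "degenerate_word w"
  proof (elim disjE)
    assume "1 \<in> set (fst q)" then have "incl1 1 \<in> set (tl w)" using st by auto
    then show ?thesis by (simp add: degenerate_word_def incl1_def)
  next
    assume "0 \<in> set (fst q)" then have "incl1 0 \<in> set (tl w)" using st by auto
    then have "incl1 0 \<in> set w" using bs(2) by simp
    then show ?thesis unfolding degenerate_word_def has_entry_def incl1_def by force
  next
    assume "1 \<in> set (snd q)" then have "incl2 1 \<in> set (tl w)" using st by auto
    then show ?thesis by (simp add: degenerate_word_def incl2_def)
  next
    assume "0 \<in> set (snd q)" then have "incl2 0 \<in> set (tl w)" using st by auto
    then have "incl2 0 \<in> set w" using bs(2) by simp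
    then show ?thesis unfolding degenerate_word_def has_entry_def incl2_def by force
  qed
qed

lemma H_degenerate:
  fixes D1 :: "('c::field, 'a::ring_1) dga" and D2 :: "('c, 'b::ring_1) dga" and u :: "'a list" and v :: "'b list"
  assumes D1: "is_dga D1" and D2: "is_dga D2"
    and one: "(1::'a) \<in> set u \<or> (1::'b) \<in> set v"
    and w: "w \<in> fs_words (hc_H (entA D1) (entA D2) (u,v))"
  shows "degenerate_word w"
proof -
  let ?E1 = "entA D1" and ?E2 = "entA D2"
  obtain l where l: "l \<in> set (H_index (length u - 1) (length v - 1))" and wl: "w \<in> fs_words (H_term D1 D2 l (u,v))"
    using w unfolding H_expand fs_words_concat by auto
  show ?thesis
  proof (cases l)
    case (Inl t)
    obtain i r s where t: "t = (i,r,s)" by (cases t) auto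
    have i: "i < length u" using H_index_range(1)[of i r s] l Inl t by fastforce
    obtain q where q: "q \<in> fs_words (tens ?E1 (rot_delta ?E1 i r) (opow (hc_tau_inv ?E2) s) 0 (u,v))"
        "w \<in> fs_words (hc_sh ?E1 ?E2 r s q)"
      using wl unfolding Inl t H_term_def by (auto elim: fs_words_fsmapE)
    have q1: "fst q \<in> fs_words (rot_delta ?E1 i r u)" and q2: "snd q \<in> fs_words (opow (hc_tau_inv ?E2) s v)"
      using fs_words_tens[OF q(1)] by auto
    have "(1 \<in> set (fst q) \<or> 0 \<in> set (fst q)) \<or> (1 \<in> set (snd q) \<or> 0 \<in> set (snd q))"
      using one rot_delta_keeps_unit[OF D1 _ i q1] tau_inv_pow_fs_words[OF q2] by auto
    then show ?thesis by (rule sh_degenerate[OF q(2)])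
  next
    case (Inr t)
    obtain i r s where t: "t = (i,r,s)" by (cases t) auto
    have i: "i < length v" using H_index_range(2)[of i r s] l Inr t by fastforce
    obtain q where q: "q \<in> fs_words (tens ?E1 (opow (hc_tau_inv ?E1) r) (rot_delta ?E2 i s) 1 (u,v))"
        "w \<in> fs_words (hc_sh ?E1 ?E2 r s q)"
      using wl unfolding Inr t H_term_def by (auto elim: fs_words_fsmapE)
    have q1: "fst q \<in> fs_words (opow (hc_tau_inv ?E1) r u)" and q2: "snd q \<in> fs_words (rot_delta ?E2 i s v)"
      using fs_words_tens[OF q(1)] by auto
    have "(1 \<in> set (fst q) \<or> 0 \<in> set (fst q)) \<or> (1 \<in> set (snd q) \<or> 0 \<in> set (snd q))"
      using one rot_delta_keeps_unit[OF D2 _ i q2] tau_inv_pow_fs_words[OF q1] by auto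
    then show ?thesis by (rule sh_degenerate[OF q(2)])
  qed
qed

abbreviation fscale :: "'k::field \<Rightarrow> ('w \<Rightarrow> 'k) \<Rightarrow> ('w \<Rightarrow> 'k)" where
  "fscale \<equiv> (\<lambda>c f. (\<lambda>w. c * f w))"

lemma module_fscale: "module (fscale :: 'k::field \<Rightarrow> ('w \<Rightarrow> 'k) \<Rightarrow> ('w \<Rightarrow> 'k))"
  by unfold_locales (simp_all add: fun_eq_iff algebra_simps)

lemma sum_fun_apply: "finite A \<Longrightarrow> (\<Sum>a\<in>A. f a) x = (\<Sum>a\<in>A. f a x)"
  by (induction A rule: finite_induct) simp_all

lemma lcf_decomp: "lcf L = (\<Sum>w\<in>fs_words L. fscale (lcf L w) (lcf [(1,w)]))"
proof (rule ext)
  fix w'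
  have fin: "finite (fs_words L)" by (simp add: fs_words_def)
  have "(\<Sum>w\<in>fs_words L. fscale (lcf L w) (lcf [(1,w)])) w' = (\<Sum>w\<in>fs_words L. lcf L w * (if w = w' then 1 else 0))"
    by (simp add: sum_fun_apply[OF fin])
  also have "\<dots> = (\<Sum>w\<in>fs_words L. if w = w' then lcf L w else 0)" by (rule sum.cong) auto
  also have "\<dots> = lcf L w'" using fin by (simp add: lcf_notin)
  finally show "lcf L w' = (\<Sum>w\<in>fs_words L. fscale (lcf L w) (lcf [(1,w)])) w'" by simp
qed

lemma lcf_in_span:
  assumes "\<And>w. w \<in> fs_words L \<Longrightarrow> lcf L w \<noteq> 0 \<Longrightarrow> lcf [(1,w)] \<in> module.span fscale S"
  shows "lcf (L :: ('k::field \<times> 'w) list) \<in> module.span fscale S"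
proof -
  have "(\<Sum>w\<in>fs_words L. fscale (lcf L w) (lcf [(1,w)])) \<in> module.span fscale S"
  proof (rule module.span_sum[OF module_fscale])
    fix w assume w: "w \<in> fs_words L"
    show "fscale (lcf L w) (lcf [(1,w)]) \<in> module.span fscale S"
    proof (cases "lcf L w = 0")
      case True
      then have "fscale (lcf L w) (lcf [(1,w)]) = 0" by (simp add: fun_eq_iff)
      then show ?thesis using module.span_zero[OF module_fscale] by metis
    next
      case False
      then show ?thesis using module.span_scale[OF module_fscale assms[OF w False]] by blast
    qed
  qed
  then show ?thesis using lcf_decomp[of L] by simp
qed

lemma zero_pair_in_span:
  fixes w :: "('a::ring_1 \<times> 'b::ring_1) list" and D1 :: "('k::field, 'a) dga" and D2 :: "('k, 'b) dga"
  assumes "has_entry zero_pair w"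
  shows "lcf [(1::'k, w)] \<in> module.span fscale (relT D1 D2)"
proof -
  obtain a b where ab: "(a,b) \<in> set w" "a = 0 \<or> b = 0" using assms by (auto simp: has_entry_def)
  obtain u v where w: "w = u @ (a,b) # v" using ab(1) by (meson split_list)
  from ab(2) show ?thesis
  proof
    assume a: "a = 0"
    have r: "lcf [(1, u @ ((0::'a) + 0, b) # v), (-1, u @ (0, b) # v), (-1, u @ (0, b) # v)] \<in> relT D1 D2"
      unfolding relT_def by (rule UnI1)+ blast
    have e: "lcf [(1::'k, w)] = - lcf [(1, u @ ((0::'a) + 0, b) # v), (-1, u @ (0, b) # v), (-1, u @ (0, b) # v)]"
      by (simp add: fun_eq_iff w a)
    show ?thesis unfolding e by (rule module.span_neg[OF module_fscale module.span_base[OF module_fscale r]])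
  next
    assume b: "b = 0"
    have r: "lcf [(1, u @ (a, (0::'b) + 0) # v), (-1, u @ (a, 0) # v), (-1, u @ (a, 0) # v)] \<in> relT D1 D2"
      unfolding relT_def by (rule UnI1, rule UnI1, rule UnI1, rule UnI2) blast
    have e: "lcf [(1::'k, w)] = - lcf [(1, u @ (a, (0::'b) + 0) # v), (-1, u @ (a, 0) # v), (-1, u @ (a, 0) # v)]"
      by (simp add: fun_eq_iff w b)
    show ?thesis unfolding e by (rule module.span_neg[OF module_fscale module.span_base[OF module_fscale r]])
  qed
qed

lemma unit_tail_in_span:
  fixes w :: "('a::ring_1 \<times> 'b::ring_1) list" and D1 :: "('k::field, 'a) dga" and D2 :: "('k, 'b) dga"
  assumes "(1,1) \<in> set (tl w)"
  shows "lcf [(1::'k, w)] \<in> module.span fscale (relT D1 D2)"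
proof -
  obtain h t where wt: "w = h # t" using assms by (cases w) auto
  obtain u v where t: "t = u @ (1,1) # v" using assms wt by (auto dest: split_list)
  have "lcf [(1::'k, (h # u) @ (1,1) # v)] \<in> relT D1 D2" unfolding relT_def by (rule UnI2) blast
  then show ?thesis using module.span_base[OF module_fscale] wt t by simp
qed

lemma degenerate_in_span: "degenerate_word w \<Longrightarrow> lcf [(1::'k::field, w)] \<in> module.span fscale (relT (D1 :: ('k, 'a::ring_1) dga) (D2 :: ('k, 'b::ring_1) dga))"
  unfolding degenerate_word_def using zero_pair_in_span unit_tail_in_span by blast

lemma ring_one_eq_zero_all: "(1::'a::ring_1) = 0 \<Longrightarrow> (a::'a) = 0"
  by (metis mult_1_right mult_zero_right)

lemma anti_bdelta_fs_words_nonempty: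
  assumes w: "w \<in> fs_words (hc_anti D1 D2 (hc_bdelta (entT D1 D2)) F1 F2 x y)"
  shows "w \<noteq> []"
proof -
  from w have "w \<in> fs_words (fsmap (hc_bdelta (entT D1 D2)) (hc_H (entA D1) (entA D2) (x,y))) \<or>
      w \<in> fs_words (fsmap (hc_H (entA D1) (entA D2)) (tens (entA D1) F1 idop 0 (x, y) @ tens (entA D1) idop F2 1 (x, y)))"
    by (simp add: hc_anti_def)
  then show ?thesis
  proof
    assume "w \<in> fs_words (fsmap (hc_bdelta (entT D1 D2)) (hc_H (entA D1) (entA D2) (x,y)))"
    then obtain v where v: "v \<in> fs_words (hc_H (entA D1) (entA D2) (x,y))" "w \<in> fs_words (hc_bdelta (entT D1 D2) v)"
      by (rule fs_words_fsmapE)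
    obtain i where i: "i < length v" "w \<in> fs_words (hc_delta (entT D1 D2) i v)" using bdelta_fs_words[OF v(2)] by blast
    obtain c e where "w = v[i:=e]" using delta_fs_words[OF i] by blast
    then show ?thesis using i(1) by auto
  next
    assume "w \<in> fs_words (fsmap (hc_H (entA D1) (entA D2)) (tens (entA D1) F1 idop 0 (x, y) @ tens (entA D1) idop F2 1 (x, y)))"
    then obtain p where p: "w \<in> fs_words (hc_H (entA D1) (entA D2) p)" by (rule fs_words_fsmapE)
    obtain u v where "p = (u,v)" by force
    then have "\<exists>t. w = (1,1) # t" using H_fs_words_unit p by blast
    then show ?thesis by auto
  qed
qed

lemma anti_bdelta_in_span:
  fixes D1 :: "('c::field, 'a::ring_1) dga" and D2 :: "('c, 'b::ring_1) dga" and x :: "'a list" and y :: "'b list"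
  assumes D1: "is_dga D1" and D2: "is_dga D2"
    and xne: "x \<noteq> []" and yne: "y \<noteq> []" and Gx: "set x \<subseteq> homog D1" and Gy: "set y \<subseteq> homog D2"
  shows "lcf (hc_anti D1 D2 (hc_bdelta (entT D1 D2)) (hc_bdelta (entA D1)) (hc_bdelta (entA D2)) x y) \<in> module.span fscale (relT D1 D2)"
proof (rule lcf_in_span)
  let ?A = "hc_anti D1 D2 (hc_bdelta (entT D1 D2)) (hc_bdelta (entA D1)) (hc_bdelta (entA D2)) x y"
  fix w assume w: "w \<in> fs_words ?A" and nz: "lcf ?A w \<noteq> 0"
  have "has_entry zero_pair w"
  proof (cases "(1::'a) = 0 \<or> (1::'b) = 0")
    case True \<comment> \<open>then every element is zero, in particular every tensor factor\<close>
    have ne: "w \<noteq> []" by (rule anti_bdelta_fs_words_nonempty[OF w])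
    then obtain h t where wt0: "w = h # t" by (cases w) auto
    obtain a b where hab: "h = (a,b)" by force
    have wt: "w = (a,b) # t" using wt0 hab by simp
    from True have "a = 0 \<or> b = 0"
    proof
      assume "(1::'a) = 0" then show ?thesis using ring_one_eq_zero_all[of a] by simp
    next
      assume "(1::'b) = 0" then show ?thesis using ring_one_eq_zero_all[of b] by simp
    qed
    then show ?thesis using wt by (auto simp: has_entry_def)
  next
    case False
    then have o1: "(1::'a) \<noteq> 0" and o2: "(1::'b) \<noteq> 0" by auto
    have "eq_mod (has_entry zero_pair) ?A []" by (rule anti_bdelta_eq_mod_zero_pair[OF D1 D2 o1 o2 xne yne Gx Gy])
    then show ?thesis using nz by (auto simp: eq_mod_def)
  qed
  then show "lcf [(1, w)] \<in> module.span fscale (relT D1 D2)" by (rule zero_pair_in_span)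
qed

lemma B_after_H_degenerate:
  fixes D1 :: "('c::comm_ring_1, 'a::ring_1) dga" and D2 :: "('c, 'b::ring_1) dga"
  assumes w: "w \<in> fs_words (fsmap (hc_B (entT D1 D2)) (hc_H (entA D1) (entA D2) (x,y)))"
  shows "degenerate_word w"
proof -
  obtain v where v: "v \<in> fs_words (hc_H (entA D1) (entA D2) (x,y))" "w \<in> fs_words (hc_B (entT D1 D2) v)"
    using w by (rule fs_words_fsmapE)
  obtain t where vt: "v = (1,1) # t" using H_fs_words_unit[OF v(1)] by blast
  obtain v'' where v'': "mset v'' = mset v" "w = (1,1) # v'' \<or> w = last v'' # (1,1) # butlast v''"
    using B_fs_words[OF v(2)] vt by auto
  have "(1,1) \<in> set v''" using vt arg_cong[OF v''(1), of set_mset] by simp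
  then have "(1,1) \<in> set (tl w)" using v''(2) by auto
  then show ?thesis by (simp add: degenerate_word_def)
qed

lemma B_tensor_fs_words_unit:
  fixes D1 :: "('c::comm_ring_1, 'a::ring_1) dga" and D2 :: "('c, 'b::ring_1) dga" and x :: "'a list" and y :: "'b list"
  assumes xne: "x \<noteq> []" and yne: "y \<noteq> []"
    and p: "p \<in> fs_words (tens (entA D1) (hc_B (entA D1)) idop 0 (x, y) @ tens (entA D1) idop (hc_B (entA D2)) 1 (x, y))"
  shows "(1::'a) \<in> set (fst p) \<or> (1::'b) \<in> set (snd p)"
proof -
  from p consider "fst p \<in> fs_words (hc_B (entA D1) x)" | "snd p \<in> fs_words (hc_B (entA D2) y)"
    using fs_words_tens by fastforce
  then show ?thesis
  proof cases
    case 1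
    from B_fs_words[OF 1 xne] show ?thesis by auto
  next
    case 2
    from B_fs_words[OF 2 yne] show ?thesis by auto
  qed
qed

lemma anti_B_degenerate:
  fixes D1 :: "('c::field, 'a::ring_1) dga" and D2 :: "('c, 'b::ring_1) dga" and x :: "'a list" and y :: "'b list"
  assumes D1: "is_dga D1" and D2: "is_dga D2" and xne: "x \<noteq> []" and yne: "y \<noteq> []"
    and w: "w \<in> fs_words (hc_anti D1 D2 (hc_B (entT D1 D2)) (hc_B (entA D1)) (hc_B (entA D2)) x y)"
  shows "degenerate_word w"
proof -
  let ?E1 = "entA D1" and ?E2 = "entA D2" and ?ET = "entT D1 D2"
  from w consider "w \<in> fs_words (fsmap (hc_B ?ET) (hc_H ?E1 ?E2 (x,y)))"
    | "w \<in> fs_words (fsmap (hc_H ?E1 ?E2) (tens ?E1 (hc_B ?E1) idop 0 (x, y) @ tens ?E1 idop (hc_B ?E2) 1 (x, y)))"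
    by (auto simp: hc_anti_def)
  then show ?thesis
  proof cases
    case 1
    then show ?thesis by (rule B_after_H_degenerate)
  next
    case 2
    then obtain p where p: "p \<in> fs_words (tens ?E1 (hc_B ?E1) idop 0 (x, y) @ tens ?E1 idop (hc_B ?E2) 1 (x, y))"
        "w \<in> fs_words (hc_H ?E1 ?E2 p)" by (rule fs_words_fsmapE)
    then show ?thesis
      using H_degenerate[OF D1 D2, of "fst p" "snd p" w] B_tensor_fs_words_unit[OF xne yne p(1)] by simp
  qed
qed

lemma anti_B_in_span:
  fixes D1 :: "('c::field, 'a::ring_1) dga" and D2 :: "('c, 'b::ring_1) dga" and x :: "'a list" and y :: "'b list"
  assumes D1: "is_dga D1" and D2: "is_dga D2" and xne: "x \<noteq> []" and yne: "y \<noteq> []"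
  shows "lcf (hc_anti D1 D2 (hc_B (entT D1 D2)) (hc_B (entA D1)) (hc_B (entA D2)) x y) \<in> module.span fscale (relT D1 D2)"
  by (rule lcf_in_span) (rule degenerate_in_span[OF anti_B_degenerate[OF D1 D2 xne yne]])

lemma tens_append_left: "tens E1 (\<lambda>v. F v @ G v) Y pY (x,y) = tens E1 F Y pY (x,y) @ tens E1 G Y pY (x,y)"
  by (simp add: tens_def)

lemma lcf_tens_append_right: "lcf (tens E1 X (\<lambda>v. F v @ G v) pY (x,y)) w = lcf (tens E1 X F pY (x,y)) w + lcf (tens E1 X G pY (x,y)) w"
  unfolding tens_fs_tensor by (rule lcf_fs_tensor_append_right)

lemma lcf_anti_append:
  "lcf (hc_anti D1 D2 (\<lambda>w. F w @ G w) (\<lambda>w. F1 w @ G1 w) (\<lambda>w. F2 w @ G2 w) x y) w =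
   lcf (hc_anti D1 D2 F F1 F2 x y) w + lcf (hc_anti D1 D2 G G1 G2 x y) w"
proof -
  let ?H = "hc_H (entA D1) (entA D2)"
  have a: "lcf (fsmap ?H (tens (entA D1) idop (\<lambda>v. F2 v @ G2 v) 1 (x,y))) w =
      lcf (fsmap ?H (tens (entA D1) idop F2 1 (x,y) @ tens (entA D1) idop G2 1 (x,y))) w"
    by (rule lcf_fsmap_cong) (simp add: lcf_tens_append_right)
  show ?thesis unfolding hc_anti_def fsmap_append lcf_append lcf_fsmap_app tens_append_left a
    by (simp add: algebra_simps)
qed

lemma hc_b_eq: "hc_b E = (\<lambda>w. hc_bdelta E w @ hc_bmu E w)"
  by (rule ext) (simp add: hc_b_def)

lemma lcf_anti_b_minus_bmu:
  "lcf (hc_anti D1 D2 (hc_b (entT D1 D2)) (hc_b (entA D1)) (hc_b (entA D2)) x y @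
        fsneg (hc_anti D1 D2 (hc_bmu (entT D1 D2)) (hc_bmu (entA D1)) (hc_bmu (entA D2)) x y))
   = lcf (hc_anti D1 D2 (hc_bdelta (entT D1 D2)) (hc_bdelta (entA D1)) (hc_bdelta (entA D2)) x y)"
  by (rule ext) (simp add: hc_b_eq lcf_anti_append)

lemma nrm_eq_Nil: "nrm_eq D1 D2 L [] \<longleftrightarrow> lcf L \<in> module.span fscale (relT D1 D2)"
  by (simp add: nrm_eq_def fsneg_def)

theorem mainTheorem4:
  fixes D1 :: "('k::field_char_0, 'a::ring_1) dga" and D2 :: "('k, 'b::ring_1) dga"
    and x :: "'a list" and y :: "'b list"
  assumes "is_dga D1" and "is_dga D2"
    and "x \<noteq> []" and "y \<noteq> []"
    and "set x \<subseteq> homog D1" and "set y \<subseteq> homog D2"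
  shows "nrm_eq D1 D2
           (hc_anti D1 D2 (hc_bdelta (entT D1 D2)) (hc_bdelta (entA D1)) (hc_bdelta (entA D2)) x y) []
       \<and> nrm_eq D1 D2
           (hc_anti D1 D2 (hc_B (entT D1 D2)) (hc_B (entA D1)) (hc_B (entA D2)) x y) []
       \<and> nrm_eq D1 D2
           (hc_anti D1 D2 (hc_b (entT D1 D2)) (hc_b (entA D1)) (hc_b (entA D2)) x y)
           (hc_anti D1 D2 (hc_bmu (entT D1 D2)) (hc_bmu (entA D1)) (hc_bmu (entA D2)) x y)
       \<and> nrm_eq D1 D2
           (hc_anti D1 D2 (hc_B (entT D1 D2)) (hc_B (entA D1)) (hc_B (entA D2)) x y) []"
proof -
  note D1 = assms(1) and D2 = assms(2) and xne = assms(3) and yne = assms(4) and Gx = assms(5) and Gy = assms(6)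
  have bdelta: "nrm_eq D1 D2 (hc_anti D1 D2 (hc_bdelta (entT D1 D2)) (hc_bdelta (entA D1)) (hc_bdelta (entA D2)) x y) []"
    unfolding nrm_eq_Nil by (rule anti_bdelta_in_span[OF D1 D2 xne yne Gx Gy])
  have B: "nrm_eq D1 D2 (hc_anti D1 D2 (hc_B (entT D1 D2)) (hc_B (entA D1)) (hc_B (entA D2)) x y) []"
    unfolding nrm_eq_Nil by (rule anti_B_in_span[OF D1 D2 xne yne])
  have "nrm_eq D1 D2 (hc_anti D1 D2 (hc_b (entT D1 D2)) (hc_b (entA D1)) (hc_b (entA D2)) x y)
      (hc_anti D1 D2 (hc_bmu (entT D1 D2)) (hc_bmu (entA D1)) (hc_bmu (entA D2)) x y)"
    unfolding nrm_eq_def lcf_anti_b_minus_bmu by (rule anti_bdelta_in_span[OF D1 D2 xne yne Gx Gy])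
  with bdelta B show ?thesis by blast
qed

end
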